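(* Let $u$ and $v$ be two prime words such that $u<_{lex}v$. Then $u^\alpha v$ is a prime word for every ordinal $\alpha$.
   Context: $A$ is a finite alphabet with a linear order $<_A$. Words are sequences of letters indexed by countable ordinals; $x^\alpha$ is the concatenation of $\alpha$ copies of $x$. A prefix of $x$ is $x[0,\gamma)$, a suffix is $x[\gamma,|x|)$ ($0\le\gamma\le|x|$), proper if $0<\gamma<|x|$. Write $x<_{str}x'$ if there are letters $a<_Ab$ and words $y,z,z'$ with $x=yaz$, $x'=ybz'$; $x\le_{lex}x'$ iff $x$ is a prefix of $x'$ or $x<_{str}x'$; $<_{lex}$ is its strict version. A word $x$ is primitive if $x=y^\alpha$ implies $\alpha=1$ and $y=x$. A word $w$ is prime if it is primitive and every proper suffix $z$ of $w$ satisfies $w\le_{lex}z$. *)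

theory Defs
  imports Main "HOL-Library.Countable_Set"
begin

text \<open>A word is represented by a well-order r on its set of positions Field r (countable),
together with a labelling of positions. Two representations denote the same word iff
they are isomorphic (word_iso). The empty relation is the empty word.\<close>

type_synonym ('i, 'a) wrd = "'i rel \<times> ('i \<Rightarrow> 'a)"

definition word :: "('i, 'a) wrd \<Rightarrow> bool" where
  "word x \<longleftrightarrow> Well_order (fst x) \<and> countable (Field (fst x))"

definition word_iso :: "('i, 'a) wrd \<Rightarrow> ('j, 'a) wrd \<Rightarrow> bool" where
  "word_iso x y \<longleftrightarrow> (\<exists>h. bij_betw h (Field (fst x)) (Field (fst y))
     \<and> (\<forall>p\<in>Field (fst x). \<forall>q\<in>Field (fst x). (p, q) \<in> fst x \<longleftrightarrow> (h p, h q) \<in> fst y)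
     \<and> (\<forall>p\<in>Field (fst x). snd y (h p) = snd x p))"

definition wconc :: "('i, 'a) wrd \<Rightarrow> ('j, 'a) wrd \<Rightarrow> ('i + 'j, 'a) wrd" where
  "wconc x y =
     ({(Inl p, Inl q) | p q. (p, q) \<in> fst x}
      \<union> {(Inr p, Inr q) | p q. (p, q) \<in> fst y}
      \<union> {(Inl p, Inr q) | p q. p \<in> Field (fst x) \<and> q \<in> Field (fst y)},
      case_sum (snd x) (snd y))"

definition wletter :: "'a \<Rightarrow> (unit, 'a) wrd" where
  "wletter a = ({((), ())}, \<lambda>_. a)"

definition wpow :: "('i, 'a) wrd \<Rightarrow> 'o rel \<Rightarrow> ('o \<times> 'i, 'a) wrd" where
  "wpow x \<alpha> =
     ({((o1, p1), (o2, p2)) | o1 p1 o2 p2.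
         o1 \<in> Field \<alpha> \<and> o2 \<in> Field \<alpha> \<and> p1 \<in> Field (fst x) \<and> p2 \<in> Field (fst x) \<and>
         (((o1, o2) \<in> \<alpha> \<and> o1 \<noteq> o2) \<or> (o1 = o2 \<and> (p1, p2) \<in> fst x))},
      \<lambda>(o1, p1). snd x p1)"

definition wrestr :: "('i, 'a) wrd \<Rightarrow> 'i set \<Rightarrow> ('i, 'a) wrd" where
  "wrestr x S = (fst x \<inter> (S \<times> S), snd x)"

definition is_prefix :: "('i, 'a) wrd \<Rightarrow> ('j, 'a) wrd \<Rightarrow> bool" where
  "is_prefix x x' \<longleftrightarrow> word_iso x x' \<or>
     (\<exists>p\<in>Field (fst x'). word_iso x (wrestr x' {q. (q, p) \<in> fst x' \<and> q \<noteq> p}))"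

definition str_less :: "('i, 'a::linorder) wrd \<Rightarrow> ('j, 'a) wrd \<Rightarrow> bool" where
  "str_less x x' \<longleftrightarrow> (\<exists>(y :: (nat, 'a) wrd) (z :: (nat, 'a) wrd) (z' :: (nat, 'a) wrd) a b.
     word y \<and> word z \<and> word z' \<and> a < b \<and>
     word_iso x (wconc (wconc y (wletter a)) z) \<and>
     word_iso x' (wconc (wconc y (wletter b)) z'))"

definition lex_le :: "('i, 'a::linorder) wrd \<Rightarrow> ('j, 'a) wrd \<Rightarrow> bool" where
  "lex_le x x' \<longleftrightarrow> is_prefix x x' \<or> str_less x x'"

definition lex_less :: "('i, 'a::linorder) wrd \<Rightarrow> ('j, 'a) wrd \<Rightarrow> bool" where
  "lex_less x x' \<longleftrightarrow> lex_le x x' \<and> \<not> word_iso x x'"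

text \<open>Primitive: x = y^beta implies beta = 1 and y = x. Every countable word and countable
ordinal is represented (up to isomorphism) by a well-order on a subset of nat.\<close>
definition primitive :: "('i, 'a) wrd \<Rightarrow> bool" where
  "primitive x \<longleftrightarrow> (\<forall>(y :: (nat, 'a) wrd) (\<beta> :: nat rel).
     word y \<and> Well_order \<beta> \<and> word_iso x (wpow y \<beta>) \<longrightarrow>
       (\<exists>o1. Field \<beta> = {o1}) \<and> word_iso y x)"

text \<open>Proper suffixes: x[gamma,|x|) with 0 < gamma < |x|, i.e. starting at a
non-minimal position p.\<close>
definition prime_word :: "('i, 'a::linorder) wrd \<Rightarrow> bool" where
  "prime_word w \<longleftrightarrow> primitive w \<and>
     (\<forall>p\<in>Field (fst w). (\<exists>q. (q, p) \<in> fst w \<and> q \<noteq> p) \<longrightarrow>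
        lex_le w (wrestr w {q. (p, q) \<in> fst w}))"

end

theory Submission
  imports Defs
begin

text \<open>Words are compared through order embeddings of their position sets, which on countable words
  agrees with the definitions via nat-indexed words. Write W = u^\<alpha> v.

  The key fact is that u^\<epsilon> v is lexicographically below v for every nonempty \<epsilon>. If u is strictly
  below v this is immediate. Otherwise u is a proper prefix of v, and comparing v with u^|v| shows that
  v = u^\<mu> t with u strictly below t (v is not a power of u because it is primitive); then
  u^\<epsilon> v = u^(\<epsilon>+\<mu>) t, and removing leading blocks from a power of u in front of such a t can only make
  the word larger.

  A proper suffix of W starting inside v is at least v, hence at least W. A suffix starting at the
  beginning of a block is u^\<beta> v for a final segment \<beta> of \<alpha>, which is at least W by the key fact. A
  suffix starting inside a block begins with a proper suffix t of u, and u is at most t: either u is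
  strictly below t, and so is W, or u is a prefix of t, which forces t = u, and the suffix coincides
  with one starting at the beginning of a block.

  Finally, if W = y^\<beta> with \<beta> having at least two elements, then \<beta> has no largest element, for
  otherwise W would be below its last block y, which is a proper prefix of W. So the suffix V of y^\<beta>
  corresponding to v is followed by a full block starting some y^\<gamma>, a prefix of y^\<beta>; as V is below
  its suffix y^\<gamma> and y^\<beta> = W is below v = V, we get v = y^\<beta>, contradicting the primitivity of v.\<close>

section \<open>Well-orders and embeddings onto initial segments\<close>

lemma wo_refl: "Well_order r \<Longrightarrow> a \<in> Field r \<Longrightarrow> (a,a) \<in> r"
  by (meson wo_rel.REFL wo_rel_def refl_onD)

lemma wo_trans: "Well_order r \<Longrightarrow> (a,b) \<in> r \<Longrightarrow> (b,c) \<in> r \<Longrightarrow> (a,c) \<in> r"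
  using wo_rel.TRANS[of r] unfolding wo_rel_def trans_def by blast

lemma wo_antisym: "Well_order r \<Longrightarrow> (a,b) \<in> r \<Longrightarrow> (b,a) \<in> r \<Longrightarrow> a = b"
  using wo_rel.ANTISYM[of r] unfolding wo_rel_def antisym_def by blast

lemma wo_total: "Well_order r \<Longrightarrow> a \<in> Field r \<Longrightarrow> b \<in> Field r \<Longrightarrow> (a,b) \<in> r \<or> (b,a) \<in> r"
  using wo_rel.TOTALS[of r] unfolding wo_rel_def by blast

lemma wo_induct:
  assumes "Well_order r" and "\<And>a. (\<And>b. (b,a) \<in> r \<Longrightarrow> b \<noteq> a \<Longrightarrow> P b) \<Longrightarrow> P a"
  shows "P a"
  using wo_rel.well_order_induct[of r P] assms unfolding wo_rel_def by blast

lemma wo_min: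
  assumes "Well_order r" "S \<subseteq> Field r" "S \<noteq> {}"
  shows "\<exists>m\<in>S. \<forall>s\<in>S. (m,s) \<in> r"
  using wo_rel.minim_in[of r S] wo_rel.minim_least[of r S] assms unfolding wo_rel_def by blast

lemma wo_strict_mono_ge:
  assumes wo: "Well_order r" and hF: "\<And>a. a \<in> Field r \<Longrightarrow> h a \<in> Field r"
    and mono: "\<And>a b. (a,b) \<in> r \<Longrightarrow> a \<noteq> b \<Longrightarrow> (h a, h b) \<in> r \<and> h a \<noteq> h b"
    and a: "a \<in> Field r"
  shows "(a, h a) \<in> r"
proof (rule ccontr)
  assume nb: "(a, h a) \<notin> r"
  let ?S = "{a\<in>Field r. (a, h a) \<notin> r}"
  have "?S \<subseteq> Field r" "?S \<noteq> {}" using a nb by auto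
  then obtain m where m: "m \<in> ?S" "\<forall>s\<in>?S. (m,s) \<in> r" using wo_min[OF wo] by blast
  have hm: "h m \<in> Field r" using hF m by auto
  have "(h m, m) \<in> r" using m wo_total[OF wo hm] by auto
  moreover have "h m \<noteq> m" using m wo_refl[OF wo] by auto
  ultimately have "(h (h m), h m) \<in> r \<and> h (h m) \<noteq> h m" using mono by blast
  hence "h m \<in> ?S" using hm wo_antisym[OF wo] by blast
  hence "(m, h m) \<in> r" using m by blast
  with m show False by auto
qed

definition seg_emb :: "'i rel \<Rightarrow> 'j rel \<Rightarrow> 'i set \<Rightarrow> ('i \<Rightarrow> 'j) \<Rightarrow> bool" where
  "seg_emb r s A f \<longleftrightarrow> A \<subseteq> Field r \<and> (\<forall>a\<in>A. \<forall>b. (b,a) \<in> r \<longrightarrow> b \<in> A) \<and> f ` A \<subseteq> Field s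
     \<and> (\<forall>a\<in>A. \<forall>b\<in>A. (a,b) \<in> r \<longleftrightarrow> (f a, f b) \<in> s) \<and> (\<forall>a\<in>A. \<forall>c. (c, f a) \<in> s \<longrightarrow> c \<in> f ` A)"

lemma seg_embD:
  assumes "seg_emb r s A f"
  shows "A \<subseteq> Field r" "\<And>a b. a \<in> A \<Longrightarrow> (b,a) \<in> r \<Longrightarrow> b \<in> A" "\<And>a. a \<in> A \<Longrightarrow> f a \<in> Field s"
    "\<And>a b. a \<in> A \<Longrightarrow> b \<in> A \<Longrightarrow> (a,b) \<in> r \<longleftrightarrow> (f a, f b) \<in> s"
    "\<And>a c. a \<in> A \<Longrightarrow> (c, f a) \<in> s \<Longrightarrow> c \<in> f ` A"
  using assms unfolding seg_emb_def by blast+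

lemma seg_emb_inj:
  assumes "Well_order r" "seg_emb r s A f" "a \<in> A" "b \<in> A" "f a = f b"
  shows "a = b"
proof -
  have "a \<in> Field r" using assms(2,3) seg_embD(1) by blast
  hence "(a,a) \<in> r" using wo_refl[OF assms(1)] by blast
  hence "(f a, f a) \<in> s" using seg_embD(4)[OF assms(2) assms(3) assms(3)] by simp
  hence "(a,b) \<in> r" "(b,a) \<in> r" using assms(5) seg_embD(4)[OF assms(2) assms(3) assms(4)]  seg_embD(4)[OF assms(2) assms(4) assms(3)] by simp_all
  thus ?thesis using wo_antisym[OF assms(1)] by blast
qed

lemma seg_emb_comp:
  assumes "seg_emb r s A f" "seg_emb s t B g" "f ` A \<subseteq> B"
  shows "seg_emb r t A (g \<circ> f)"
  unfolding seg_emb_def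
proof (intro conjI ballI allI impI)
  show "A \<subseteq> Field r" using seg_embD(1)[OF assms(1)] .
  show "\<And>a b. a \<in> A \<Longrightarrow> (b, a) \<in> r \<Longrightarrow> b \<in> A" using seg_embD(2)[OF assms(1)] by blast
  show "(g \<circ> f) ` A \<subseteq> Field t" using seg_embD(3)[OF assms(2)] assms(3) by auto
  fix a assume a: "a \<in> A"
  { fix b assume b: "b \<in> A"
    have "f a \<in> B" "f b \<in> B" using a b assms(3) by auto
    show "((a, b) \<in> r) = (((g \<circ> f) a, (g \<circ> f) b) \<in> t)"
      using seg_embD(4)[OF assms(1) a b] seg_embD(4)[OF assms(2) \<open>f a \<in> B\<close> \<open>f b \<in> B\<close>] by simp }
  { fix c assume c: "(c, (g \<circ> f) a) \<in> t"
    have fa: "f a \<in> B" using a assms(3) by auto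
    then obtain b where b: "b \<in> B" "c = g b" using seg_embD(5)[OF assms(2) fa] c by auto
    hence "(b, f a) \<in> s" using seg_embD(4)[OF assms(2) b(1) fa] c by auto
    then obtain a' where "a' \<in> A" "b = f a'" using seg_embD(5)[OF assms(1) a] by auto
    thus "c \<in> (g \<circ> f) ` A" using b by auto }
qed

lemma seg_emb_restr:
  assumes "seg_emb r s A f" "A' \<subseteq> A" "\<And>a b. a \<in> A' \<Longrightarrow> (b,a) \<in> r \<Longrightarrow> b \<in> A'"
  shows "seg_emb r s A' f"
  unfolding seg_emb_def
proof (intro conjI ballI allI impI)
  show "A' \<subseteq> Field r" using seg_embD(1)[OF assms(1)] assms(2) by blast
  show "\<And>a b. a \<in> A' \<Longrightarrow> (b, a) \<in> r \<Longrightarrow> b \<in> A'" using assms(3) by blast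
  show "f ` A' \<subseteq> Field s" using seg_embD(3)[OF assms(1)] assms(2) by blast
  show "\<And>a b. a \<in> A' \<Longrightarrow> b \<in> A' \<Longrightarrow> ((a, b) \<in> r) = ((f a, f b) \<in> s)"
    using seg_embD(4)[OF assms(1)] assms(2) by (meson subsetD)
  fix a c assume a: "a \<in> A'" and c: "(c, f a) \<in> s"
  have aA: "a \<in> A" using a assms(2) by blast
  then obtain b where b: "b \<in> A" "c = f b" using seg_embD(5)[OF assms(1) aA c] by blast
  hence "(b,a) \<in> r" using seg_embD(4)[OF assms(1) b(1) aA] c by simp
  thus "c \<in> f ` A'" using assms(3) a b by blast
qed

lemma seg_emb_id:
  assumes "A \<subseteq> Field r" "\<And>a b. a \<in> A \<Longrightarrow> (b,a) \<in> r \<Longrightarrow> b \<in> A"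
  shows "seg_emb r r A id"
  using assms unfolding seg_emb_def by auto

lemma seg_emb_unique:
  assumes wr: "Well_order r" and ws: "Well_order s" and f: "seg_emb r s A f" and g: "seg_emb r s A g"
    and aA: "a \<in> A"
  shows "f a = g a"
proof -
  have "a \<in> A \<longrightarrow> f a = g a"
  proof (rule wo_induct[OF wr])
    fix a assume IH0: "\<And>b. (b,a) \<in> r \<Longrightarrow> b \<noteq> a \<Longrightarrow> b \<in> A \<longrightarrow> f b = g b"
    show "a \<in> A \<longrightarrow> f a = g a"
    proof
      assume aA: "a \<in> A"
      have IH: "\<And>b. (b,a) \<in> r \<Longrightarrow> b \<noteq> a \<Longrightarrow> f b = g b"
        using IH0 seg_embD(2)[OF f aA] by metis
      show "f a = g a"
      proof (rule ccontr)
        assume ne: "f a \<noteq> g a"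
        have "f a \<in> Field s" "g a \<in> Field s" using seg_embD(3)[OF f aA] seg_embD(3)[OF g aA] by auto
        then consider "(f a, g a) \<in> s" | "(g a, f a) \<in> s" using wo_total[OF ws] by blast
        thus False
        proof cases
          case 1
          then obtain b where b: "b \<in> A" "f a = g b" using seg_embD(5)[OF g aA] by blast
          hence "(b,a) \<in> r" using seg_embD(4)[OF g b(1) aA] 1 by simp
          moreover have "b \<noteq> a" using b ne by blast
          ultimately have "f b = f a" using IH b by simp
          hence "b = a" using seg_emb_inj[OF wr f b(1) aA] by blast
          thus False using \<open>b \<noteq> a\<close> by blast
        next
          case 2
          then obtain b where b: "b \<in> A" "g a = f b" using seg_embD(5)[OF f aA] by blast
          hence "(b,a) \<in> r" using seg_embD(4)[OF f b(1) aA] 2 by simp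
          moreover have "b \<noteq> a" using b ne by auto
          ultimately have "g b = g a" using IH b by simp
          hence "b = a" using seg_emb_inj[OF wr g b(1) aA] by blast
          thus False using \<open>b \<noteq> a\<close> by blast
        qed
      qed
    qed
  qed
  thus ?thesis using aA by blast
qed

lemma under_closed: "Well_order r \<Longrightarrow> a \<in> under r p \<Longrightarrow> (b,a) \<in> r \<Longrightarrow> b \<in> under r p"
  unfolding under_def by (simp add: wo_trans[of r b a p])
lemma under_self: "Well_order r \<Longrightarrow> p \<in> Field r \<Longrightarrow> p \<in> under r p"
  unfolding under_def by (simp add: wo_refl)
lemma Field_closed: "a \<in> Field r \<Longrightarrow> (b,a) \<in> r \<Longrightarrow> b \<in> Field r"
  unfolding Field_def by blast

lemma underS_under: "a \<in> underS r p \<Longrightarrow> a \<in> under r p"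
  unfolding under_def underS_def by blast

lemma seg_emb_under_image:
  assumes f: "seg_emb r s A f" and p: "p \<in> A"
  shows "f ` under r p = under s (f p)"
proof
  show "f ` under r p \<subseteq> under s (f p)"
  proof
    fix c assume "c \<in> f ` under r p"
    then obtain a where a: "(a,p) \<in> r" "c = f a" unfolding under_def by blast
    have aA: "a \<in> A" using seg_embD(2)[OF f p a(1)] .
    show "c \<in> under s (f p)" using seg_embD(4)[OF f aA p] a unfolding under_def by simp
  qed
  show "under s (f p) \<subseteq> f ` under r p"
  proof
    fix c assume c: "c \<in> under s (f p)"
    then obtain a where a: "a \<in> A" "c = f a" using seg_embD(5)[OF f p] unfolding under_def by blast
    hence "(a,p) \<in> r" using seg_embD(4)[OF f a(1) p] c unfolding under_def by simp
    thus "c \<in> f ` under r p" using a unfolding under_def by blast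
  qed
qed

lemma seg_emb_underS:
  assumes wr: "Well_order r" and f: "seg_emb r s A f" and p: "p \<in> A" and a: "a \<in> underS r p"
  shows "f a \<in> underS s (f p)"
proof -
  have ap: "(a,p) \<in> r" "a \<noteq> p" using a unfolding underS_def by auto
  have aA: "a \<in> A" using seg_embD(2)[OF f p ap(1)] .
  have "(f a, f p) \<in> s" using seg_embD(4)[OF f aA p] ap by simp
  moreover have "f a \<noteq> f p" using seg_emb_inj[OF wr f aA p] ap by auto
  ultimately show ?thesis unfolding underS_def by blast
qed

lemma seg_emb_under_restr:
  assumes wr: "Well_order r" and f: "seg_emb r s A f" and p: "p \<in> A"
  shows "seg_emb r s (under r p) f"
proof (rule seg_emb_restr[OF f])
  show "under r p \<subseteq> A" using seg_embD(2)[OF f p] unfolding under_def by blast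
  show "\<And>a b. a \<in> under r p \<Longrightarrow> (b, a) \<in> r \<Longrightarrow> b \<in> under r p"
    using under_closed[OF wr] by metis
qed

lemma seg_emb_underS_image:
  assumes wx: "Well_order r" and g: "seg_emb r s A g" and p: "p \<in> A"
  shows "g ` underS r p = underS s (g p)"
proof
  show "g ` underS r p \<subseteq> underS s (g p)"
  proof
    fix c assume "c \<in> g ` underS r p"
    then obtain a where a: "a \<in> underS r p" "c = g a" by blast
    show "c \<in> underS s (g p)" using seg_emb_underS[OF wx g p a(1)] a(2) by simp
  qed
  show "underS s (g p) \<subseteq> g ` underS r p"
  proof
    fix c assume c: "c \<in> underS s (g p)"
    hence "c \<in> under s (g p)" by (rule underS_under)
    hence "c \<in> g ` under r p" using seg_emb_under_image[OF g p] by simp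
    then obtain a where a: "a \<in> under r p" "c = g a" by blast
    have "a \<noteq> p" using a c unfolding underS_def by auto
    thus "c \<in> g ` underS r p" using a unfolding under_def underS_def by blast
  qed
qed

lemma seg_emb_image_closed:
  assumes e: "seg_emb r s A e" and c: "c \<in> e ` A" and d: "(d, c) \<in> s"
  shows "d \<in> e ` A"
  using c d seg_embD(5)[OF e] by blast

lemma seg_embI:
  assumes "\<And>a. a \<in> Field r \<Longrightarrow> f a \<in> Field s"
    "\<And>a b. a \<in> Field r \<Longrightarrow> b \<in> Field r \<Longrightarrow> (a,b) \<in> r \<longleftrightarrow> (f a, f b) \<in> s"
    "\<And>a c. a \<in> Field r \<Longrightarrow> (c, f a) \<in> s \<Longrightarrow> c \<in> f ` Field r"
  shows "seg_emb r s (Field r) f"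
  unfolding seg_emb_def
proof (intro conjI ballI allI impI)
  show "\<And>a b. a \<in> Field r \<Longrightarrow> (b, a) \<in> r \<Longrightarrow> b \<in> Field r" by (rule Field_closed)
qed (use assms in auto)

lemma seg_emb_inv:
  assumes wr: "Well_order r" and f: "seg_emb r s A f"
  shows "seg_emb s r (f ` A) (inv_into A f)"
  unfolding seg_emb_def
proof (intro conjI ballI allI impI)
  have inj: "inj_on f A" unfolding inj_on_def using seg_emb_inj[OF wr f] by blast
  show "f ` A \<subseteq> Field s" using seg_embD(3)[OF f] by blast
  show "\<And>a b. a \<in> f ` A \<Longrightarrow> (b, a) \<in> s \<Longrightarrow> b \<in> f ` A"
    using seg_embD(5)[OF f] by blast
  show "inv_into A f ` f ` A \<subseteq> Field r" using seg_embD(1)[OF f] inj by auto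
  fix a assume a: "a \<in> f ` A"
  then obtain a0 where a0: "a0 \<in> A" "a = f a0" by blast
  have ia: "inv_into A f a = a0" using a0 inj by (simp add: inv_into_f_f)
  { fix b assume b: "b \<in> f ` A"
    then obtain b0 where b0: "b0 \<in> A" "b = f b0" by blast
    have ib: "inv_into A f b = b0" using b0 inj by (simp add: inv_into_f_f)
    show "((a, b) \<in> s) = ((inv_into A f a, inv_into A f b) \<in> r)"
      using ia ib a0 b0 seg_embD(4)[OF f a0(1) b0(1)] by simp }
  { fix c assume c: "(c, inv_into A f a) \<in> r"
    hence cA: "c \<in> A" using ia seg_embD(2)[OF f a0(1)] by simp
    have "inv_into A f (f c) = c" using cA inj by (simp add: inv_into_f_f)
    thus "c \<in> inv_into A f ` f ` A" using cA by force }
qed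

lemma seg_emb_of_embed:
  assumes wr: "Well_order r" and ws: "Well_order s" and e: "embed r s f"
  shows "seg_emb r s (Field r) f"
proof -
  have c: "compat r s f" and i: "inj_on f (Field r)" and o: "wo_rel.ofilter s (f ` Field r)"
    using embed_iff_compat_inj_on_ofilter[OF wr ws] e by blast+
  show ?thesis
  proof (rule seg_embI)
    fix a assume a: "a \<in> Field r"
    show "f a \<in> Field s" using embed_in_Field[OF e a] .
  next
    fix a b assume a: "a \<in> Field r" and b: "b \<in> Field r"
    show "(a,b) \<in> r \<longleftrightarrow> (f a, f b) \<in> s"
    proof
      assume "(a,b) \<in> r" thus "(f a, f b) \<in> s" using c unfolding compat_def by blast
    next
      assume h: "(f a, f b) \<in> s"
      show "(a,b) \<in> r"
      proof (rule ccontr)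
        assume "(a,b) \<notin> r"
        hence "(b,a) \<in> r" using wo_total[OF wr a b] by blast
        hence "(f b, f a) \<in> s" using c unfolding compat_def by blast
        hence "f a = f b" using h wo_antisym[OF ws] by blast
        hence "a = b" using i a b unfolding inj_on_def by blast
        thus False using \<open>(a,b) \<notin> r\<close> wo_refl[OF wr a] by blast
      qed
    qed
  next
    fix a c assume a: "a \<in> Field r" and h: "(c, f a) \<in> s"
    have "f a \<in> f ` Field r" using a by blast
    hence "under s (f a) \<subseteq> f ` Field r" using o unfolding wo_rel.ofilter_def[OF ws[unfolded wo_rel_def[symmetric]]] by blast
    thus "c \<in> f ` Field r" using h unfolding under_def by blast
  qed
qed

section \<open>Comparing words position by position\<close>

abbreviation wo :: "('i,'a) wrd \<Rightarrow> bool" where "wo x \<equiv> Well_order (fst x)"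

text \<open>Versions of \<open>is_prefix\<close>, \<open>str_less\<close> and \<open>lex_le\<close> phrased by order embeddings between
  the position sets themselves, so that they compare words over arbitrary index types without the
  detour through nat-indexed words; \<open>lex_le_iff_wlex_le\<close> shows that they agree on countable words.\<close>

definition wprefix :: "('i,'a) wrd \<Rightarrow> ('j,'a) wrd \<Rightarrow> bool" where
  "wprefix x y \<longleftrightarrow> (\<exists>f. seg_emb (fst x) (fst y) (Field (fst x)) f \<and> (\<forall>a\<in>Field (fst x). snd y (f a) = snd x a))"

definition wstr_less :: "('i,'a::linorder) wrd \<Rightarrow> ('j,'a) wrd \<Rightarrow> bool" where
  "wstr_less x y \<longleftrightarrow> (\<exists>p\<in>Field (fst x). \<exists>f. seg_emb (fst x) (fst y) (under (fst x) p) f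
      \<and> (\<forall>a\<in>underS (fst x) p. snd y (f a) = snd x a) \<and> snd x p < snd y (f p))"

definition wlex_le :: "('i,'a::linorder) wrd \<Rightarrow> ('j,'a) wrd \<Rightarrow> bool" where
  "wlex_le x y \<longleftrightarrow> wprefix x y \<or> wstr_less x y"

lemma seg_emb_image_eq_underS:
  assumes wy: "wo y" and g: "seg_emb (fst x) (fst y) (Field (fst x)) g"
    and c: "c \<in> Field (fst y) - g ` Field (fst x)" and cmin: "\<And>d. d \<in> Field (fst y) - g ` Field (fst x) \<Longrightarrow> (c,d) \<in> fst y"
  shows "g ` Field (fst x) = underS (fst y) c"
proof
  show "g ` Field (fst x) \<subseteq> underS (fst y) c"
  proof
    fix a assume a: "a \<in> g ` Field (fst x)"
    have aF: "a \<in> Field (fst y)" using a seg_embD(3)[OF g] by blast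
    have "(c,a) \<notin> fst y" using seg_emb_image_closed[OF g a] c by blast
    hence "(a,c) \<in> fst y" using wo_total[OF wy aF] c by blast
    moreover have "a \<noteq> c" using a c by blast
    ultimately show "a \<in> underS (fst y) c" unfolding underS_def by blast
  qed
  show "underS (fst y) c \<subseteq> g ` Field (fst x)"
  proof
    fix d assume d: "d \<in> underS (fst y) c"
    have dF: "d \<in> Field (fst y)" using d unfolding underS_def by (auto intro: FieldI1)
    show "d \<in> g ` Field (fst x)"
    proof (rule ccontr)
      assume "d \<notin> g ` Field (fst x)"
      hence "(c,d) \<in> fst y" using cmin dF by blast
      thus False using d wo_antisym[OF wy] unfolding underS_def by blast
    qed
  qed
qed

lemma seg_emb_not_onto:
  assumes wy: "wo y" and g: "seg_emb (fst x) (fst y) (Field (fst x)) g"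
    and ns: "g ` Field (fst x) \<noteq> Field (fst y)"
  obtains c where "c \<in> Field (fst y)" "c \<notin> g ` Field (fst x)" "g ` Field (fst x) = underS (fst y) c"
proof -
  let ?C = "Field (fst y) - g ` Field (fst x)"
  have "g ` Field (fst x) \<subseteq> Field (fst y)" using seg_embD(3)[OF g] by blast
  hence C: "?C \<noteq> {}" using ns by (metis Diff_eq_empty_iff subset_antisym)
  obtain c where c: "c \<in> ?C" "\<forall>d\<in>?C. (c,d) \<in> fst y" using wo_min[OF wy Diff_subset C] by blast
  have img: "g ` Field (fst x) = underS (fst y) c"
    by (rule seg_emb_image_eq_underS[OF wy g c(1)]) (use c(2) in blast)
  from c(1) have "c \<in> Field (fst y)" "c \<notin> g ` Field (fst x)" by blast+
  thus ?thesis by (rule that[OF _ _ img])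
qed

lemma word_isoI:
  assumes "bij_betw h (Field (fst x)) (Field (fst y))"
    "\<And>p q. p \<in> Field (fst x) \<Longrightarrow> q \<in> Field (fst x) \<Longrightarrow> (p, q) \<in> fst x \<longleftrightarrow> (h p, h q) \<in> fst y"
    "\<And>p. p \<in> Field (fst x) \<Longrightarrow> snd y (h p) = snd x p"
  shows "word_iso x y"
  using assms unfolding word_iso_def by blast

lemma word_iso_refl: "word_iso x x"
  by (rule word_isoI[of id]) auto

lemma word_iso_sym:
  assumes "word_iso x y" shows "word_iso y x"
proof -
  obtain h where h1: "bij_betw h (Field (fst x)) (Field (fst y))"
    and h2: "\<forall>p\<in>Field (fst x). \<forall>q\<in>Field (fst x). (p, q) \<in> fst x \<longleftrightarrow> (h p, h q) \<in> fst y"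
    and h3: "\<forall>p\<in>Field (fst x). snd y (h p) = snd x p" using assms unfolding word_iso_def by blast
  note h = h1 h2[rule_format] h3[rule_format]
  let ?g = "inv_into (Field (fst x)) h"
  have g: "bij_betw ?g (Field (fst y)) (Field (fst x))" using h(1) by (rule bij_betw_inv_into)
  have gh: "\<And>q. q \<in> Field (fst y) \<Longrightarrow> h (?g q) = q" using h(1)
    by (simp add: bij_betw_inv_into_right)
  show ?thesis
  proof (rule word_isoI[OF g])
    fix p q assume p: "p \<in> Field (fst y)" and q: "q \<in> Field (fst y)"
    have gp: "?g p \<in> Field (fst x)" using g p bij_betwE by blast
    have gq: "?g q \<in> Field (fst x)" using g q bij_betwE by blast
    show "(p, q) \<in> fst y \<longleftrightarrow> (?g p, ?g q) \<in> fst x" using h(2)[OF gp gq] gh[OF p] gh[OF q] by simp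
  next
    fix p assume p: "p \<in> Field (fst y)"
    have gp: "?g p \<in> Field (fst x)" using g p bij_betwE by blast
    show "snd x (?g p) = snd y p" using h(3)[OF gp] gh[OF p] by simp
  qed
qed

lemma word_iso_trans:
  assumes "word_iso x y" "word_iso y z" shows "word_iso x z"
proof -
  obtain h where h1: "bij_betw h (Field (fst x)) (Field (fst y))"
    and h2: "\<forall>p\<in>Field (fst x). \<forall>q\<in>Field (fst x). (p, q) \<in> fst x \<longleftrightarrow> (h p, h q) \<in> fst y"
    and h3: "\<forall>p\<in>Field (fst x). snd y (h p) = snd x p" using assms(1) unfolding word_iso_def by blast
  note h = h1 h2[rule_format] h3[rule_format]
  obtain g where g1: "bij_betw g (Field (fst y)) (Field (fst z))"
    and g2: "\<forall>p\<in>Field (fst y). \<forall>q\<in>Field (fst y). (p, q) \<in> fst y \<longleftrightarrow> (g p, g q) \<in> fst z"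
    and g3: "\<forall>p\<in>Field (fst y). snd z (g p) = snd y p" using assms(2) unfolding word_iso_def by blast
  note g = g1 g2[rule_format] g3[rule_format]
  show ?thesis
  proof (rule word_isoI[of "g \<circ> h"])
    show "bij_betw (g \<circ> h) (Field (fst x)) (Field (fst z))" using h(1) g(1) by (rule bij_betw_trans)
  next
    fix p q assume p: "p \<in> Field (fst x)" and q: "q \<in> Field (fst x)"
    have hp: "h p \<in> Field (fst y)" using h(1) p bij_betwE by blast
    have hq: "h q \<in> Field (fst y)" using h(1) q bij_betwE by blast
    show "(p, q) \<in> fst x \<longleftrightarrow> ((g \<circ> h) p, (g \<circ> h) q) \<in> fst z" using h(2)[OF p q] g(2)[OF hp hq] by simp
  next
    fix p assume p: "p \<in> Field (fst x)"
    have hp: "h p \<in> Field (fst y)" using h(1) p bij_betwE by blast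
    show "snd z ((g \<circ> h) p) = snd x p" using h(3)[OF p] g(3)[OF hp] by simp
  qed
qed

lemma word_iso_wprefix:
  assumes "word_iso x y" shows "wprefix x y"
proof -
  obtain h where h1: "bij_betw h (Field (fst x)) (Field (fst y))"
    and h2: "\<forall>p\<in>Field (fst x). \<forall>q\<in>Field (fst x). (p, q) \<in> fst x \<longleftrightarrow> (h p, h q) \<in> fst y"
    and h3: "\<forall>p\<in>Field (fst x). snd y (h p) = snd x p" using assms(1) unfolding word_iso_def by blast
  note h = h1 h2[rule_format] h3[rule_format]
  have "seg_emb (fst x) (fst y) (Field (fst x)) h"
  proof (rule seg_embI)
    show "\<And>a. a \<in> Field (fst x) \<Longrightarrow> h a \<in> Field (fst y)" using h(1) bij_betwE by blast
    show "\<And>a b. a \<in> Field (fst x) \<Longrightarrow> b \<in> Field (fst x) \<Longrightarrow> ((a, b) \<in> fst x) = ((h a, h b) \<in> fst y)"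
      using h(2) by blast
    fix a c assume a: "a \<in> Field (fst x)" and c: "(c, h a) \<in> fst y"
    have "h a \<in> Field (fst y)" using h(1) a bij_betwE by blast
    hence "c \<in> Field (fst y)" using Field_closed[OF _ c] by blast
    thus "c \<in> h ` Field (fst x)" using h(1) unfolding bij_betw_def by blast
  qed
  thus ?thesis unfolding wprefix_def using h(3) by blast
qed

lemma wprefix_refl: "wprefix x x" using word_iso_wprefix[OF word_iso_refl] .

lemma wprefix_trans:
  assumes "wprefix x y" "wprefix y z" shows "wprefix x z"
proof -
  obtain f where f: "seg_emb (fst x) (fst y) (Field (fst x)) f" "\<forall>a\<in>Field (fst x). snd y (f a) = snd x a"
    using assms(1) unfolding wprefix_def by blast
  obtain g where g: "seg_emb (fst y) (fst z) (Field (fst y)) g" "\<forall>a\<in>Field (fst y). snd z (g a) = snd y a"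
    using assms(2) unfolding wprefix_def by blast
  have sub: "f ` Field (fst x) \<subseteq> Field (fst y)" using seg_embD(3)[OF f(1)] by blast
  have "seg_emb (fst x) (fst z) (Field (fst x)) (g \<circ> f)" by (rule seg_emb_comp[OF f(1) g(1) sub])
  moreover have "\<forall>a\<in>Field (fst x). snd z ((g \<circ> f) a) = snd x a" using f(2) g(2) sub by auto
  ultimately show ?thesis unfolding wprefix_def by blast
qed

lemma wprefix_antisym:
  assumes wx: "wo x" and wy: "wo y" and "wprefix x y" "wprefix y x" shows "word_iso x y"
proof -
  obtain f where f: "seg_emb (fst x) (fst y) (Field (fst x)) f" "\<forall>a\<in>Field (fst x). snd y (f a) = snd x a"
    using assms(3) unfolding wprefix_def by blast
  obtain g where g: "seg_emb (fst y) (fst x) (Field (fst y)) g" "\<forall>a\<in>Field (fst y). snd x (g a) = snd y a"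
    using assms(4) unfolding wprefix_def by blast
  have sf: "f ` Field (fst x) \<subseteq> Field (fst y)" using seg_embD(3)[OF f(1)] by blast
  have sg: "g ` Field (fst y) \<subseteq> Field (fst x)" using seg_embD(3)[OF g(1)] by blast
  have gf: "seg_emb (fst x) (fst x) (Field (fst x)) (g \<circ> f)" by (rule seg_emb_comp[OF f(1) g(1) sf])
  have fg: "seg_emb (fst y) (fst y) (Field (fst y)) (f \<circ> g)" by (rule seg_emb_comp[OF g(1) f(1) sg])
  have idx: "seg_emb (fst x) (fst x) (Field (fst x)) id" by (rule seg_emb_id) (auto dest: Field_closed)
  have idy: "seg_emb (fst y) (fst y) (Field (fst y)) id" by (rule seg_emb_id) (auto dest: Field_closed)
  have gf_id: "\<And>a. a \<in> Field (fst x) \<Longrightarrow> g (f a) = a"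
    using seg_emb_unique[OF wx wx gf idx] by simp
  have fg_id: "\<And>a. a \<in> Field (fst y) \<Longrightarrow> f (g a) = a"
    using seg_emb_unique[OF wy wy fg idy] by simp
  have bij: "bij_betw f (Field (fst x)) (Field (fst y))"
    using sf sg gf_id fg_id by (intro bij_betw_byWitness[of _ g]) auto
  show ?thesis
    by (rule word_isoI[OF bij]) (use seg_embD(4)[OF f(1)] f(2) in auto)
qed

lemma wstr_lessE:
  assumes "wstr_less x y"
  obtains p f where "p \<in> Field (fst x)" "seg_emb (fst x) (fst y) (under (fst x) p) f"
    "\<And>a. a \<in> underS (fst x) p \<Longrightarrow> snd y (f a) = snd x a" "snd x p < snd y (f p)"
  using assms unfolding wstr_less_def by blast

lemma wstr_lessI:
  assumes "p \<in> Field (fst x)" "seg_emb (fst x) (fst y) (under (fst x) p) f"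
    "\<And>a. a \<in> underS (fst x) p \<Longrightarrow> snd y (f a) = snd x a" "snd x p < snd y (f p)"
  shows "wstr_less x y"
  using assms unfolding wstr_less_def by blast

lemma wstr_less_wprefix_right:
  assumes wx: "wo x" and s: "wstr_less x y" and p: "wprefix y z" shows "wstr_less x z"
proof -
  obtain p f where pf: "p \<in> Field (fst x)" "seg_emb (fst x) (fst y) (under (fst x) p) f"
    "\<And>a. a \<in> underS (fst x) p \<Longrightarrow> snd y (f a) = snd x a" "snd x p < snd y (f p)"
    using wstr_lessE[OF s] by blast
  obtain g where g: "seg_emb (fst y) (fst z) (Field (fst y)) g" "\<forall>a\<in>Field (fst y). snd z (g a) = snd y a"
    using p unfolding wprefix_def by blast
  have sub: "f ` under (fst x) p \<subseteq> Field (fst y)" using seg_embD(3)[OF pf(2)] by blast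
  have pu: "p \<in> under (fst x) p" using under_self[OF wx pf(1)] .
  show ?thesis
  proof (rule wstr_lessI[OF pf(1) seg_emb_comp[OF pf(2) g(1) sub]])
    fix a assume a: "a \<in> underS (fst x) p"
    hence "a \<in> under (fst x) p" by (rule underS_under)
    thus "snd z ((g \<circ> f) a) = snd x a" using pf(3)[OF a] g(2) sub by auto
  next
    show "snd x p < snd z ((g \<circ> f) p)" using pf(4) g(2) sub pu by auto
  qed
qed

lemma wprefix_wstr_less_left:
  assumes wx: "wo x" and wx': "wo x'" and pr: "wprefix x x'" and s: "wstr_less x y" shows "wstr_less x' y"
proof -
  obtain p f where pf: "p \<in> Field (fst x)" "seg_emb (fst x) (fst y) (under (fst x) p) f"
    "\<And>a. a \<in> underS (fst x) p \<Longrightarrow> snd y (f a) = snd x a" "snd x p < snd y (f p)"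
    using wstr_lessE[OF s] by blast
  obtain g where g: "seg_emb (fst x) (fst x') (Field (fst x)) g" "\<forall>a\<in>Field (fst x). snd x' (g a) = snd x a"
    using pr unfolding wprefix_def by blast
  let ?U = "under (fst x) p"
  have gU: "seg_emb (fst x) (fst x') ?U g"
    by (rule seg_emb_restr[OF g(1) under_Field]) (use under_closed[OF wx, of _ p] in metis)
  have gi: "seg_emb (fst x') (fst x) (g ` ?U) (inv_into ?U g)" by (rule seg_emb_inv[OF wx gU])
  have pu: "p \<in> ?U" using under_self[OF wx pf(1)] .
  have eqU: "g ` ?U = under (fst x') (g p)"
  proof
    show "g ` ?U \<subseteq> under (fst x') (g p)"
      using seg_embD(4)[OF gU _ pu] unfolding under_def by blast
    show "under (fst x') (g p) \<subseteq> g ` ?U"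
      using seg_embD(5)[OF gU pu] unfolding under_def by blast
  qed
  have inj: "inj_on g ?U" unfolding inj_on_def using seg_emb_inj[OF wx gU] by blast
  have ig: "\<And>a. a \<in> ?U \<Longrightarrow> inv_into ?U g (g a) = a" using inj by (simp add: inv_into_f_f)
  have sub: "inv_into ?U g ` g ` ?U \<subseteq> ?U" using ig by auto
  have h: "seg_emb (fst x') (fst y) (g ` ?U) (f \<circ> inv_into ?U g)" by (rule seg_emb_comp[OF gi pf(2) sub])
  have gp: "g p \<in> Field (fst x')" using seg_embD(3)[OF g(1) pf(1)] .
  show ?thesis
  proof (rule wstr_lessI[OF gp h[unfolded eqU]])
    fix a' assume a': "a' \<in> underS (fst x') (g p)"
    hence "a' \<in> g ` ?U" using eqU underS_under[OF a'] by simp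
    then obtain a where a: "a \<in> ?U" "a' = g a" by blast
    have "a \<noteq> p" using a a' unfolding underS_def by auto
    hence "a \<in> underS (fst x) p" using a unfolding under_def underS_def by blast
    moreover have "a \<in> Field (fst x)" using under_Field[of "fst x" p] a(1) by blast
    ultimately show "snd y ((f \<circ> inv_into ?U g) a') = snd x' a'" using pf(3) g(2) a ig by auto
  next
    show "snd x' (g p) < snd y ((f \<circ> inv_into ?U g) (g p))" using pf(4) g(2) pf(1) ig pu by auto
  qed
qed

lemma wprefix_imp_not_wstr_less:
  assumes wx: "wo x" and wy: "wo y" and pr: "wprefix x y" and s: "wstr_less x y" shows False
proof -
  obtain p f where pf: "p \<in> Field (fst x)" "seg_emb (fst x) (fst y) (under (fst x) p) f"
    "\<And>a. a \<in> underS (fst x) p \<Longrightarrow> snd y (f a) = snd x a" "snd x p < snd y (f p)"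
    using wstr_lessE[OF s] by blast
  obtain g where g: "seg_emb (fst x) (fst y) (Field (fst x)) g" "\<forall>a\<in>Field (fst x). snd y (g a) = snd x a"
    using pr unfolding wprefix_def by blast
  have gU: "seg_emb (fst x) (fst y) (under (fst x) p) g"
    by (rule seg_emb_restr[OF g(1) under_Field]) (use under_closed[OF wx, of _ p] in metis)
  have pu: "p \<in> under (fst x) p" using under_self[OF wx pf(1)] .
  have "f p = g p" using seg_emb_unique[OF wx wy pf(2) gU pu] .
  thus False using pf(4) g(2) pf(1) by simp
qed

lemma wstr_less_trans:
  assumes wx: "wo x" and wy: "wo y" and wz: "wo z" and s1: "wstr_less x y" and s2: "wstr_less y z"
  shows "wstr_less x z"
proof -
  obtain p f where pf: "p \<in> Field (fst x)" "seg_emb (fst x) (fst y) (under (fst x) p) f"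
    "\<And>a. a \<in> underS (fst x) p \<Longrightarrow> snd y (f a) = snd x a" "snd x p < snd y (f p)"
    using wstr_lessE[OF s1] by blast
  obtain q g where qg: "q \<in> Field (fst y)" "seg_emb (fst y) (fst z) (under (fst y) q) g"
    "\<And>a. a \<in> underS (fst y) q \<Longrightarrow> snd z (g a) = snd y a" "snd y q < snd z (g q)"
    using wstr_lessE[OF s2] by blast
  have pu: "p \<in> under (fst x) p" using under_self[OF wx pf(1)] .
  have fp: "f p \<in> Field (fst y)" using seg_embD(3)[OF pf(2) pu] .
  show ?thesis
  proof (cases "(f p, q) \<in> fst y")
    case True
    \<comment> \<open>x and y first differ before (or where) y and z do\<close>
    have sub: "f ` under (fst x) p \<subseteq> under (fst y) q"
      unfolding seg_emb_under_image[OF pf(2) pu] using True wo_trans[OF wy] unfolding under_def by blast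
    have below: "f a \<in> underS (fst y) q" if a: "a \<in> underS (fst x) p" for a
      using seg_emb_underS[OF wx pf(2) pu a] True wo_trans[OF wy] wo_antisym[OF wy]
      unfolding underS_def by blast
    show ?thesis
    proof (rule wstr_lessI[OF pf(1) seg_emb_comp[OF pf(2) qg(2) sub]])
      fix a assume a: "a \<in> underS (fst x) p"
      show "snd z ((g \<circ> f) a) = snd x a" using qg(3)[OF below[OF a]] pf(3)[OF a] by simp
    next
      have "snd y (f p) \<le> snd z (g (f p))"
        using qg(3)[of "f p"] qg(4) True unfolding underS_def by (cases "f p = q") auto
      thus "snd x p < snd z ((g \<circ> f) p)" using pf(4) by simp
    qed
  next
    case False
    \<comment> \<open>y and z first differ strictly before the first difference of x and y\<close>
    hence "(q, f p) \<in> fst y" "q \<noteq> f p" using wo_total[OF wy fp qg(1)] wo_refl[OF wy fp] by auto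
    then obtain p' where p': "p' \<in> underS (fst x) p" "q = f p'"
      using seg_emb_underS_image[OF wx pf(2) pu] unfolding underS_def by blast
    have p'F: "p' \<in> Field (fst x)" using p'(1) unfolding underS_def by (blast intro: FieldI1)
    have p'u: "p' \<in> under (fst x) p" using p'(1) unfolding under_def underS_def by blast
    have fU: "seg_emb (fst x) (fst y) (under (fst x) p') f"
      by (rule seg_emb_under_restr[OF wx pf(2) p'u])
    have p'p': "p' \<in> under (fst x) p'" using under_self[OF wx p'F] .
    have sub: "f ` under (fst x) p' \<subseteq> under (fst y) q"
      unfolding seg_emb_under_image[OF pf(2) p'u] p'(2) ..
    show ?thesis
    proof (rule wstr_lessI[OF p'F seg_emb_comp[OF fU qg(2) sub]])
      fix a assume a: "a \<in> underS (fst x) p'"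
      have "f a \<in> underS (fst y) q" using seg_emb_underS[OF wx fU p'p' a] p'(2) by simp
      moreover have "a \<in> underS (fst x) p"
        using a p'(1) wo_trans[OF wx] wo_antisym[OF wx] unfolding underS_def by blast
      ultimately show "snd z ((g \<circ> f) a) = snd x a" using qg(3) pf(3) by simp
    next
      show "snd x p' < snd z ((g \<circ> f) p')" using qg(4) pf(3)[OF p'(1)] p'(2) by simp
    qed
  qed
qed
lemma wstr_less_irrefl: "wo x \<Longrightarrow> \<not> wstr_less x x"
  using wprefix_imp_not_wstr_less[OF _ _ wprefix_refl] by metis

lemma wstr_less_asym: "wo x \<Longrightarrow> wo y \<Longrightarrow> wstr_less x y \<Longrightarrow> wstr_less y x \<Longrightarrow> False"
  using wstr_less_trans[of x y x] wstr_less_irrefl[of x] by metis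

lemma wstr_less_imp_not_wprefix: "wo x \<Longrightarrow> wo y \<Longrightarrow> wstr_less x y \<Longrightarrow> wprefix y x \<Longrightarrow> False"
  using wstr_less_wprefix_right[of x y x] wstr_less_irrefl[of x] by metis

lemma wprefix_wstr_less_trans:
  assumes wx: "wo x" and wy: "wo y" and wz: "wo z" and pr: "wprefix x y" and s: "wstr_less y z"
  shows "wstr_less x z \<or> wprefix x z"
proof -
  obtain f where f: "seg_emb (fst x) (fst y) (Field (fst x)) f" "\<forall>a\<in>Field (fst x). snd y (f a) = snd x a"
    using pr unfolding wprefix_def by blast
  obtain q g where qg: "q \<in> Field (fst y)" "seg_emb (fst y) (fst z) (under (fst y) q) g"
    "\<And>a. a \<in> underS (fst y) q \<Longrightarrow> snd z (g a) = snd y a" "snd y q < snd z (g q)"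
    using wstr_lessE[OF s] by blast
  show ?thesis
  proof (cases "q \<in> f ` Field (fst x)")
    case True
    then obtain p where p: "p \<in> Field (fst x)" "q = f p" by blast
    have fU: "seg_emb (fst x) (fst y) (under (fst x) p) f" using seg_emb_under_restr[OF wx f(1) p(1)] .
    have sub: "f ` under (fst x) p \<subseteq> under (fst y) q"
      using seg_emb_under_image[OF f(1) p(1)] p(2) by simp
    have "wstr_less x z"
    proof (rule wstr_lessI[OF p(1) seg_emb_comp[OF fU qg(2) sub]])
      fix a assume a: "a \<in> underS (fst x) p"
      have "f a \<in> underS (fst y) q" using seg_emb_underS[OF wx f(1) p(1) a] p(2) by simp
      moreover have "a \<in> Field (fst x)" using a unfolding underS_def Field_def by blast
      ultimately show "snd z ((g \<circ> f) a) = snd x a" using qg(3) f(2) by simp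
    next
      show "snd x p < snd z ((g \<circ> f) p)" using qg(4) f(2) p by simp
    qed
    thus ?thesis by blast
  next
    case False
    \<comment> \<open>then the image of x is an initial segment of y ending before q\<close>
    have below: "f a \<in> underS (fst y) q" if a: "a \<in> Field (fst x)" for a
    proof -
      have "(q, f a) \<notin> fst y" using seg_embD(5)[OF f(1) a] False by blast
      hence "(f a, q) \<in> fst y" using wo_total[OF wy seg_embD(3)[OF f(1) a] qg(1)] by blast
      thus ?thesis using False a unfolding underS_def by blast
    qed
    hence "f ` Field (fst x) \<subseteq> under (fst y) q" using underS_subset_under[of "fst y" q] by blast
    hence "seg_emb (fst x) (fst z) (Field (fst x)) (g \<circ> f)" by (rule seg_emb_comp[OF f(1) qg(2)])
    moreover have "\<forall>a\<in>Field (fst x). snd z ((g \<circ> f) a) = snd x a" using qg(3) f(2) below by simp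
    ultimately show ?thesis unfolding wprefix_def by blast
  qed
qed

lemma wlex_le_trans:
  assumes wx: "wo x" and wy: "wo y" and wz: "wo z" and "wlex_le x y" "wlex_le y z" shows "wlex_le x z"
  using assms(4,5) unfolding wlex_le_def
  using wprefix_trans[of x y z] wprefix_wstr_less_trans[OF wx wy wz] wstr_less_wprefix_right[OF wx, of y z]
    wstr_less_trans[OF wx wy wz] by blast

lemma wlex_le_antisym:
  assumes wx: "wo x" and wy: "wo y" and "wlex_le x y" "wlex_le y x" shows "word_iso x y"
  using assms(3,4) unfolding wlex_le_def
  using wprefix_antisym[OF wx wy] wstr_less_imp_not_wprefix[OF wx wy] wstr_less_imp_not_wprefix[OF wy wx] wstr_less_asym[OF wx wy]
  by blast

lemma wlex_le_iso_right: "wo x \<Longrightarrow> wlex_le x y \<Longrightarrow> word_iso y y' \<Longrightarrow> wlex_le x y'"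
  unfolding wlex_le_def using wprefix_trans[of x y y'] word_iso_wprefix[of y y'] wstr_less_wprefix_right[of x y y'] by blast

lemma wlex_le_iso_left: "wo x \<Longrightarrow> wo x' \<Longrightarrow> word_iso x' x \<Longrightarrow> wlex_le x y \<Longrightarrow> wlex_le x' y"
  unfolding wlex_le_def using wprefix_trans[of x' x y] word_iso_wprefix[of x' x] word_iso_wprefix[of x x'] word_iso_sym[of x' x]
    wprefix_wstr_less_left[of x x' y] by blast

lemma wstr_less_iso_left: "wo x \<Longrightarrow> wo x' \<Longrightarrow> word_iso x' x \<Longrightarrow> wstr_less x y \<Longrightarrow> wstr_less x' y"
  using word_iso_wprefix[of x x'] word_iso_sym[of x' x] wprefix_wstr_less_left[of x x' y] by blast

lemma wstr_less_iso_right: "wo x \<Longrightarrow> wstr_less x y \<Longrightarrow> word_iso y y' \<Longrightarrow> wstr_less x y'"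
  using word_iso_wprefix[of y y'] wstr_less_wprefix_right[of x y y'] by blast

lemma wprefix_wlex_le: "wprefix x y \<Longrightarrow> wlex_le x y" unfolding wlex_le_def by blast
lemma wstr_less_wlex_le: "wstr_less x y \<Longrightarrow> wlex_le x y" unfolding wlex_le_def by blast
lemma word_iso_wlex_le: "word_iso x y \<Longrightarrow> wlex_le x y" using word_iso_wprefix wprefix_wlex_le by blast

lemma seg_emb_comparable:
  assumes wx: "wo x" and wy: "wo y" and f: "seg_emb (fst x) (fst y) (Field (fst x)) f"
  shows "wprefix x y \<or> wstr_less x y \<or> wstr_less y x"
proof (cases "\<forall>a\<in>Field (fst x). snd y (f a) = snd x a")
  case True thus ?thesis unfolding wprefix_def using f by blast
next
  case False
  let ?S = "{a\<in>Field (fst x). snd y (f a) \<noteq> snd x a}"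
  have "?S \<subseteq> Field (fst x)" "?S \<noteq> {}" using False by auto
  then obtain m where m: "m \<in> ?S" "\<forall>s\<in>?S. (m,s) \<in> fst x" using wo_min[OF wx] by blast
  have mF: "m \<in> Field (fst x)" using m by blast
  let ?U = "under (fst x) m"
  have fU: "seg_emb (fst x) (fst y) ?U f" using seg_emb_under_restr[OF wx f mF] .
  have lab: "\<And>a. a \<in> underS (fst x) m \<Longrightarrow> snd y (f a) = snd x a"
  proof (rule ccontr)
    fix a assume a: "a \<in> underS (fst x) m" and ne: "snd y (f a) \<noteq> snd x a"
    have "a \<in> Field (fst x)" using a unfolding underS_def Field_def by blast
    hence "a \<in> ?S" using ne by blast
    hence "(m,a) \<in> fst x" using m by blast
    thus False using a wo_antisym[OF wx] unfolding underS_def by blast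
  qed
  have mu: "m \<in> ?U" using under_self[OF wx mF] .
  consider "snd x m < snd y (f m)" | "snd y (f m) < snd x m" using m by fastforce
  thus ?thesis
  proof cases
    case 1
    have "wstr_less x y" by (rule wstr_lessI[OF mF fU lab 1])
    thus ?thesis by blast
  next
    case 2
    have gi: "seg_emb (fst y) (fst x) (f ` ?U) (inv_into ?U f)" by (rule seg_emb_inv[OF wx fU])
    have eqU: "f ` ?U = under (fst y) (f m)" using seg_emb_under_image[OF f mF] .
    have inj: "inj_on f ?U" unfolding inj_on_def using seg_emb_inj[OF wx fU] by blast
    have ig: "\<And>a. a \<in> ?U \<Longrightarrow> inv_into ?U f (f a) = a" using inj by (simp add: inv_into_f_f)
    have fm: "f m \<in> Field (fst y)" using seg_embD(3)[OF f mF] .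
    have "wstr_less y x"
    proof (rule wstr_lessI[OF fm gi[unfolded eqU]])
      fix b assume b: "b \<in> underS (fst y) (f m)"
      hence "b \<in> f ` ?U" using eqU underS_under[OF b] by simp
      then obtain a where a: "a \<in> ?U" "b = f a" by blast
      have "a \<noteq> m" using a b unfolding underS_def by auto
      hence "a \<in> underS (fst x) m" using a unfolding under_def underS_def by blast
      thus "snd x (inv_into ?U f b) = snd y b" using lab a ig by simp
    next
      show "snd y (f m) < snd x (inv_into ?U f (f m))" using 2 ig mu by simp
    qed
    thus ?thesis by blast
  qed
qed

lemma word_comparable:
  assumes wx: "wo x" and wy: "wo y"
  shows "wprefix x y \<or> wprefix y x \<or> wstr_less x y \<or> wstr_less y x"
proof -
  from wellorders_totally_ordered[OF wx wy]
  consider f where "embed (fst x) (fst y) f" | f where "embed (fst y) (fst x) f" by blast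
  thus ?thesis
  proof cases
    case 1 thus ?thesis using seg_emb_comparable[OF wx wy seg_emb_of_embed[OF wx wy 1]] by blast
  next
    case 2 thus ?thesis using seg_emb_comparable[OF wy wx seg_emb_of_embed[OF wy wx 2]] by blast
  qed
qed

section \<open>Concatenation, powers and restriction\<close>

lemma Well_orderI:
  assumes refl: "\<And>a. a \<in> Field r \<Longrightarrow> (a,a) \<in> r"
  and trans: "\<And>a b c. (a,b) \<in> r \<Longrightarrow> (b,c) \<in> r \<Longrightarrow> (a,c) \<in> r"
  and antisym: "\<And>a b. (a,b) \<in> r \<Longrightarrow> (b,a) \<in> r \<Longrightarrow> a = b"
  and total: "\<And>a b. a \<in> Field r \<Longrightarrow> b \<in> Field r \<Longrightarrow> (a,b) \<in> r \<or> (b,a) \<in> r"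
  and least: "\<And>S. S \<subseteq> Field r \<Longrightarrow> S \<noteq> {} \<Longrightarrow> \<exists>m\<in>S. \<forall>s\<in>S. (m,s) \<in> r"
  shows "Well_order r"
proof -
  have "Linear_order r"
    unfolding linear_order_on_def partial_order_on_def preorder_on_def
      refl_on_def trans_def antisym_def total_on_def
    using refl trans antisym total by (auto simp: Field_def)
  thus ?thesis using Linear_order_Well_order_iff least by blast
qed
lemma wconc_rel[simp]:
  "(Inl a, Inl b) \<in> fst (wconc x y) \<longleftrightarrow> (a,b) \<in> fst x"
  "(Inr a', Inr b') \<in> fst (wconc x y) \<longleftrightarrow> (a',b') \<in> fst y"
  "(Inl a, Inr b') \<in> fst (wconc x y) \<longleftrightarrow> a \<in> Field (fst x) \<and> b' \<in> Field (fst y)"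
  "(Inr a', Inl b) \<notin> fst (wconc x y)"
  unfolding wconc_def by auto

lemma wconc_lab[simp]:
  "snd (wconc x y) (Inl a) = snd x a" "snd (wconc x y) (Inr b) = snd y b"
  unfolding wconc_def by auto

lemma Field_wconc: "Field (fst (wconc x y)) = Inl ` Field (fst x) \<union> Inr ` Field (fst y)"
proof
  show "Field (fst (wconc x y)) \<subseteq> Inl ` Field (fst x) \<union> Inr ` Field (fst y)"
  proof
    fix c assume "c \<in> Field (fst (wconc x y))"
    then obtain d where "(c,d) \<in> fst (wconc x y) \<or> (d,c) \<in> fst (wconc x y)" unfolding Field_def by blast
    thus "c \<in> Inl ` Field (fst x) \<union> Inr ` Field (fst y)"
      by (cases c; cases d) (auto intro: FieldI1 FieldI2)
  qed
  show "Inl ` Field (fst x) \<union> Inr ` Field (fst y) \<subseteq> Field (fst (wconc x y))"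
  proof
    fix c assume "c \<in> Inl ` Field (fst x) \<union> Inr ` Field (fst y)"
    then consider a where "c = Inl a" "a \<in> Field (fst x)" | b where "c = Inr b" "b \<in> Field (fst y)" by blast
    thus "c \<in> Field (fst (wconc x y))"
    proof cases
      case 1
      then obtain d where "(a,d) \<in> fst x \<or> (d,a) \<in> fst x" unfolding Field_def by blast
      hence "(Inl a, Inl d) \<in> fst (wconc x y) \<or> (Inl d, Inl a) \<in> fst (wconc x y)" by simp
      thus ?thesis using 1 unfolding Field_def by blast
    next
      case 2
      then obtain d where "(b,d) \<in> fst y \<or> (d,b) \<in> fst y" unfolding Field_def by blast
      hence "(Inr b, Inr d) \<in> fst (wconc x y) \<or> (Inr d, Inr b) \<in> fst (wconc x y)" by simp
      thus ?thesis using 2 unfolding Field_def by blast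
    qed
  qed
qed

lemma Field_wconc_simps[simp]:
  "Inl a \<in> Field (fst (wconc x y)) \<longleftrightarrow> a \<in> Field (fst x)"
  "Inr b \<in> Field (fst (wconc x y)) \<longleftrightarrow> b \<in> Field (fst y)"
  unfolding Field_wconc by auto

lemma wo_wconc:
  assumes wx: "wo x" and wy: "wo y"
  shows "wo (wconc x y)"
proof (rule Well_orderI)
  fix a assume "a \<in> Field (fst (wconc x y))"
  thus "(a,a) \<in> fst (wconc x y)" by (cases a) (auto simp: wo_refl[OF wx] wo_refl[OF wy])
next
  fix a b c assume "(a,b) \<in> fst (wconc x y)" "(b,c) \<in> fst (wconc x y)"
  thus "(a,c) \<in> fst (wconc x y)"
    by (cases a; cases b; cases c) (auto intro: wo_trans[OF wx] wo_trans[OF wy] FieldI1 FieldI2)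
next
  fix a b assume "(a,b) \<in> fst (wconc x y)" "(b,a) \<in> fst (wconc x y)"
  thus "a = b" by (cases a; cases b) (auto intro: wo_antisym[OF wx] wo_antisym[OF wy])
next
  fix a b assume "a \<in> Field (fst (wconc x y))" "b \<in> Field (fst (wconc x y))"
  thus "(a,b) \<in> fst (wconc x y) \<or> (b,a) \<in> fst (wconc x y)"
    by (cases a; cases b) (auto dest: wo_total[OF wx] wo_total[OF wy])
next
  fix S assume S: "S \<subseteq> Field (fst (wconc x y))" "S \<noteq> {}"
  show "\<exists>m\<in>S. \<forall>s\<in>S. (m,s) \<in> fst (wconc x y)"
  proof (cases "\<exists>a. Inl a \<in> S")
    case True
    let ?A = "{a. Inl a \<in> S}"
    have "?A \<subseteq> Field (fst x)" "?A \<noteq> {}" using S True by auto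
    then obtain m where m: "m \<in> ?A" "\<forall>s\<in>?A. (m,s) \<in> fst x" using wo_min[OF wx] by blast
    have "\<forall>s\<in>S. (Inl m, s) \<in> fst (wconc x y)"
    proof
      fix s assume s: "s \<in> S"
      show "(Inl m, s) \<in> fst (wconc x y)"
      proof (cases s)
        case (Inl a) thus ?thesis using s m by auto
      next
        case (Inr b) thus ?thesis using s m S by auto
      qed
    qed
    thus ?thesis using m by blast
  next
    case False
    let ?B = "{b. Inr b \<in> S}"
    have allr: "\<forall>s\<in>S. \<exists>b. s = Inr b" using False by (metis sumE)
    hence "?B \<subseteq> Field (fst y)" "?B \<noteq> {}" using S by auto
    then obtain m where m: "m \<in> ?B" "\<forall>s\<in>?B. (m,s) \<in> fst y" using wo_min[OF wy] by blast
    have "\<forall>s\<in>S. (Inr m, s) \<in> fst (wconc x y)" using allr m by auto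
    thus ?thesis using m by blast
  qed
qed

lemma wpow_rel[simp]:
  "((o1,p1),(o2,p2)) \<in> fst (wpow x k) \<longleftrightarrow> o1 \<in> Field k \<and> o2 \<in> Field k \<and> p1 \<in> Field (fst x) \<and> p2 \<in> Field (fst x) \<and>
         (((o1, o2) \<in> k \<and> o1 \<noteq> o2) \<or> (o1 = o2 \<and> (p1, p2) \<in> fst x))"
  unfolding wpow_def by auto

lemma wpow_lab[simp]: "snd (wpow x k) c = snd x (snd c)"
  unfolding wpow_def by (simp add: case_prod_beta)

lemma Field_wpow:
  assumes wx: "wo x"
  shows "Field (fst (wpow x k)) = Field k \<times> Field (fst x)"
proof
  show "Field (fst (wpow x k)) \<subseteq> Field k \<times> Field (fst x)"
  proof
    fix c assume "c \<in> Field (fst (wpow x k))"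
    then obtain d where "(c,d) \<in> fst (wpow x k) \<or> (d,c) \<in> fst (wpow x k)" unfolding Field_def by blast
    thus "c \<in> Field k \<times> Field (fst x)" by (cases c; cases d) auto
  qed
  show "Field k \<times> Field (fst x) \<subseteq> Field (fst (wpow x k))"
  proof
    fix c assume "c \<in> Field k \<times> Field (fst x)"
    then obtain o1 p1 where c: "c = (o1,p1)" "o1 \<in> Field k" "p1 \<in> Field (fst x)" by blast
    hence "(c,c) \<in> fst (wpow x k)" using wo_refl[OF wx] by simp
    thus "c \<in> Field (fst (wpow x k))" unfolding Field_def by blast
  qed
qed

lemma Field_wpow_simp[simp]:
  "wo x \<Longrightarrow> (o1,p1) \<in> Field (fst (wpow x k)) \<longleftrightarrow> o1 \<in> Field k \<and> p1 \<in> Field (fst x)"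
  using Field_wpow by blast

lemma wo_wpow:
  assumes wx: "wo x" and wk: "Well_order k"
  shows "wo (wpow x k)"
proof (rule Well_orderI)
  fix a assume "a \<in> Field (fst (wpow x k))"
  thus "(a,a) \<in> fst (wpow x k)" using wx by (cases a) (auto simp: wo_refl[OF wx])
next
  fix a b c assume ab: "(a,b) \<in> fst (wpow x k)" and bc: "(b,c) \<in> fst (wpow x k)"
  obtain a1 a2 b1 b2 c1 c2 where abc: "a = (a1,a2)" "b = (b1,b2)" "c = (c1,c2)" by (cases a; cases b; cases c)
  show "(a,c) \<in> fst (wpow x k)"
    using ab bc unfolding abc wpow_rel
    using wo_trans[OF wk, of a1 b1 c1] wo_antisym[OF wk, of a1 b1] wo_trans[OF wx, of a2 b2 c2] by blast
next
  fix a b assume ab: "(a,b) \<in> fst (wpow x k)" and ba: "(b,a) \<in> fst (wpow x k)"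
  obtain a1 a2 b1 b2 where abc: "a = (a1,a2)" "b = (b1,b2)" by (cases a; cases b)
  show "a = b"
    using ab ba unfolding abc wpow_rel
    using wo_antisym[OF wk, of a1 b1] wo_antisym[OF wx, of a2 b2] by blast
next
  fix a b assume a: "a \<in> Field (fst (wpow x k))" and b: "b \<in> Field (fst (wpow x k))"
  obtain a1 a2 b1 b2 where abc: "a = (a1,a2)" "b = (b1,b2)" by (cases a; cases b)
  have F: "a1 \<in> Field k" "a2 \<in> Field (fst x)" "b1 \<in> Field k" "b2 \<in> Field (fst x)"
    using a b unfolding abc Field_wpow[OF wx] by auto
  show "(a,b) \<in> fst (wpow x k) \<or> (b,a) \<in> fst (wpow x k)"
    unfolding abc wpow_rel using F wo_total[OF wk F(1) F(3)] wo_total[OF wx F(2) F(4)] by blast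
next
  fix S assume S: "S \<subseteq> Field (fst (wpow x k))" "S \<noteq> {}"
  let ?O = "fst ` S"
  have "?O \<subseteq> Field k" "?O \<noteq> {}" using S unfolding Field_wpow[OF wx] by auto
  then obtain m where m: "m \<in> ?O" "\<forall>s\<in>?O. (m,s) \<in> k" using wo_min[OF wk] by blast
  let ?P = "{p. (m,p) \<in> S}"
  have "?P \<subseteq> Field (fst x)" "?P \<noteq> {}" using S m(1) unfolding Field_wpow[OF wx] by force+
  then obtain n where n: "n \<in> ?P" "\<forall>s\<in>?P. (n,s) \<in> fst x" using wo_min[OF wx] by blast
  have "\<forall>s\<in>S. ((m,n), s) \<in> fst (wpow x k)"
  proof
    fix s assume s: "s \<in> S"
    obtain s1 s2 where s12: "s = (s1,s2)" by (cases s)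
    have F: "s1 \<in> Field k" "s2 \<in> Field (fst x)" "m \<in> Field k" "n \<in> Field (fst x)"
      using s S n m unfolding s12 Field_wpow[OF wx] by force+
    have "(m, s1) \<in> k" using m s s12 by force
    thus "((m,n), s) \<in> fst (wpow x k)" using n s s12 F by auto
  qed
  thus "\<exists>m\<in>S. \<forall>s\<in>S. (m,s) \<in> fst (wpow x k)" using n by blast
qed

lemma wrestr_rel[simp]: "(a,b) \<in> fst (wrestr x S) \<longleftrightarrow> (a,b) \<in> fst x \<and> a \<in> S \<and> b \<in> S"
  unfolding wrestr_def by auto

lemma wrestr_lab[simp]: "snd (wrestr x S) = snd x"
  unfolding wrestr_def by auto

lemma Field_wrestr:
  assumes wx: "wo x" shows "Field (fst (wrestr x S)) = S \<inter> Field (fst x)"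
proof
  show "Field (fst (wrestr x S)) \<subseteq> S \<inter> Field (fst x)"
    unfolding Field_def by auto
  show "S \<inter> Field (fst x) \<subseteq> Field (fst (wrestr x S))"
  proof
    fix a assume "a \<in> S \<inter> Field (fst x)"
    hence "(a,a) \<in> fst (wrestr x S)" using wo_refl[OF wx] by auto
    thus "a \<in> Field (fst (wrestr x S))" unfolding Field_def by blast
  qed
qed

lemma wo_wrestr: "wo x \<Longrightarrow> wo (wrestr x S)"
  unfolding wrestr_def using Well_order_Restr by auto

lemma wrestr_Field: "wrestr x (Field (fst x)) = x"
  unfolding wrestr_def using Restr_Field[of "fst x"] by (metis prod.collapse)

lemma wrestr_wrestr: "wrestr (wrestr x S) T = wrestr x (S \<inter> T)"
  unfolding wrestr_def by auto

abbreviation wsuffix :: "('i,'a) wrd \<Rightarrow> 'i \<Rightarrow> ('i,'a) wrd" where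
  "wsuffix x p \<equiv> wrestr x (above (fst x) p)"

lemma above_Field: "above r p \<subseteq> Field r"
  unfolding above_def Field_def by blast

lemma Field_suffix: "wo x \<Longrightarrow> Field (fst (wsuffix x p)) = above (fst x) p"
  using Field_wrestr[of x "above (fst x) p"] above_Field[of "fst x" p] by blast

lemma suffix_min:
  assumes wx: "wo x" and p: "p \<in> Field (fst x)" and nm: "\<not> (\<exists>q. (q,p) \<in> fst x \<and> q \<noteq> p)"
  shows "wsuffix x p = x"
proof -
  have "above (fst x) p = Field (fst x)"
  proof
    show "above (fst x) p \<subseteq> Field (fst x)" by (rule above_Field)
    show "Field (fst x) \<subseteq> above (fst x) p"
    proof
      fix b assume b: "b \<in> Field (fst x)"
      show "b \<in> above (fst x) p"
      proof (cases "(p,b) \<in> fst x")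
        case True thus ?thesis unfolding above_def by blast
      next
        case False
        hence "(b,p) \<in> fst x" using wo_total[OF wx p b] by blast
        hence "b = p" using nm by blast
        thus ?thesis using wo_refl[OF wx p] unfolding above_def by blast
      qed
    qed
  qed
  thus ?thesis using wrestr_Field by metis
qed

lemma suffix_least:
  assumes wx: "wo x" and m: "m \<in> Field (fst x)" and mmin: "\<And>c. c \<in> Field (fst x) \<Longrightarrow> (m,c) \<in> fst x"
  shows "wsuffix x m = x"
  using suffix_min[OF wx m] mmin wo_antisym[OF wx] by (blast intro: FieldI1)

lemma countable_wconc: "countable (Field (fst x)) \<Longrightarrow> countable (Field (fst y)) \<Longrightarrow> countable (Field (fst (wconc x y)))"
  unfolding Field_wconc by auto

lemma countable_wpow: "wo x \<Longrightarrow> countable (Field k) \<Longrightarrow> countable (Field (fst x)) \<Longrightarrow> countable (Field (fst (wpow x k)))"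
  unfolding Field_wpow by auto

lemma countable_wrestr: "wo x \<Longrightarrow> countable (Field (fst x)) \<Longrightarrow> countable (Field (fst (wrestr x S)))"
  unfolding Field_wrestr by (auto intro: countable_subset)

lemma word_iso_injI:
  assumes inj: "inj_on h (Field (fst x))" and img: "h ` Field (fst x) = Field (fst y)"
    and ord: "\<And>p q. p \<in> Field (fst x) \<Longrightarrow> q \<in> Field (fst x) \<Longrightarrow> (p, q) \<in> fst x \<longleftrightarrow> (h p, h q) \<in> fst y"
    and lab: "\<And>p. p \<in> Field (fst x) \<Longrightarrow> snd y (h p) = snd x p"
  shows "word_iso x y"
proof (rule word_isoI[of h])
  show "bij_betw h (Field (fst x)) (Field (fst y))" unfolding bij_betw_def using inj img by blast
  show "\<And>p q. p \<in> Field (fst x) \<Longrightarrow> q \<in> Field (fst x) \<Longrightarrow> (p, q) \<in> fst x \<longleftrightarrow> (h p, h q) \<in> fst y"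
    by (rule ord)
  show "\<And>p. p \<in> Field (fst x) \<Longrightarrow> snd y (h p) = snd x p" by (rule lab)
qed

lemma Field_Restr_of_subset:
  assumes wk: "Well_order k" and I: "I \<subseteq> Field k"
  shows "Field (Restr k I) = I"
proof
  show "Field (Restr k I) \<subseteq> I" by (rule Field_Restr_subset)
  show "I \<subseteq> Field (Restr k I)"
  proof
    fix a assume a: "a \<in> I"
    have "(a,a) \<in> k" using wo_refl[OF wk] I a by blast
    hence "(a,a) \<in> Restr k I" using a by blast
    thus "a \<in> Field (Restr k I)" unfolding Field_def by blast
  qed
qed

lemma wconc_wrestr_iso:
  assumes wx: "wo x" and disj: "S \<inter> T = {}"
    and ord: "\<And>s t. s \<in> S \<Longrightarrow> t \<in> T \<Longrightarrow> s \<in> Field (fst x) \<Longrightarrow> t \<in> Field (fst x) \<Longrightarrow> (s,t) \<in> fst x"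
  shows "word_iso (wconc (wrestr x S) (wrestr x T)) (wrestr x (S \<union> T))"
proof (rule word_iso_injI[of "case_sum id id"])
  have F: "Field (fst (wconc (wrestr x S) (wrestr x T))) = Inl ` (S \<inter> Field (fst x)) \<union> Inr ` (T \<inter> Field (fst x))"
    unfolding Field_wconc Field_wrestr[OF wx] ..
  show "inj_on (case_sum id id) (Field (fst (wconc (wrestr x S) (wrestr x T))))"
    unfolding F inj_on_def using disj by auto
  show "case_sum id id ` Field (fst (wconc (wrestr x S) (wrestr x T))) = Field (fst (wrestr x (S \<union> T)))"
    unfolding F Field_wrestr[OF wx] by force
  fix p q assume p: "p \<in> Field (fst (wconc (wrestr x S) (wrestr x T)))" and q: "q \<in> Field (fst (wconc (wrestr x S) (wrestr x T)))"
  show "(p, q) \<in> fst (wconc (wrestr x S) (wrestr x T)) \<longleftrightarrow> (case_sum id id p, case_sum id id q) \<in> fst (wrestr x (S \<union> T))"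
  proof (cases p; cases q)
    fix a b assume ab: "p = Inl a" "q = Inr b"
    have "a \<in> S" "a \<in> Field (fst x)" "b \<in> T" "b \<in> Field (fst x)" using p q ab unfolding F by auto
    thus ?thesis using ab ord Field_wrestr[OF wx] by auto
  next
    fix a b assume ab: "p = Inr a" "q = Inl b"
    have "a \<in> T" "a \<in> Field (fst x)" "b \<in> S" "b \<in> Field (fst x)" using p q ab unfolding F by auto
    moreover have "a \<noteq> b" using disj \<open>a \<in> T\<close> \<open>b \<in> S\<close> by blast
    ultimately show ?thesis using ab ord[of b a] wo_antisym[OF wx, of a b] by auto
  next
    fix a b assume ab: "p = Inl a" "q = Inl b"
    have "a \<in> S" "b \<in> S" using p q ab unfolding F by auto
    thus ?thesis using ab by auto
  next
    fix a b assume ab: "p = Inr a" "q = Inr b"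
    have "a \<in> T" "b \<in> T" using p q ab unfolding F by auto
    thus ?thesis using ab by auto
  qed
next
  fix p assume "p \<in> Field (fst (wconc (wrestr x S) (wrestr x T)))"
  thus "snd (wrestr x (S \<union> T)) (case_sum id id p) = snd (wconc (wrestr x S) (wrestr x T)) p"
    by (cases p) auto
qed

lemma wrestr_Inl_iso:
  assumes wx: "wo x" and wy: "wo y"
  shows "word_iso (wrestr x B) (wrestr (wconc x y) (Inl ` B))"
proof (rule word_iso_injI[of Inl])
  show "inj_on Inl (Field (fst (wrestr x B)))" by auto
  show "Inl ` Field (fst (wrestr x B)) = Field (fst (wrestr (wconc x y) (Inl ` B)))"
    unfolding Field_wrestr[OF wx] Field_wrestr[OF wo_wconc[OF wx wy]] Field_wconc by auto
qed (auto simp: Field_wrestr[OF wx])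

lemma wrestr_Inr_iso:
  assumes wx: "wo x" and wy: "wo y"
  shows "word_iso (wrestr y B) (wrestr (wconc x y) (Inr ` B))"
proof (rule word_iso_injI[of Inr])
  show "inj_on Inr (Field (fst (wrestr y B)))" by auto
  show "Inr ` Field (fst (wrestr y B)) = Field (fst (wrestr (wconc x y) (Inr ` B)))"
    unfolding Field_wrestr[OF wy] Field_wrestr[OF wo_wconc[OF wx wy]] Field_wconc by auto
qed (auto simp: Field_wrestr[OF wy])

lemma wrestr_block_iso:
  assumes wu: "wo u" and wk: "Well_order k" and o: "ob \<in> Field k"
  shows "word_iso (wrestr u B) (wrestr (wpow u k) ({ob} \<times> B))"
proof (rule word_iso_injI[of "\<lambda>p. (ob,p)"])
  show "inj_on (Pair ob) (Field (fst (wrestr u B)))" by (auto simp: inj_on_def)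
  show "Pair ob ` Field (fst (wrestr u B)) = Field (fst (wrestr (wpow u k) ({ob} \<times> B)))"
    unfolding Field_wrestr[OF wo_wpow[OF wu wk]] Field_wrestr[OF wu] Field_wpow[OF wu] using o by auto
qed (auto simp: Field_wrestr[OF wu] o)

lemma wrestr_wpow:
  assumes wu: "wo u" and wk: "Well_order k" and I: "I \<subseteq> Field k"
  shows "wrestr (wpow u k) (I \<times> Field (fst u)) = wpow u (Restr k I)"
proof (rule prod_eqI)
  show "snd (wrestr (wpow u k) (I \<times> Field (fst u))) = snd (wpow u (Restr k I))"
    unfolding wpow_def by simp
  have FI: "Field (Restr k I) = I" using Field_Restr_of_subset[OF wk I] .
  show "fst (wrestr (wpow u k) (I \<times> Field (fst u))) = fst (wpow u (Restr k I))"
  proof (rule set_eqI)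
    fix c :: "('c \<times> 'a) \<times> ('c \<times> 'a)"
    obtain o1 p1 o2 p2 where c: "c = ((o1,p1),(o2,p2))" by (cases c) auto
    show "c \<in> fst (wrestr (wpow u k) (I \<times> Field (fst u))) \<longleftrightarrow> c \<in> fst (wpow u (Restr k I))"
      unfolding c wrestr_rel wpow_rel FI using I by auto
  qed
qed

lemma wrestr_seg_emb_iso:
  assumes wx: "wo x" and wy: "wo y" and g: "seg_emb (fst x) (fst y) A g"
    and lab: "\<And>a. a \<in> A \<Longrightarrow> snd y (g a) = snd x a" and B: "B \<subseteq> A"
  shows "word_iso (wrestr x B) (wrestr y (g ` B))"
proof (rule word_iso_injI[of g])
  have BF: "B \<subseteq> Field (fst x)" using B seg_embD(1)[OF g] by blast
  have gBF: "g ` B \<subseteq> Field (fst y)" using B seg_embD(3)[OF g] by blast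
  have FB: "Field (fst (wrestr x B)) = B" using BF Field_wrestr[OF wx] by blast
  have FgB: "Field (fst (wrestr y (g ` B))) = g ` B" using gBF Field_wrestr[OF wy] by blast
  show "inj_on g (Field (fst (wrestr x B)))" unfolding FB inj_on_def
    using seg_emb_inj[OF wx g] B by blast
  show "g ` Field (fst (wrestr x B)) = Field (fst (wrestr y (g ` B)))" unfolding FB FgB ..
  fix p q assume p: "p \<in> Field (fst (wrestr x B))" and q: "q \<in> Field (fst (wrestr x B))"
  have pB: "p \<in> B" and qB: "q \<in> B" using p q FB by auto
  hence pA: "p \<in> A" and qA: "q \<in> A" using B by auto
  show "(p, q) \<in> fst (wrestr x B) \<longleftrightarrow> (g p, g q) \<in> fst (wrestr y (g ` B))"
    using seg_embD(4)[OF g pA qA] pB qB by auto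
next
  fix p assume "p \<in> Field (fst (wrestr x B))"
  hence "p \<in> A" using B Field_wrestr[OF wx] by auto
  thus "snd (wrestr y (g ` B)) (g p) = snd (wrestr x B) p" using lab by simp
qed

lemma word_iso_seg_emb:
  assumes "word_iso x y"
  obtains h where "seg_emb (fst x) (fst y) (Field (fst x)) h" "h ` Field (fst x) = Field (fst y)"
    "\<And>a. a \<in> Field (fst x) \<Longrightarrow> snd y (h a) = snd x a"
proof -
  obtain h where h1: "bij_betw h (Field (fst x)) (Field (fst y))"
    and h2: "\<forall>p\<in>Field (fst x). \<forall>q\<in>Field (fst x). (p, q) \<in> fst x \<longleftrightarrow> (h p, h q) \<in> fst y"
    and h3: "\<forall>p\<in>Field (fst x). snd y (h p) = snd x p" using assms unfolding word_iso_def by blast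
  have "seg_emb (fst x) (fst y) (Field (fst x)) h"
  proof (rule seg_embI)
    show "\<And>a. a \<in> Field (fst x) \<Longrightarrow> h a \<in> Field (fst y)" using h1 bij_betwE by blast
    show "\<And>a b. a \<in> Field (fst x) \<Longrightarrow> b \<in> Field (fst x) \<Longrightarrow> ((a, b) \<in> fst x) = ((h a, h b) \<in> fst y)"
      using h2 by blast
    fix a c assume a: "a \<in> Field (fst x)" and c: "(c, h a) \<in> fst y"
    have "c \<in> Field (fst y)" using Field_closed[OF _ c] h1 a bij_betwE by blast
    thus "c \<in> h ` Field (fst x)" using h1 unfolding bij_betw_def by blast
  qed
  moreover have "h ` Field (fst x) = Field (fst y)" using h1 unfolding bij_betw_def by blast
  ultimately show ?thesis using that h3 by blast
qed

lemma seg_emb_above_image: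
  assumes wx: "wo x" and g: "seg_emb (fst x) (fst y) (Field (fst x)) g" and sur: "g ` Field (fst x) = Field (fst y)"
    and p: "p \<in> Field (fst x)"
  shows "g ` above (fst x) p = above (fst y) (g p)"
proof
  show "g ` above (fst x) p \<subseteq> above (fst y) (g p)"
  proof
    fix c assume "c \<in> g ` above (fst x) p"
    then obtain a where a: "(p,a) \<in> fst x" "c = g a" unfolding above_def by blast
    have "a \<in> Field (fst x)" using a(1) by (rule FieldI2)
    thus "c \<in> above (fst y) (g p)" using seg_embD(4)[OF g p] a unfolding above_def by simp
  qed
  show "above (fst y) (g p) \<subseteq> g ` above (fst x) p"
  proof
    fix c assume c: "c \<in> above (fst y) (g p)"
    hence "(g p, c) \<in> fst y" unfolding above_def by simp
    hence "c \<in> Field (fst y)" by (rule FieldI2)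
    then obtain a where a: "a \<in> Field (fst x)" "c = g a" using sur by blast
    hence "(p,a) \<in> fst x" using seg_embD(4)[OF g p a(1)] c unfolding above_def by simp
    thus "c \<in> g ` above (fst x) p" using a unfolding above_def by blast
  qed
qed

lemma word_iso_suffix:
  assumes wx: "wo x" and wy: "wo y" and iso: "word_iso x y" and p: "p \<in> Field (fst x)"
  obtains p' where "p' \<in> Field (fst y)" "word_iso (wsuffix x p) (wsuffix y p')"
    "(\<exists>q. (q,p) \<in> fst x \<and> q \<noteq> p) \<longleftrightarrow> (\<exists>q. (q,p') \<in> fst y \<and> q \<noteq> p')"
proof -
  obtain h where h: "seg_emb (fst x) (fst y) (Field (fst x)) h" "h ` Field (fst x) = Field (fst y)"
    "\<And>a. a \<in> Field (fst x) \<Longrightarrow> snd y (h a) = snd x a" using word_iso_seg_emb[OF iso] by blast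
  have sub: "above (fst x) p \<subseteq> Field (fst x)" unfolding above_def by (auto intro: FieldI2)
  have i: "word_iso (wsuffix x p) (wrestr y (h ` above (fst x) p))"
    by (rule wrestr_seg_emb_iso[OF wx wy h(1) h(3) sub])
  have hp: "h p \<in> Field (fst y)" using seg_embD(3)[OF h(1) p] .
  have e: "(\<exists>q. (q,p) \<in> fst x \<and> q \<noteq> p) \<longleftrightarrow> (\<exists>q. (q,h p) \<in> fst y \<and> q \<noteq> h p)"
  proof
    assume "\<exists>q. (q,p) \<in> fst x \<and> q \<noteq> p"
    then obtain q where q: "(q,p) \<in> fst x" "q \<noteq> p" by blast
    have qF: "q \<in> Field (fst x)" using q(1) by (rule FieldI1)
    have "(h q, h p) \<in> fst y" using seg_embD(4)[OF h(1) qF p] q by simp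
    moreover have "h q \<noteq> h p" using seg_emb_inj[OF wx h(1) qF p] q by blast
    ultimately show "\<exists>q. (q,h p) \<in> fst y \<and> q \<noteq> h p" by blast
  next
    assume "\<exists>q. (q,h p) \<in> fst y \<and> q \<noteq> h p"
    then obtain q where q: "(q,h p) \<in> fst y" "q \<noteq> h p" by blast
    then obtain a where a: "a \<in> Field (fst x)" "q = h a" using seg_embD(5)[OF h(1) p] by blast
    have "(a,p) \<in> fst x" using seg_embD(4)[OF h(1) a(1) p] q a by simp
    moreover have "a \<noteq> p" using q a by blast
    ultimately show "\<exists>q. (q,p) \<in> fst x \<and> q \<noteq> p" by blast
  qed
  show ?thesis using that[OF hp i[unfolded seg_emb_above_image[OF wx h(1) h(2) p]] e] .
qed

lemma word_iso_wconc_cong: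
  assumes wx: "wo x" and wy: "wo y" and wx': "wo x'" and wy': "wo y'"
    and ix: "word_iso x x'" and iy: "word_iso y y'"
  shows "word_iso (wconc x y) (wconc x' y')"
proof -
  obtain f where f: "seg_emb (fst x) (fst x') (Field (fst x)) f" "f ` Field (fst x) = Field (fst x')"
    "\<And>a. a \<in> Field (fst x) \<Longrightarrow> snd x' (f a) = snd x a" using word_iso_seg_emb[OF ix] by blast
  obtain g where g: "seg_emb (fst y) (fst y') (Field (fst y)) g" "g ` Field (fst y) = Field (fst y')"
    "\<And>a. a \<in> Field (fst y) \<Longrightarrow> snd y' (g a) = snd y a" using word_iso_seg_emb[OF iy] by blast
  show ?thesis
  proof (rule word_iso_injI[of "map_sum f g"])
    show "inj_on (map_sum f g) (Field (fst (wconc x y)))"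
      unfolding Field_wconc inj_on_def using seg_emb_inj[OF wx f(1)] seg_emb_inj[OF wy g(1)] by auto
    show "map_sum f g ` Field (fst (wconc x y)) = Field (fst (wconc x' y'))"
      unfolding Field_wconc f(2)[symmetric] g(2)[symmetric] by force
    fix p q assume p: "p \<in> Field (fst (wconc x y))" and q: "q \<in> Field (fst (wconc x y))"
    show "(p, q) \<in> fst (wconc x y) \<longleftrightarrow> (map_sum f g p, map_sum f g q) \<in> fst (wconc x' y')"
    proof (cases p; cases q)
      fix a b assume ab: "p = Inl a" "q = Inl b"
      thus ?thesis using p q seg_embD(4)[OF f(1), of a b] by auto
    next
      fix a b assume ab: "p = Inl a" "q = Inr b"
      thus ?thesis using p q seg_embD(3)[OF f(1), of a] seg_embD(3)[OF g(1), of b] by auto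
    next
      fix a b assume ab: "p = Inr a" "q = Inr b"
      thus ?thesis using p q seg_embD(4)[OF g(1), of a b] by auto
    qed auto
  next
    fix p assume "p \<in> Field (fst (wconc x y))"
    thus "snd (wconc x' y') (map_sum f g p) = snd (wconc x y) p" using f(3) g(3) by (cases p) auto
  qed
qed

lemma wconc_assoc_iso:
  assumes wx: "wo x" and wy: "wo y" and wz: "wo z"
  shows "word_iso (wconc (wconc x y) z) (wconc x (wconc y z))"
proof (rule word_iso_injI[of "case_sum (case_sum Inl (Inr \<circ> Inl)) (Inr \<circ> Inr)"])
  show "inj_on (case_sum (case_sum Inl (Inr \<circ> Inl)) (Inr \<circ> Inr)) (Field (fst (wconc (wconc x y) z)))"
    unfolding Field_wconc inj_on_def by auto
  show "case_sum (case_sum Inl (Inr \<circ> Inl)) (Inr \<circ> Inr) ` Field (fst (wconc (wconc x y) z)) = Field (fst (wconc x (wconc y z)))"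
    unfolding Field_wconc by force
  fix p q assume p: "p \<in> Field (fst (wconc (wconc x y) z))" and q: "q \<in> Field (fst (wconc (wconc x y) z))"
  show "(p, q) \<in> fst (wconc (wconc x y) z) \<longleftrightarrow>
    (case_sum (case_sum Inl (Inr \<circ> Inl)) (Inr \<circ> Inr) p, case_sum (case_sum Inl (Inr \<circ> Inl)) (Inr \<circ> Inr) q) \<in> fst (wconc x (wconc y z))"
    using p q unfolding Field_wconc by (cases p; cases q) (auto split: sum.splits)
next
  fix p assume "p \<in> Field (fst (wconc (wconc x y) z))"
  thus "snd (wconc x (wconc y z)) (case_sum (case_sum Inl (Inr \<circ> Inl)) (Inr \<circ> Inr) p) = snd (wconc (wconc x y) z) p"
    by (cases p) (auto split: sum.splits)
qed

definition rel_iso :: "'a rel \<Rightarrow> 'b rel \<Rightarrow> ('a \<Rightarrow> 'b) \<Rightarrow> bool" where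
  "rel_iso k k' e \<longleftrightarrow> bij_betw e (Field k) (Field k') \<and> (\<forall>a\<in>Field k. \<forall>b\<in>Field k. (a,b) \<in> k \<longleftrightarrow> (e a, e b) \<in> k')"

lemma word_iso_wpow_cong:
  assumes wx: "wo x" and wx': "wo x'" and ix: "word_iso x x'" and e: "rel_iso k k' e"
  shows "word_iso (wpow x k) (wpow x' k')"
proof -
  obtain f where f: "seg_emb (fst x) (fst x') (Field (fst x)) f" "f ` Field (fst x) = Field (fst x')"
    "\<And>a. a \<in> Field (fst x) \<Longrightarrow> snd x' (f a) = snd x a" using word_iso_seg_emb[OF ix] by blast
  have eb: "bij_betw e (Field k) (Field k')" and eo: "\<And>a b. a \<in> Field k \<Longrightarrow> b \<in> Field k \<Longrightarrow> (a,b) \<in> k \<longleftrightarrow> (e a, e b) \<in> k'"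
    using e unfolding rel_iso_def by blast+
  have einj: "inj_on e (Field k)" and eimg: "e ` Field k = Field k'" using eb unfolding bij_betw_def by blast+
  have finj: "inj_on f (Field (fst x))" unfolding inj_on_def using seg_emb_inj[OF wx f(1)] by blast
  show ?thesis
  proof (rule word_iso_injI[of "map_prod e f"])
    show "inj_on (map_prod e f) (Field (fst (wpow x k)))"
      unfolding Field_wpow[OF wx] using einj finj by (rule map_prod_inj_on)
    show "map_prod e f ` Field (fst (wpow x k)) = Field (fst (wpow x' k'))"
      unfolding Field_wpow[OF wx] Field_wpow[OF wx'] eimg[symmetric] f(2)[symmetric] by (rule map_prod_surj_on; rule refl)
    fix p q assume p: "p \<in> Field (fst (wpow x k))" and q: "q \<in> Field (fst (wpow x k))"
    obtain o1 p1 o2 p2 where pq: "p = (o1,p1)" "q = (o2,p2)" by (cases p; cases q) auto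
    have F: "o1 \<in> Field k" "p1 \<in> Field (fst x)" "o2 \<in> Field k" "p2 \<in> Field (fst x)"
      using p q pq Field_wpow[OF wx] by auto
    have F': "e o1 \<in> Field k'" "f p1 \<in> Field (fst x')" "e o2 \<in> Field k'" "f p2 \<in> Field (fst x')"
      using F eimg f(2) by auto
    have "e o1 = e o2 \<longleftrightarrow> o1 = o2" using einj F unfolding inj_on_def by blast
    thus "(p, q) \<in> fst (wpow x k) \<longleftrightarrow> (map_prod e f p, map_prod e f q) \<in> fst (wpow x' k')"
      unfolding pq using F F' eo[OF F(1) F(3)] seg_embD(4)[OF f(1) F(2) F(4)] by auto
  next
    fix p assume "p \<in> Field (fst (wpow x k))"
    thus "snd (wpow x' k') (map_prod e f p) = snd (wpow x k) p" using f(3) Field_wpow[OF wx] by (cases p) auto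
  qed
qed

lemma rel_iso_Restr_seg_emb:
  assumes wk: "Well_order k" and e: "seg_emb k k' A e"
  shows "rel_iso (Restr k A) (Restr k' (e ` A)) e"
proof -
  have AF: "A \<subseteq> Field k" using seg_embD(1)[OF e] .
  have eAF: "e ` A \<subseteq> Field k'" using seg_embD(3)[OF e] by blast
  have F1: "Field (Restr k A) = A" using Field_Restr_of_subset[OF wk AF] .
  have F2: "Field (Restr k' (e ` A)) = e ` A"
  proof
    show "Field (Restr k' (e ` A)) \<subseteq> e ` A" by (rule Field_Restr_subset)
    show "e ` A \<subseteq> Field (Restr k' (e ` A))"
    proof
      fix c assume "c \<in> e ` A"
      then obtain a where a: "a \<in> A" "c = e a" by blast
      have "(a,a) \<in> k" using wo_refl[OF wk] AF a by blast
      hence "(c,c) \<in> k'" using seg_embD(4)[OF e a(1) a(1)] a by simp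
      thus "c \<in> Field (Restr k' (e ` A))" using a unfolding Field_def by blast
    qed
  qed
  show ?thesis unfolding rel_iso_def F1 F2
  proof (intro conjI ballI)
    show "bij_betw e A (e ` A)" unfolding bij_betw_def inj_on_def using seg_emb_inj[OF wk e] by blast
    fix a b assume a: "a \<in> A" and b: "b \<in> A"
    have "e a \<in> e ` A" "e b \<in> e ` A" using a b by blast+
    thus "(a,b) \<in> Restr k A \<longleftrightarrow> (e a, e b) \<in> Restr k' (e ` A)" using seg_embD(4)[OF e a b] a b by simp
  qed
qed

lemma seg_emb_onto_word_iso:
  assumes wx: "wo x" and g: "seg_emb (fst x) (fst y) (Field (fst x)) g"
    and onto: "g ` Field (fst x) = Field (fst y)" and lab: "\<forall>a\<in>Field (fst x). snd y (g a) = snd x a"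
  shows "word_iso x y"
proof (rule word_iso_injI[OF _ onto])
  show "inj_on g (Field (fst x))" unfolding inj_on_def using seg_emb_inj[OF wx g] by blast
qed (use seg_embD(4)[OF g] lab in auto)

lemma wconc_underS_suffix_iso:
  assumes wx: "wo x" and p: "p \<in> Field (fst x)"
  shows "word_iso (wconc (wrestr x (underS (fst x) p)) (wsuffix x p)) x"
proof -
  have "word_iso (wconc (wrestr x (underS (fst x) p)) (wsuffix x p))
          (wrestr x (underS (fst x) p \<union> above (fst x) p))"
  proof (rule wconc_wrestr_iso[OF wx])
    show "underS (fst x) p \<inter> above (fst x) p = {}"
      unfolding underS_def above_def using wo_antisym[OF wx] by blast
    fix s t assume "s \<in> underS (fst x) p" "t \<in> above (fst x) p"
    thus "(s,t) \<in> fst x" unfolding underS_def above_def using wo_trans[OF wx] by blast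
  qed
  moreover have "underS (fst x) p \<union> above (fst x) p = Field (fst x)"
  proof
    show "underS (fst x) p \<union> above (fst x) p \<subseteq> Field (fst x)"
      unfolding underS_def above_def Field_def by blast
    show "Field (fst x) \<subseteq> underS (fst x) p \<union> above (fst x) p"
    proof
      fix b assume b: "b \<in> Field (fst x)"
      show "b \<in> underS (fst x) p \<union> above (fst x) p"
        using wo_total[OF wx p b] wo_refl[OF wx p] unfolding underS_def above_def by blast
    qed
  qed
  ultimately show ?thesis using wrestr_Field by metis
qed

lemma underS_wpow_min:
  assumes wu: "wo u" and wk: "Well_order k" and o: "ob \<in> Field k" and m: "m \<in> Field (fst u)"
    and mmin: "\<And>c. c \<in> Field (fst u) \<Longrightarrow> (m,c) \<in> fst u"
  shows "underS (fst (wpow u k)) (ob,m) = underS k ob \<times> Field (fst u)"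
proof
  show "underS (fst (wpow u k)) (ob,m) \<subseteq> underS k ob \<times> Field (fst u)"
  proof
    fix c assume c: "c \<in> underS (fst (wpow u k)) (ob,m)"
    obtain c1 c2 where cc: "c = (c1,c2)" by (cases c)
    have h: "c1 \<in> Field k" "c2 \<in> Field (fst u)" "((c1,ob) \<in> k \<and> c1 \<noteq> ob) \<or> (c1 = ob \<and> (c2,m) \<in> fst u)" "c \<noteq> (ob,m)"
      using c cc unfolding underS_def by auto
    have "c1 \<noteq> ob"
    proof
      assume "c1 = ob"
      hence "(c2,m) \<in> fst u" using h by blast
      hence "c2 = m" using mmin[OF h(2)] wo_antisym[OF wu] by blast
      thus False using h \<open>c1 = ob\<close> cc by blast
    qed
    thus "c \<in> underS k ob \<times> Field (fst u)" using h cc unfolding underS_def by blast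
  qed
  show "underS k ob \<times> Field (fst u) \<subseteq> underS (fst (wpow u k)) (ob,m)"
  proof
    fix c assume c: "c \<in> underS k ob \<times> Field (fst u)"
    obtain c1 c2 where cc: "c = (c1,c2)" by (cases c)
    have "c1 \<in> Field k" using c cc unfolding underS_def by (auto intro: FieldI1)
    thus "c \<in> underS (fst (wpow u k)) (ob,m)" using c cc o m unfolding underS_def by auto
  qed
qed

lemma seg_emb_map_sum:
  assumes wz: "wo z" and f: "seg_emb (fst a) (fst b) A f"
  shows "seg_emb (fst (wconc z a)) (fst (wconc z b)) (Inl ` Field (fst z) \<union> Inr ` A) (map_sum id f)"
  unfolding seg_emb_def
proof (intro conjI ballI allI impI)
  have AF: "A \<subseteq> Field (fst a)" using seg_embD(1)[OF f] .
  show "Inl ` Field (fst z) \<union> Inr ` A \<subseteq> Field (fst (wconc z a))" unfolding Field_wconc using AF by blast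
  show "map_sum id f ` (Inl ` Field (fst z) \<union> Inr ` A) \<subseteq> Field (fst (wconc z b))"
    unfolding Field_wconc using seg_embD(3)[OF f] by auto
  fix c assume c: "c \<in> Inl ` Field (fst z) \<union> Inr ` A"
  { fix d assume d: "(d, c) \<in> fst (wconc z a)"
    show "d \<in> Inl ` Field (fst z) \<union> Inr ` A"
    proof (cases c; cases d)
      fix c1 d1 assume "c = Inl c1" "d = Inl d1" thus ?thesis using d by (auto intro: FieldI1)
    next
      fix c1 d1 assume "c = Inr c1" "d = Inl d1" thus ?thesis using d by auto
    next
      fix c1 d1 assume cd: "c = Inr c1" "d = Inr d1"
      hence "c1 \<in> A" "(d1,c1) \<in> fst a" using c d by auto
      thus ?thesis using cd seg_embD(2)[OF f] by blast
    next
      fix c1 d1 assume "c = Inl c1" "d = Inr d1" thus ?thesis using d by auto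
    qed }
  { fix d assume d: "d \<in> Inl ` Field (fst z) \<union> Inr ` A"
    show "(c, d) \<in> fst (wconc z a) \<longleftrightarrow> (map_sum id f c, map_sum id f d) \<in> fst (wconc z b)"
    proof (cases c; cases d)
      fix c1 d1 assume cd: "c = Inr c1" "d = Inr d1"
      hence "c1 \<in> A" "d1 \<in> A" using c d by auto
      thus ?thesis using cd seg_embD(4)[OF f] by simp
    next
      fix c1 d1 assume cd: "c = Inl c1" "d = Inr d1"
      hence "d1 \<in> A" using d by auto
      thus ?thesis using cd seg_embD(3)[OF f] AF by auto
    qed (use c d in auto) }
  { fix e assume e: "(e, map_sum id f c) \<in> fst (wconc z b)"
    show "e \<in> map_sum id f ` (Inl ` Field (fst z) \<union> Inr ` A)"
    proof (cases c; cases e)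
      fix c1 e1 assume ce: "c = Inl c1" "e = Inl e1"
      hence "e1 \<in> Field (fst z)" using e by (auto intro: FieldI1)
      thus ?thesis using ce by force
    next
      fix c1 e1 assume ce: "c = Inr c1" "e = Inl e1"
      hence "e1 \<in> Field (fst z)" using e by auto
      thus ?thesis using ce by force
    next
      fix c1 e1 assume ce: "c = Inr c1" "e = Inr e1"
      hence c1: "c1 \<in> A" "(e1, f c1) \<in> fst b" using c e by auto
      then obtain a1 where "a1 \<in> A" "e1 = f a1" using seg_embD(5)[OF f] by blast
      thus ?thesis using ce by force
    next
      fix c1 e1 assume ce: "c = Inl c1" "e = Inr e1"
      thus ?thesis using e by auto
    qed }
qed

lemma under_wconc_Inr:
  assumes "p \<in> Field (fst y)"
  shows "under (fst (wconc x y)) (Inr p) = Inl ` Field (fst x) \<union> Inr ` under (fst y) p"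
proof
  show "under (fst (wconc x y)) (Inr p) \<subseteq> Inl ` Field (fst x) \<union> Inr ` under (fst y) p"
  proof
    fix c assume "c \<in> under (fst (wconc x y)) (Inr p)"
    thus "c \<in> Inl ` Field (fst x) \<union> Inr ` under (fst y) p" unfolding under_def by (cases c) auto
  qed
  show "Inl ` Field (fst x) \<union> Inr ` under (fst y) p \<subseteq> under (fst (wconc x y)) (Inr p)"
    using assms unfolding under_def by auto
qed

lemma underS_wconc_Inr:
  assumes "p \<in> Field (fst y)"
  shows "underS (fst (wconc x y)) (Inr p) = Inl ` Field (fst x) \<union> Inr ` underS (fst y) p"
proof
  show "underS (fst (wconc x y)) (Inr p) \<subseteq> Inl ` Field (fst x) \<union> Inr ` underS (fst y) p"
  proof
    fix c assume "c \<in> underS (fst (wconc x y)) (Inr p)"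
    thus "c \<in> Inl ` Field (fst x) \<union> Inr ` underS (fst y) p" unfolding underS_def by (cases c) auto
  qed
  show "Inl ` Field (fst x) \<union> Inr ` underS (fst y) p \<subseteq> underS (fst (wconc x y)) (Inr p)"
    using assms unfolding underS_def by auto
qed

lemma wstr_less_prepend:
  assumes wz: "wo z" and s: "wstr_less a b"
  shows "wstr_less (wconc z a) (wconc z b)"
proof -
  obtain p f where pf: "p \<in> Field (fst a)" "seg_emb (fst a) (fst b) (under (fst a) p) f"
    "\<And>q. q \<in> underS (fst a) p \<Longrightarrow> snd b (f q) = snd a q" "snd a p < snd b (f p)"
    using wstr_lessE[OF s] by blast
  show ?thesis
  proof (rule wstr_lessI[where p="Inr p" and f="map_sum id f"])
    show "Inr p \<in> Field (fst (wconc z a))" using pf(1) by simp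
    show "seg_emb (fst (wconc z a)) (fst (wconc z b)) (under (fst (wconc z a)) (Inr p)) (map_sum id f)"
      unfolding under_wconc_Inr[OF pf(1)] by (rule seg_emb_map_sum[OF wz pf(2)])
    fix q assume "q \<in> underS (fst (wconc z a)) (Inr p)"
    thus "snd (wconc z b) (map_sum id f q) = snd (wconc z a) q"
      unfolding underS_wconc_Inr[OF pf(1)] using pf(3) by auto
  next
    show "snd (wconc z a) (Inr p) < snd (wconc z b) (map_sum id f (Inr p))" using pf(4) by simp
  qed
qed

lemma wlex_le_prepend:
  assumes wz: "wo z" and wa: "wo a" and wb: "wo b" and le: "wlex_le a b"
  shows "wlex_le (wconc z a) (wconc z b)"
  using le unfolding wlex_le_def
proof
  assume "wprefix a b"
  then obtain f where f: "seg_emb (fst a) (fst b) (Field (fst a)) f" "\<forall>p\<in>Field (fst a). snd b (f p) = snd a p"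
    unfolding wprefix_def by blast
  have "seg_emb (fst (wconc z a)) (fst (wconc z b)) (Field (fst (wconc z a))) (map_sum id f)"
    using seg_emb_map_sum[OF wz f(1)] unfolding Field_wconc .
  moreover have "\<forall>p\<in>Field (fst (wconc z a)). snd (wconc z b) (map_sum id f p) = snd (wconc z a) p"
    unfolding Field_wconc using f(2) by auto
  ultimately show "wprefix (wconc z a) (wconc z b) \<or> wstr_less (wconc z a) (wconc z b)"
    unfolding wprefix_def by blast
next
  assume "wstr_less a b"
  thus "wprefix (wconc z a) (wconc z b) \<or> wstr_less (wconc z a) (wconc z b)"
    using wstr_less_prepend[OF wz] by blast
qed
lemma wprefix_wconc:
  assumes wx: "wo x" and wy: "wo y"
  shows "wprefix x (wconc x y)"
  unfolding wprefix_def
proof (intro exI conjI)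
  show "seg_emb (fst x) (fst (wconc x y)) (Field (fst x)) Inl"
  proof (rule seg_embI)
    fix c d assume c: "c \<in> Field (fst x)" and d: "(d, Inl c) \<in> fst (wconc x y)"
    show "d \<in> Inl ` Field (fst x)" using d by (cases d) (auto intro: FieldI1)
  qed auto
qed auto

lemma seg_emb_first_block:
  assumes wu: "wo u" and wk: "Well_order k" and m: "m \<in> Field k" and mmin: "\<And>o'. o' \<in> Field k \<Longrightarrow> (m,o') \<in> k"
  shows "seg_emb (fst u) (fst (wpow u k)) (Field (fst u)) (Pair m)"
proof (rule seg_embI)
  show "\<And>a. a \<in> Field (fst u) \<Longrightarrow> (m, a) \<in> Field (fst (wpow u k))" using m wu by simp
  show "\<And>a b. a \<in> Field (fst u) \<Longrightarrow> b \<in> Field (fst u) \<Longrightarrow> ((a, b) \<in> fst u) = (((m, a), m, b) \<in> fst (wpow u k))"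
    using m by simp
  fix c d assume c: "c \<in> Field (fst u)" and d: "(d, (m,c)) \<in> fst (wpow u k)"
  obtain d1 d2 where dd: "d = (d1,d2)" by (cases d)
  have "d1 \<in> Field k" "d2 \<in> Field (fst u)" "(d1, m) \<in> k \<and> d1 \<noteq> m \<or> d1 = m" using d dd by auto
  hence "d1 = m" using mmin wo_antisym[OF wk] by blast
  thus "d \<in> Pair m ` Field (fst u)" using dd \<open>d2 \<in> Field (fst u)\<close> by blast
qed

lemma wprefix_first_block:
  assumes wu: "wo u" and wk: "Well_order k" and m: "m \<in> Field k" and mmin: "\<And>o'. o' \<in> Field k \<Longrightarrow> (m,o') \<in> k"
  shows "wprefix u (wpow u k)"
  unfolding wprefix_def using seg_emb_first_block[OF assms] by auto

lemma seg_emb_Restr: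
  assumes wk: "Well_order k" and D: "D \<subseteq> Field k"
  obtains e where "seg_emb (Restr k D) k D e"
proof -
  have wD: "Well_order (Restr k D)" using Well_order_Restr[OF wk] .
  have FD: "Field (Restr k D) = D" using Field_Restr_of_subset[OF wk D] .
  from wellorders_totally_ordered[OF wD wk]
  consider e where "embed (Restr k D) k e" | e where "embed k (Restr k D) e" by blast
  thus ?thesis
  proof cases
    case 1
    show ?thesis using that seg_emb_of_embed[OF wD wk 1] unfolding FD by blast
  next
    case 2
    have e: "seg_emb k (Restr k D) (Field k) e" using seg_emb_of_embed[OF wk wD 2] .
    have eF: "\<And>a. a \<in> Field k \<Longrightarrow> e a \<in> D" using seg_embD(3)[OF e] FD by blast
    have ge: "\<And>a. a \<in> Field k \<Longrightarrow> (a, e a) \<in> k"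
    proof (rule wo_strict_mono_ge[OF wk])
      show "\<And>a. a \<in> Field k \<Longrightarrow> e a \<in> Field k" using eF D by blast
      fix a b assume ab: "(a,b) \<in> k" "a \<noteq> b"
      have aF: "a \<in> Field k" and bF: "b \<in> Field k" using ab(1) by (auto intro: FieldI1 FieldI2)
      have "(e a, e b) \<in> Restr k D" using seg_embD(4)[OF e aF bF] ab by simp
      moreover have "e a \<noteq> e b" using seg_emb_inj[OF wk e aF bF] ab by blast
      ultimately show "(e a, e b) \<in> k \<and> e a \<noteq> e b" by blast
    qed
    have img: "e ` Field k = D"
    proof
      show "e ` Field k \<subseteq> D" using eF by blast
      show "D \<subseteq> e ` Field k"
      proof
        fix d assume d: "d \<in> D"
        have dF: "d \<in> Field k" using d D by blast
        have "(d, e d) \<in> Restr k D" using ge[OF dF] d eF[OF dF] by blast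
        thus "d \<in> e ` Field k" using seg_embD(5)[OF e dF] by blast
      qed
    qed
    have "seg_emb (Restr k D) k (e ` Field k) (inv_into (Field k) e)" by (rule seg_emb_inv[OF wk e])
    thus ?thesis using that unfolding img by blast
  qed
qed

lemma wpow_split:
  assumes wu: "wo u" and wk: "Well_order k" and I: "I \<subseteq> Field k"
    and Icl: "\<And>a b. a \<in> I \<Longrightarrow> (b,a) \<in> k \<Longrightarrow> b \<in> I"
  shows "word_iso (wconc (wpow u (Restr k I)) (wpow u (Restr k (Field k - I)))) (wpow u k)"
proof -
  let ?P = "wpow u k"
  have wP: "wo ?P" using wo_wpow[OF wu wk] .
  have e1: "wrestr ?P (I \<times> Field (fst u)) = wpow u (Restr k I)" using wrestr_wpow[OF wu wk I] .
  have e2: "wrestr ?P ((Field k - I) \<times> Field (fst u)) = wpow u (Restr k (Field k - I))"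
    using wrestr_wpow[OF wu wk, of "Field k - I"] by blast
  have un: "(I \<times> Field (fst u)) \<union> ((Field k - I) \<times> Field (fst u)) = Field (fst ?P)"
    unfolding Field_wpow[OF wu] using I by blast
  have "word_iso (wconc (wrestr ?P (I \<times> Field (fst u))) (wrestr ?P ((Field k - I) \<times> Field (fst u))))
     (wrestr ?P ((I \<times> Field (fst u)) \<union> ((Field k - I) \<times> Field (fst u))))"
  proof (rule wconc_wrestr_iso[OF wP])
    show "I \<times> Field (fst u) \<inter> (Field k - I) \<times> Field (fst u) = {}" by blast
    fix s t assume s: "s \<in> I \<times> Field (fst u)" and t: "t \<in> (Field k - I) \<times> Field (fst u)"
    obtain s1 s2 t1 t2 where st: "s = (s1,s2)" "t = (t1,t2)" by (cases s; cases t)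
    have F: "s1 \<in> I" "s2 \<in> Field (fst u)" "t1 \<in> Field k" "t1 \<notin> I" "t2 \<in> Field (fst u)"
      using s t st by auto
    have s1F: "s1 \<in> Field k" using F I by blast
    have "(t1, s1) \<notin> k" using Icl F by blast
    hence "(s1, t1) \<in> k" using wo_total[OF wk s1F F(3)] by blast
    moreover have "s1 \<noteq> t1" using F by blast
    ultimately show "(s,t) \<in> fst ?P" using st F s1F by simp
  qed
  thus ?thesis unfolding e1 e2 un wrestr_Field .
qed

lemma wpow_Restr_iso_initial_segment:
  assumes wu: "wo u" and wk: "Well_order k" and D: "D \<subseteq> Field k"
  obtains I where "I \<subseteq> Field k" "\<And>a b. a \<in> I \<Longrightarrow> (b,a) \<in> k \<Longrightarrow> b \<in> I"
    "word_iso (wpow u (Restr k D)) (wpow u (Restr k I))"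
proof -
  obtain e where e: "seg_emb (Restr k D) k D e" using seg_emb_Restr[OF wk D] by blast
  have "rel_iso (Restr (Restr k D) D) (Restr k (e ` D)) e"
    by (rule rel_iso_Restr_seg_emb[OF Well_order_Restr[OF wk] e])
  moreover have "Restr (Restr k D) D = Restr k D" by blast
  ultimately have "word_iso (wpow u (Restr k D)) (wpow u (Restr k (e ` D)))"
    using word_iso_wpow_cong[OF wu wu word_iso_refl] by simp
  moreover have "e ` D \<subseteq> Field k" using seg_embD(3)[OF e] by blast
  ultimately show ?thesis using that seg_emb_image_closed[OF e] by blast
qed

lemma wprefix_wrestr_down:
  assumes wy: "wo y" and S: "S \<subseteq> Field (fst y)" and Scl: "\<And>a b. a \<in> S \<Longrightarrow> (b,a) \<in> fst y \<Longrightarrow> b \<in> S"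
  shows "wprefix (wrestr y S) y"
  unfolding wprefix_def
proof (intro exI conjI)
  have F: "Field (fst (wrestr y S)) = S" using Field_wrestr[OF wy] S by blast
  show "seg_emb (fst (wrestr y S)) (fst y) (Field (fst (wrestr y S))) id"
    unfolding seg_emb_def F
  proof (intro conjI ballI allI impI)
    show "S \<subseteq> S" by simp
    show "id ` S \<subseteq> Field (fst y)" using S by simp
    fix a assume a: "a \<in> S"
    { fix b assume "(b,a) \<in> fst (wrestr y S)" thus "b \<in> S" by simp }
    { fix b assume "b \<in> S" thus "((a, b) \<in> fst (wrestr y S)) = ((id a, id b) \<in> fst y)" using a by simp }
    { fix c assume "(c, id a) \<in> fst y" thus "c \<in> id ` S" using Scl a by simp }
  qed
qed simp

lemma wprefix_wpow_Restr:
  assumes wy: "wo y" and wb: "Well_order b" and D: "D \<subseteq> Field b"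
  shows "wprefix (wpow y (Restr b D)) (wpow y b)"
proof -
  obtain I where I: "I \<subseteq> Field b" "\<And>a c. a \<in> I \<Longrightarrow> (c,a) \<in> b \<Longrightarrow> c \<in> I"
    "word_iso (wpow y (Restr b D)) (wpow y (Restr b I))"
    using wpow_Restr_iso_initial_segment[OF wy wb D] by blast
  have "wprefix (wrestr (wpow y b) (I \<times> Field (fst y))) (wpow y b)"
  proof (rule wprefix_wrestr_down[OF wo_wpow[OF wy wb]])
    show "I \<times> Field (fst y) \<subseteq> Field (fst (wpow y b))" using I(1) wy by auto
    show "\<And>a c. a \<in> I \<times> Field (fst y) \<Longrightarrow> (c,a) \<in> fst (wpow y b) \<Longrightarrow> c \<in> I \<times> Field (fst y)"
      using I(2) by auto
  qed
  thus ?thesis unfolding wrestr_wpow[OF wy wb I(1)] using wprefix_trans[OF word_iso_wprefix[OF I(3)]] by blast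
qed

lemma wlex_le_pow_tail:
  fixes k :: "'k rel"
  assumes wu: "wo u" and wt: "wo t" and wk: "Well_order k" and D: "D \<subseteq> Field k"
    and R: "\<And>r :: 'k rel. Well_order r \<Longrightarrow> Field r \<noteq> {} \<Longrightarrow> wlex_le (wconc (wpow u r) t) t"
  shows "wlex_le (wconc (wpow u k) t) (wconc (wpow u (Restr k D)) t)"
proof -
  obtain I where I: "I \<subseteq> Field k" "\<And>a b. a \<in> I \<Longrightarrow> (b,a) \<in> k \<Longrightarrow> b \<in> I"
    "word_iso (wpow u (Restr k D)) (wpow u (Restr k I))"
    using wpow_Restr_iso_initial_segment[OF wu wk D] by blast
  let ?A = "wpow u (Restr k I)" and ?B = "wpow u (Restr k (Field k - I))"
  have wA: "wo ?A" and wB: "wo ?B" and wpk: "wo (wpow u k)"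
    using wo_wpow[OF wu] Well_order_Restr[OF wk] wk by blast+
  have "wlex_le (wconc (wpow u k) t) (wconc ?A t)"
  proof (cases "Field k - I = {}")
    case True
    hence "Restr k I = k" using I(1) Restr_Field by (metis Diff_eq_empty_iff subset_antisym)
    thus ?thesis using wprefix_wlex_le[OF wprefix_refl] by simp
  next
    case False
    \<comment> \<open>u^k t is u^I (u^(k - I) t), and u^(k - I) t is lexicographically below t\<close>
    have "word_iso (wconc (wpow u k) t) (wconc (wconc ?A ?B) t)"
      using word_iso_wconc_cong[OF wpk wt wo_wconc[OF wA wB] wt word_iso_sym[OF wpow_split[OF wu wk I(1,2)]] word_iso_refl] .
    hence i1: "word_iso (wconc (wpow u k) t) (wconc ?A (wconc ?B t))"
      using word_iso_trans wconc_assoc_iso[OF wA wB wt] by blast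
    have "Field (Restr k (Field k - I)) = Field k - I" using Field_Restr_of_subset[OF wk] by blast
    hence "wlex_le (wconc ?B t) t" using R[OF Well_order_Restr[OF wk]] False by simp
    hence "wlex_le (wconc ?A (wconc ?B t)) (wconc ?A t)" using wlex_le_prepend[OF wA wo_wconc[OF wB wt] wt] by blast
    thus ?thesis using wlex_le_iso_left[OF wo_wconc[OF wA wo_wconc[OF wB wt]] wo_wconc[OF wpk wt] i1] by blast
  qed
  moreover have "word_iso (wconc ?A t) (wconc (wpow u (Restr k D)) t)"
    using word_iso_wconc_cong[OF wA wt wo_wpow[OF wu Well_order_Restr[OF wk]] wt word_iso_sym[OF I(3)] word_iso_refl] .
  ultimately show ?thesis using wlex_le_iso_right[OF wo_wconc[OF wpk wt]] by blast
qed
section \<open>Decomposing a word along the powers of a prefix\<close>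

lemma wpow_between_same_block:
  assumes wk: "Well_order k"
    and h1: "((ob,q), c) \<in> fst (wpow u k)" and h2: "(c, (ob,q')) \<in> fst (wpow u k)"
  shows "fst c = ob \<and> (q, snd c) \<in> fst u \<and> (snd c, q') \<in> fst u"
proof -
  obtain c1 c2 where cc: "c = (c1,c2)" by (cases c)
  have a: "((ob,c1) \<in> k \<and> ob \<noteq> c1) \<or> (ob = c1 \<and> (q,c2) \<in> fst u)"
    and b: "((c1,ob) \<in> k \<and> c1 \<noteq> ob) \<or> (c1 = ob \<and> (c2,q') \<in> fst u)"
    using h1 h2 cc by auto
  have "c1 = ob" using a b wo_antisym[OF wk] by blast
  thus ?thesis using a b cc by auto
qed

lemma seg_emb_into_block:
  assumes wx: "wo x" and wu: "wo u" and wk: "Well_order k"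
    and m: "m \<in> Field (fst u)" and mmin: "\<And>c. c \<in> Field (fst u) \<Longrightarrow> (m,c) \<in> fst u"
    and g: "seg_emb (fst x) (fst (wpow u k)) A g" and p0: "p0 \<in> A" and gp0: "g p0 = (ob,m)"
    and below: "\<And>a. a \<in> A \<Longrightarrow> (g a, (ob,q)) \<in> fst (wpow u k)"
  shows "seg_emb (fst (wsuffix x p0)) (fst u) (A \<inter> above (fst x) p0) (snd \<circ> g)"
    and "\<And>a. a \<in> A \<inter> above (fst x) p0 \<Longrightarrow> g a = (ob, snd (g a))"
proof -
  have blk: "g a = (ob, snd (g a)) \<and> snd (g a) \<in> Field (fst u)" if a: "a \<in> A \<inter> above (fst x) p0" for a
  proof -
    have "(g p0, g a) \<in> fst (wpow u k)" using seg_embD(4)[OF g p0, of a] a unfolding above_def by simp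
    hence "((ob,m), g a) \<in> fst (wpow u k)" using gp0 by simp
    hence "fst (g a) = ob \<and> snd (g a) \<in> Field (fst u)"
      using wpow_between_same_block[OF wk _ below] a by (blast intro: FieldI1)
    thus ?thesis by (metis prod.collapse)
  qed
  thus "\<And>a. a \<in> A \<inter> above (fst x) p0 \<Longrightarrow> g a = (ob, snd (g a))" by blast
  have obF: "ob \<in> Field k" using seg_embD(3)[OF g p0] gp0 wu by simp
  show "seg_emb (fst (wsuffix x p0)) (fst u) (A \<inter> above (fst x) p0) (snd \<circ> g)"
    unfolding seg_emb_def
  proof (intro conjI ballI allI impI)
    show "A \<inter> above (fst x) p0 \<subseteq> Field (fst (wsuffix x p0))" using Field_suffix[OF wx] by blast
    show "(snd \<circ> g) ` (A \<inter> above (fst x) p0) \<subseteq> Field (fst u)" using blk by auto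
    fix a assume a: "a \<in> A \<inter> above (fst x) p0"
    { fix b assume "(b,a) \<in> fst (wsuffix x p0)"
      thus "b \<in> A \<inter> above (fst x) p0" using seg_embD(2)[OF g] a by auto }
    { fix b assume b: "b \<in> A \<inter> above (fst x) p0"
      have "(a,b) \<in> fst (wsuffix x p0) \<longleftrightarrow> (g a, g b) \<in> fst (wpow u k)"
        using seg_embD(4)[OF g] a b by auto
      also have "\<dots> \<longleftrightarrow> ((snd \<circ> g) a, (snd \<circ> g) b) \<in> fst u"
        using blk[OF a] blk[OF b] obF by (metis wpow_rel comp_apply)
      finally show "(a,b) \<in> fst (wsuffix x p0) \<longleftrightarrow> ((snd \<circ> g) a, (snd \<circ> g) b) \<in> fst u" . }
    { fix d assume d: "(d, (snd \<circ> g) a) \<in> fst u"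
      have dF: "d \<in> Field (fst u)" using d by (rule FieldI1)
      have "((ob,d), g a) \<in> fst (wpow u k)" using blk[OF a] d dF obF by (metis wpow_rel comp_apply)
      then obtain b where b: "b \<in> A" "(ob,d) = g b" using seg_embD(5)[OF g] a by blast
      have "((ob,m),(ob,d)) \<in> fst (wpow u k)" using obF m dF mmin[OF dF] by simp
      hence "(p0, b) \<in> fst x" using seg_embD(4)[OF g p0 b(1)] gp0 b(2) by simp
      hence "b \<in> A \<inter> above (fst x) p0" using b(1) unfolding above_def by blast
      moreover have "d = (snd \<circ> g) b" using b(2) by (metis comp_apply snd_conv)
      ultimately show "d \<in> (snd \<circ> g) ` (A \<inter> above (fst x) p0)" by blast }
  qed
qed

lemma seg_emb_block_into_suffix:
  assumes wx: "wo x" and wu: "wo u" and wk: "Well_order k"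
    and m: "m \<in> Field (fst u)" and mmin: "\<And>c. c \<in> Field (fst u) \<Longrightarrow> (m,c) \<in> fst u"
    and g: "seg_emb (fst (wpow u k)) (fst x) A g" and c: "(ob,q) \<in> A"
  shows "seg_emb (fst u) (fst (wsuffix x (g (ob,m)))) (under (fst u) q) (\<lambda>c'. g (ob,c'))"
proof -
  let ?U = "wpow u k" and ?p0 = "g (ob,m)" and ?psi = "\<lambda>c'. g (ob,c')"
  have obF: "ob \<in> Field k" and qF: "q \<in> Field (fst u)" using seg_embD(1)[OF g] c wu by auto
  have inA: "(ob,c') \<in> A" if "c' \<in> under (fst u) q" for c'
  proof -
    have "(c',q) \<in> fst u" using that unfolding under_def by blast
    hence "((ob,c'),(ob,q)) \<in> fst ?U" using obF qF by (auto intro: FieldI1)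
    thus ?thesis using seg_embD(2)[OF g c] by blast
  qed
  have omA: "(ob,m) \<in> A" using inA[of m] mmin[OF qF] m unfolding under_def by blast
  have above: "?psi c' \<in> above (fst x) ?p0" if c': "c' \<in> under (fst u) q" for c'
  proof -
    have c'F: "c' \<in> Field (fst u)" using c' under_Field[of "fst u" q] by blast
    have "((ob,m),(ob,c')) \<in> fst ?U" using obF m c'F mmin[OF c'F] by simp
    thus ?thesis using seg_embD(4)[OF g omA inA[OF c']] unfolding above_def by simp
  qed
  show ?thesis
    unfolding seg_emb_def
  proof (intro conjI ballI allI impI)
    show "under (fst u) q \<subseteq> Field (fst u)" by (rule under_Field)
    show "\<And>a b. a \<in> under (fst u) q \<Longrightarrow> (b, a) \<in> fst u \<Longrightarrow> b \<in> under (fst u) q"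
      using under_closed[OF wu, of _ q] by metis
    show "?psi ` under (fst u) q \<subseteq> Field (fst (wsuffix x ?p0))"
      using above Field_suffix[OF wx] by blast
    fix a assume a: "a \<in> under (fst u) q"
    have aF: "a \<in> Field (fst u)" using a under_Field[of "fst u" q] by blast
    { fix b assume b: "b \<in> under (fst u) q"
      have bF: "b \<in> Field (fst u)" using b under_Field[of "fst u" q] by blast
      have "(a,b) \<in> fst u \<longleftrightarrow> ((ob,a),(ob,b)) \<in> fst ?U" using aF bF obF by simp
      also have "\<dots> \<longleftrightarrow> (?psi a, ?psi b) \<in> fst x" using seg_embD(4)[OF g inA[OF a] inA[OF b]] .
      also have "\<dots> \<longleftrightarrow> (?psi a, ?psi b) \<in> fst (wsuffix x ?p0)" using above[OF a] above[OF b] by simp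
      finally show "(a,b) \<in> fst u \<longleftrightarrow> (?psi a, ?psi b) \<in> fst (wsuffix x ?p0)" . }
    { fix e assume e: "(e, ?psi a) \<in> fst (wsuffix x ?p0)"
      have ev: "(e, ?psi a) \<in> fst x" and ea: "(?p0, e) \<in> fst x" using e unfolding above_def by auto
      obtain b where b: "b \<in> A" "e = g b" using seg_embD(5)[OF g inA[OF a] ev] by blast
      have h1: "((ob,m), b) \<in> fst ?U" using seg_embD(4)[OF g omA b(1)] ea b(2) by simp
      have h2: "(b, (ob,a)) \<in> fst ?U" using seg_embD(4)[OF g b(1) inA[OF a]] ev b(2) by simp
      have sb: "fst b = ob \<and> (snd b, a) \<in> fst u"
        using wpow_between_same_block[OF wk h1 h2] by blast
      hence "snd b \<in> under (fst u) q" using a wo_trans[OF wu] unfolding under_def by blast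
      moreover have "e = ?psi (snd b)" using sb b(2) by (metis prod.collapse)
      ultimately show "e \<in> ?psi ` under (fst u) q" by blast }
  qed
qed

lemma prefix_before_block_iso:
  assumes wx: "wo x" and wu: "wo u" and wk: "Well_order k"
    and m: "m \<in> Field (fst u)" and mmin: "\<And>c. c \<in> Field (fst u) \<Longrightarrow> (m,c) \<in> fst u"
    and g: "seg_emb (fst (wpow u k)) (fst x) A g" and om: "(ob,m) \<in> A"
    and lab: "\<And>a. a \<in> underS (fst (wpow u k)) (ob,m) \<Longrightarrow> snd x (g a) = snd u (snd a)"
  shows "word_iso (wrestr x (underS (fst x) (g (ob,m)))) (wpow u (Restr k (underS k ob)))"
proof -
  let ?U = "wpow u k" and ?B = "underS (fst (wpow u k)) (ob,m)"
  have wU: "wo ?U" using wo_wpow[OF wu wk] .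
  have obF: "ob \<in> Field k" using seg_embD(1)[OF g] om wu by auto
  have Bcl: "\<And>a b. a \<in> ?B \<Longrightarrow> (b,a) \<in> fst ?U \<Longrightarrow> b \<in> ?B"
    unfolding underS_def using wo_trans[OF wU] wo_antisym[OF wU] by blast
  have "?B \<subseteq> A" using seg_embD(2)[OF g om] unfolding underS_def by blast
  hence gB: "seg_emb (fst ?U) (fst x) ?B g" by (rule seg_emb_restr[OF g _ Bcl])
  have "word_iso (wrestr ?U ?B) (wrestr x (g ` ?B))"
    by (rule wrestr_seg_emb_iso[OF wU wx gB _ subset_refl]) (simp add: lab)
  moreover have "g ` ?B = underS (fst x) (g (ob,m))" by (rule seg_emb_underS_image[OF wU g om])
  moreover have "?B = underS k ob \<times> Field (fst u)" by (rule underS_wpow_min[OF wu wk obF m mmin])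
  moreover have "underS k ob \<subseteq> Field k" unfolding underS_def Field_def by blast
  ultimately show ?thesis using wrestr_wpow[OF wu wk] word_iso_sym by metis
qed

definition lex_le_suffixes :: "('i,'a::linorder) wrd \<Rightarrow> bool" where
  "lex_le_suffixes x \<longleftrightarrow> (\<forall>p\<in>Field (fst x). (\<exists>q. (q,p) \<in> fst x \<and> q \<noteq> p) \<longrightarrow> wlex_le x (wsuffix x p))"

locale prefix_decomposition =
  fixes u :: "('i,'a::linorder) wrd" and v :: "('j,'a) wrd" and m :: 'i
  assumes wu: "wo u" and wv: "wo v" and m: "m \<in> Field (fst u)"
    and mmin: "\<And>c. c \<in> Field (fst u) \<Longrightarrow> (m,c) \<in> fst u"
    and puv: "wprefix u v" and niso: "\<not> word_iso u v" and plv: "lex_le_suffixes v"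
    and notpow: "\<And>b :: 'j rel. Well_order b \<Longrightarrow> Field b \<subseteq> Field (fst v) \<Longrightarrow> word_iso v (wpow u b) \<Longrightarrow> False"
begin

abbreviation "k \<equiv> fst v"
abbreviation "U \<equiv> wpow u (fst v)"

lemma wU: "wo U" using wo_wpow[OF wu wv] .

lemma not_wlex_le_v_u: "\<not> wlex_le v u"
  using wlex_le_antisym[OF wv wu _ wprefix_wlex_le[OF puv]] niso word_iso_sym by blast

lemma suffix_v_not_below_u:
  assumes p0: "p0 \<in> Field (fst v)"
  shows "\<not> wlex_le (wsuffix v p0) u"
proof
  assume tu: "wlex_le (wsuffix v p0) u"
  have "wlex_le v (wsuffix v p0)"
  proof (cases "\<exists>q. (q,p0) \<in> fst v \<and> q \<noteq> p0")
    case True thus ?thesis using plv p0 unfolding lex_le_suffixes_def by blast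
  next
    case False thus ?thesis using suffix_min[OF wv p0] wprefix_wlex_le[OF wprefix_refl] by simp
  qed
  thus False using wlex_le_trans[OF wv wo_wrestr[OF wv] wu _ tu] not_wlex_le_v_u by blast
qed

lemma not_wprefix_U_v: "\<not> wprefix U v"
proof
  assume "wprefix U v"
  then obtain g where g: "seg_emb (fst U) (fst v) (Field (fst U)) g" "\<forall>a\<in>Field (fst U). snd v (g a) = snd U a"
    unfolding wprefix_def by blast
  have gF: "\<And>a. a \<in> Field k \<Longrightarrow> g (a,m) \<in> Field k" using seg_embD(3)[OF g(1)] m wu by simp
  \<comment> \<open>U has a block for every position of v, so the embedding cannot stop before the end of v\<close>
  have ge: "\<And>a. a \<in> Field k \<Longrightarrow> (a, g (a,m)) \<in> k"
  proof (rule wo_strict_mono_ge[OF wv gF])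
    fix a b assume ab: "(a,b) \<in> k" "a \<noteq> b"
    have F: "(a,m) \<in> Field (fst U)" "(b,m) \<in> Field (fst U)" using ab(1) m wu by (auto intro: FieldI1 FieldI2)
    have "((a,m),(b,m)) \<in> fst U" using ab F wu by auto
    thus "(g (a,m), g (b,m)) \<in> k \<and> g (a,m) \<noteq> g (b,m)"
      using seg_embD(4)[OF g(1) F] seg_emb_inj[OF wU g(1) F] ab by auto
  qed
  have "g ` Field (fst U) = Field k"
  proof
    show "g ` Field (fst U) \<subseteq> Field k" using seg_embD(3)[OF g(1)] by blast
    show "Field k \<subseteq> g ` Field (fst U)"
    proof
      fix b assume b: "b \<in> Field k"
      have "(b,m) \<in> Field (fst U)" using b m wu by simp
      thus "b \<in> g ` Field (fst U)" using seg_embD(5)[OF g(1) _ ge[OF b]] by blast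
    qed
  qed
  thus False using seg_emb_onto_word_iso[OF wU g(1) _ g(2)] notpow[OF wv] word_iso_sym by blast
qed
lemma not_wprefix_v_U: "\<not> wprefix v U"
proof
  assume "wprefix v U"
  then obtain g where g: "seg_emb (fst v) (fst U) (Field (fst v)) g" "\<forall>a\<in>Field (fst v). snd U (g a) = snd v a"
    unfolding wprefix_def by blast
  show False
  proof (cases "g ` Field (fst v) = Field (fst U)")
    case True
    thus False using seg_emb_onto_word_iso[OF wv g(1) True g(2)] notpow[OF wv] by blast
  next
    case False
    then obtain c where c: "c \<in> Field (fst U)" "c \<notin> g ` Field (fst v)" and img: "g ` Field (fst v) = underS (fst U) c"
      using seg_emb_not_onto[OF wU g(1)] by blast
    obtain ob q where obq: "c = (ob,q)" by (cases c)
    have obF: "ob \<in> Field k" and qF: "q \<in> Field (fst u)" using c obq wu by auto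
    have omq: "((ob,m),(ob,q)) \<in> fst U" using obF m qF mmin[OF qF] by simp
    show False
    proof (cases "(ob,m) \<in> g ` Field (fst v)")
      case False
      have "(ob,m) \<notin> underS (fst U) c" using False img by simp
      hence ceq: "c = (ob,m)" using omq obq unfolding underS_def by blast
      have BF: "underS k ob \<subseteq> Field k" unfolding underS_def Field_def by blast
      have "word_iso v (wrestr U (g ` Field (fst v)))"
        using wrestr_seg_emb_iso[OF wv wU g(1) _ subset_refl] g(2) unfolding wrestr_Field by blast
      moreover have "underS (fst U) (ob,m) = underS k ob \<times> Field (fst u)"
        by (rule underS_wpow_min[OF wu wv obF m mmin])
      ultimately have "word_iso v (wrestr U (underS k ob \<times> Field (fst u)))"
        unfolding img ceq by simp
      hence "word_iso v (wpow u (Restr k (underS k ob)))" unfolding wrestr_wpow[OF wu wv BF] .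
      moreover have "Field (Restr k (underS k ob)) \<subseteq> Field k"
        using Field_Restr_subset[of k "underS k ob"] BF by (rule subset_trans)
      ultimately show False using notpow[OF Well_order_Restr[OF wv]] by blast
    next
      case True
      then obtain p0 where p0: "p0 \<in> Field (fst v)" "g p0 = (ob,m)" by (metis imageE)
      have below: "\<And>a. a \<in> Field (fst v) \<Longrightarrow> (g a, (ob,q)) \<in> fst U"
        using img obq unfolding underS_def by blast
      have F: "Field (fst v) \<inter> above (fst v) p0 = Field (fst (wsuffix v p0))"
        unfolding Field_suffix[OF wv] using above_Field[of "fst v" p0] by blast
      note blk = seg_emb_into_block[OF wv wu wv m mmin g(1) p0 below, unfolded F]
      have "snd u ((snd \<circ> g) a) = snd (wsuffix v p0) a" if "a \<in> Field (fst (wsuffix v p0))" for a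
      proof -
        have "a \<in> Field (fst v)" using that F by blast
        thus ?thesis using g(2) by simp
      qed
      hence "wprefix (wsuffix v p0) u" using blk(1) unfolding wprefix_def by blast
      thus False using suffix_v_not_below_u[OF p0(1)] wprefix_wlex_le by blast
    qed
  qed
qed
lemma not_wstr_less_v_U: "\<not> wstr_less v U"
proof
  assume "wstr_less v U"
  then obtain p g where pg: "p \<in> Field (fst v)" "seg_emb (fst v) (fst U) (under (fst v) p) g"
    "\<And>a. a \<in> underS (fst v) p \<Longrightarrow> snd U (g a) = snd v a" "snd v p < snd U (g p)"
    using wstr_lessE by blast
  have pu: "p \<in> under (fst v) p" using under_self[OF wv pg(1)] .
  obtain ob q where gp: "g p = (ob,q)" by (cases "g p")
  have "g p \<in> Field (fst U)" using seg_embD(3)[OF pg(2) pu] .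
  hence obF: "ob \<in> Field k" and qF: "q \<in> Field (fst u)" using gp wu by auto
  have "((ob,m), g p) \<in> fst U" using obF m qF mmin[OF qF] gp by simp
  then obtain p0 where p0: "p0 \<in> under (fst v) p" "g p0 = (ob,m)"
    using seg_embD(5)[OF pg(2) pu] by (metis imageE)
  have below: "(g a, (ob,q)) \<in> fst U" if a: "a \<in> under (fst v) p" for a
    using seg_embD(4)[OF pg(2) a pu] a gp unfolding under_def by simp
  have pp0: "(p0, p) \<in> fst v" using p0(1) unfolding under_def by blast
  have ut: "under (fst v) p \<inter> above (fst v) p0 = under (fst (wsuffix v p0)) p"
    using pp0 unfolding under_def above_def by auto
  note blk = seg_emb_into_block[OF wv wu wv m mmin pg(2) p0 below, unfolded ut]
  have pt: "p \<in> Field (fst (wsuffix v p0))" using Field_suffix[OF wv] pp0 unfolding above_def by blast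
  have "wstr_less (wsuffix v p0) u"
  proof (rule wstr_lessI[OF pt blk(1)])
    fix a assume "a \<in> underS (fst (wsuffix v p0)) p"
    hence "a \<in> under (fst (wsuffix v p0)) p" "a \<in> underS (fst v) p" unfolding under_def underS_def by auto
    thus "snd u ((snd \<circ> g) a) = snd (wsuffix v p0) a" using pg(3) by simp
  next
    have "p \<in> under (fst (wsuffix v p0)) p" using under_self[OF wo_wrestr[OF wv] pt] .
    thus "snd (wsuffix v p0) p < snd u ((snd \<circ> g) p)" using pg(4) by simp
  qed
  thus False using suffix_v_not_below_u[OF FieldI1[OF pp0]] wstr_less_wlex_le by blast
qed
lemma decomposition_of_wstr_less_U_v:
  assumes "wstr_less U v"
  shows "\<exists>(mu :: 'j rel) (t :: ('j,'a) wrd). Well_order mu \<and> wo t \<and> word_iso v (wconc (wpow u mu) t) \<and> wstr_less u t"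
proof -
  obtain c g where cg: "c \<in> Field (fst U)" "seg_emb (fst U) (fst v) (under (fst U) c) g"
    "\<And>a. a \<in> underS (fst U) c \<Longrightarrow> snd v (g a) = snd U a" "snd U c < snd v (g c)"
    using wstr_lessE[OF assms] by blast
  obtain ob q where c: "c = (ob,q)" by (cases c)
  have obF: "ob \<in> Field k" and qF: "q \<in> Field (fst u)" using cg(1) c wu by auto
  have cu: "(ob,q) \<in> under (fst U) c" using under_self[OF wU cg(1)] c by simp
  have omu: "(ob,m) \<in> under (fst U) c" using obF m qF mmin[OF qF] c unfolding under_def by simp
  let ?p0 = "g (ob,m)"
  let ?t = "wsuffix v ?p0" and ?mu = "Restr k (underS k ob)"
  have p0F: "?p0 \<in> Field (fst v)" using seg_embD(3)[OF cg(2) omu] .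
  have wt: "wo ?t" and wmu: "Well_order ?mu" using wo_wrestr[OF wv] Well_order_Restr[OF wv] by blast+
  have "wstr_less u ?t"
  proof (rule wstr_lessI[OF qF seg_emb_block_into_suffix[OF wv wu wv m mmin cg(2) cu]])
    fix a assume "a \<in> underS (fst u) q"
    hence "(ob,a) \<in> underS (fst U) c" using obF qF c unfolding underS_def by (auto intro: FieldI1)
    thus "snd ?t (g (ob,a)) = snd u a" using cg(3) by simp
  next
    show "snd u q < snd ?t (g (ob,q))" using cg(4) c by simp
  qed
  moreover have "word_iso (wrestr v (underS (fst v) ?p0)) (wpow u ?mu)"
  proof (rule prefix_before_block_iso[OF wv wu wv m mmin cg(2) omu])
    fix a assume "a \<in> underS (fst U) (ob,m)"
    hence "a \<in> underS (fst U) c"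
      using omu wo_trans[OF wU] wo_antisym[OF wU] unfolding under_def underS_def by blast
    thus "snd v (g a) = snd u (snd a)" using cg(3) by simp
  qed
  hence "word_iso (wconc (wrestr v (underS (fst v) ?p0)) ?t) (wconc (wpow u ?mu) ?t)"
    by (rule word_iso_wconc_cong[OF wo_wrestr[OF wv] wt wo_wpow[OF wu wmu] wt _ word_iso_refl])
  hence "word_iso v (wconc (wpow u ?mu) ?t)"
    using word_iso_trans[OF word_iso_sym[OF wconc_underS_suffix_iso[OF wv p0F]]] by blast
  ultimately show ?thesis using wmu wt by blast
qed
lemma decomposition:
  "\<exists>(mu :: 'j rel) (t :: ('j,'a) wrd). Well_order mu \<and> wo t \<and> word_iso v (wconc (wpow u mu) t) \<and> wstr_less u t"
  using word_comparable[OF wv wU] not_wprefix_U_v not_wprefix_v_U not_wstr_less_v_U decomposition_of_wstr_less_U_v by blast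

end

section \<open>Prepending powers of u\<close>

definition ord_sum :: "'a rel \<Rightarrow> 'b rel \<Rightarrow> ('a + 'b) rel" where
  "ord_sum a b = fst (wconc (a, \<lambda>_. ()) (b, \<lambda>_. ()))"

lemma wo_ord_sum: "Well_order a \<Longrightarrow> Well_order b \<Longrightarrow> Well_order (ord_sum a b)"
  unfolding ord_sum_def using wo_wconc[of "(a, \<lambda>_. ())" "(b, \<lambda>_. ())"] by simp

lemma Field_ord_sum: "Field (ord_sum a b) = Inl ` Field a \<union> Inr ` Field b"
  unfolding ord_sum_def using Field_wconc[of "(a, \<lambda>_. ())" "(b, \<lambda>_. ())"] by simp

lemma ord_sum_rel[simp]:
  "(Inl x, Inl y) \<in> ord_sum a b \<longleftrightarrow> (x,y) \<in> a"
  "(Inr x', Inr y') \<in> ord_sum a b \<longleftrightarrow> (x',y') \<in> b"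
  "(Inl x, Inr y') \<in> ord_sum a b \<longleftrightarrow> x \<in> Field a \<and> y' \<in> Field b"
  "(Inr x', Inl y) \<notin> ord_sum a b"
  unfolding ord_sum_def using wconc_rel[of _ _ "(a, \<lambda>_. ())" "(b, \<lambda>_. ())"] by auto

lemma rel_iso_Inl:
  assumes wa: "Well_order a" and wb: "Well_order b"
  shows "rel_iso a (Restr (ord_sum a b) (Inl ` Field a)) Inl"
proof -
  have sub: "Inl ` Field a \<subseteq> Field (ord_sum a b)" unfolding Field_ord_sum by blast
  have F: "Field (Restr (ord_sum a b) (Inl ` Field a)) = Inl ` Field a"
    by (rule Field_Restr_of_subset[OF wo_ord_sum[OF wa wb] sub])
  show ?thesis unfolding rel_iso_def F bij_betw_def inj_on_def by simp
qed

lemma rel_iso_Inr: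
  assumes wa: "Well_order a" and wb: "Well_order b"
  shows "rel_iso b (Restr (ord_sum a b) (Inr ` Field b)) Inr"
proof -
  have sub: "Inr ` Field b \<subseteq> Field (ord_sum a b)" unfolding Field_ord_sum by blast
  have F: "Field (Restr (ord_sum a b) (Inr ` Field b)) = Inr ` Field b"
    by (rule Field_Restr_of_subset[OF wo_ord_sum[OF wa wb] sub])
  show ?thesis unfolding rel_iso_def F bij_betw_def inj_on_def by simp
qed

lemma wpow_ord_sum:
  assumes wu: "wo u" and wa: "Well_order a" and wb: "Well_order b"
  shows "word_iso (wconc (wpow u a) (wpow u b)) (wpow u (ord_sum a b))"
proof -
  let ?k = "ord_sum a b"
  have wk: "Well_order ?k" using wo_ord_sum[OF wa wb] .
  have I: "Inl ` Field a \<subseteq> Field ?k" unfolding Field_ord_sum by blast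
  have Icl: "\<And>x y. x \<in> Inl ` Field a \<Longrightarrow> (y,x) \<in> ?k \<Longrightarrow> y \<in> Inl ` Field a"
  proof -
    fix x y assume x: "x \<in> Inl ` Field a" and yx: "(y,x) \<in> ?k"
    then obtain x1 where x1: "x = Inl x1" by blast
    show "y \<in> Inl ` Field a"
    proof (cases y)
      case (Inl y1) thus ?thesis using yx x1 by (auto intro: FieldI1)
    next
      case (Inr y1) thus ?thesis using yx x1 by auto
    qed
  qed
  have D: "Field ?k - Inl ` Field a = Inr ` Field b" unfolding Field_ord_sum by blast
  have sp: "word_iso (wconc (wpow u (Restr ?k (Inl ` Field a))) (wpow u (Restr ?k (Inr ` Field b)))) (wpow u ?k)"
    using wpow_split[OF wu wk I Icl] unfolding D .
  have wI: "Well_order (Restr ?k (Inl ` Field a))" and wJ: "Well_order (Restr ?k (Inr ` Field b))"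
    using Well_order_Restr[OF wk] by blast+
  have i1: "word_iso (wpow u a) (wpow u (Restr ?k (Inl ` Field a)))"
    using word_iso_wpow_cong[OF wu wu word_iso_refl rel_iso_Inl[OF wa wb]] .
  have i2: "word_iso (wpow u b) (wpow u (Restr ?k (Inr ` Field b)))"
    using word_iso_wpow_cong[OF wu wu word_iso_refl rel_iso_Inr[OF wa wb]] .
  have "word_iso (wconc (wpow u a) (wpow u b)) (wconc (wpow u (Restr ?k (Inl ` Field a))) (wpow u (Restr ?k (Inr ` Field b))))"
    by (rule word_iso_wconc_cong[OF wo_wpow[OF wu wa] wo_wpow[OF wu wb] wo_wpow[OF wu wI] wo_wpow[OF wu wJ] i1 i2])
  thus ?thesis using word_iso_trans sp by blast
qed

lemma wpow_wconc_wlex_le_of_wstr_less: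
  assumes wu: "wo u" and wt: "wo t" and s: "wstr_less u t" and wr: "Well_order r" and ne: "Field r \<noteq> {}"
  shows "wlex_le (wconc (wpow u r) t) t"
proof -
  obtain m0 where m0: "m0 \<in> Field r" "\<forall>s\<in>Field r. (m0,s) \<in> r" using wo_min[OF wr subset_refl ne] by blast
  have p1: "wprefix u (wpow u r)" using wprefix_first_block[OF wu wr m0(1)] m0(2) by blast
  have p2: "wprefix (wpow u r) (wconc (wpow u r) t)" using wprefix_wconc[OF wo_wpow[OF wu wr] wt] .
  have "wstr_less (wconc (wpow u r) t) t"
    using wprefix_wstr_less_left[OF wu wo_wconc[OF wo_wpow[OF wu wr] wt] wprefix_trans[OF p1 p2] s] .
  thus ?thesis by (rule wstr_less_wlex_le)
qed

lemma wpow_wconc_wpow_wconc_iso: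
  assumes wu: "wo u" and we: "Well_order e" and wmu: "Well_order mu" and wt: "wo t"
  shows "word_iso (wconc (wpow u e) (wconc (wpow u mu) t)) (wconc (wpow u (ord_sum e mu)) t)"
proof -
  have wpe: "wo (wpow u e)" and wpm: "wo (wpow u mu)" and wpk: "wo (wpow u (ord_sum e mu))"
    using wo_wpow[OF wu] we wmu wo_ord_sum[OF we wmu] by blast+
  have "word_iso (wconc (wpow u e) (wconc (wpow u mu) t)) (wconc (wconc (wpow u e) (wpow u mu)) t)"
    using word_iso_sym[OF wconc_assoc_iso[OF wpe wpm wt]] .
  moreover have "word_iso (wconc (wconc (wpow u e) (wpow u mu)) t) (wconc (wpow u (ord_sum e mu)) t)"
    by (rule word_iso_wconc_cong[OF wo_wconc[OF wpe wpm] wt wpk wt wpow_ord_sum[OF wu we wmu] word_iso_refl])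
  ultimately show ?thesis by (rule word_iso_trans)
qed

lemma wpow_ord_sum_wconc_le:
  assumes wu: "wo u" and we: "Well_order e" and wmu: "Well_order mu" and wt: "wo t"
    and s: "wstr_less u t"
  shows "wlex_le (wconc (wpow u (ord_sum e mu)) t) (wconc (wpow u mu) t)"
proof -
  let ?k = "ord_sum e mu" and ?D = "Inr ` Field mu"
  have wk: "Well_order ?k" using wo_ord_sum[OF we wmu] .
  have D: "?D \<subseteq> Field ?k" unfolding Field_ord_sum by blast
  have "wlex_le (wconc (wpow u ?k) t) (wconc (wpow u (Restr ?k ?D)) t)"
    by (rule wlex_le_pow_tail[OF wu wt wk D wpow_wconc_wlex_le_of_wstr_less[OF wu wt s]])
  moreover have "word_iso (wpow u (Restr ?k ?D)) (wpow u mu)"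
    using word_iso_sym[OF word_iso_wpow_cong[OF wu wu word_iso_refl rel_iso_Inr[OF we wmu]]] .
  hence "word_iso (wconc (wpow u (Restr ?k ?D)) t) (wconc (wpow u mu) t)"
    by (rule word_iso_wconc_cong[OF wo_wpow[OF wu Well_order_Restr[OF wk]] wt wo_wpow[OF wu wmu] wt _ word_iso_refl])
  ultimately show ?thesis using wlex_le_iso_right[OF wo_wconc[OF wo_wpow[OF wu wk] wt]] by blast
qed

lemma wpow_wconc_wlex_le:
  fixes u :: "('i,'a::linorder) wrd" and v :: "('j,'a) wrd" and e :: "'e rel"
  assumes wu: "wo u" and wv: "wo v" and une: "Field (fst u) \<noteq> {}"
    and le: "wlex_le u v" and niso: "\<not> word_iso u v" and plv: "lex_le_suffixes v"
    and notpow: "\<And>b :: 'j rel. Well_order b \<Longrightarrow> Field b \<subseteq> Field (fst v) \<Longrightarrow> word_iso v (wpow u b) \<Longrightarrow> False"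
    and we: "Well_order e" and ene: "Field e \<noteq> {}"
  shows "wlex_le (wconc (wpow u e) v) v"
proof (cases "wstr_less u v")
  case True
  thus ?thesis using wpow_wconc_wlex_le_of_wstr_less[OF wu wv True we ene] by blast
next
  case False
  hence puv: "wprefix u v" using le unfolding wlex_le_def by blast
  obtain m where m: "m \<in> Field (fst u)" "\<forall>s\<in>Field (fst u). (m,s) \<in> fst u"
    using wo_min[OF wu subset_refl une] by blast
  interpret prefix_decomposition u v m
    by (unfold_locales) (use wu wv m puv niso plv notpow in auto)
  obtain mu :: "'j rel" and t :: "('j,'a) wrd"
    where mt: "Well_order mu" "wo t" "word_iso v (wconc (wpow u mu) t)" "wstr_less u t"
    using decomposition by blast
  let ?k = "ord_sum e mu"
  have wpe: "wo (wpow u e)" and wpk: "wo (wpow u ?k)" and wpm: "wo (wpow u mu)"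
    using wo_wpow[OF wu] we wo_ord_sum[OF we mt(1)] mt(1) by blast+
  have "word_iso (wconc (wpow u e) v) (wconc (wpow u e) (wconc (wpow u mu) t))"
    by (rule word_iso_wconc_cong[OF wpe wv wpe wo_wconc[OF wpm mt(2)] word_iso_refl mt(3)])
  hence "word_iso (wconc (wpow u e) v) (wconc (wpow u ?k) t)"
    using word_iso_trans wpow_wconc_wpow_wconc_iso[OF wu we mt(1,2)] by blast
  moreover have "wlex_le (wconc (wpow u ?k) t) v"
    using wlex_le_iso_right[OF wo_wconc[OF wpk mt(2)] wpow_ord_sum_wconc_le[OF wu we mt(1,2,4)]]
      word_iso_sym[OF mt(3)] by blast
  ultimately show ?thesis using wlex_le_iso_left[OF wo_wconc[OF wpk mt(2)] wo_wconc[OF wpe wv]] by blast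
qed
section \<open>Agreement with the definitions over nat-indexed words\<close>

lemma dir_image_mem:
  assumes inj: "inj_on g (Field r)" and a: "a \<in> Field r" and b: "b \<in> Field r"
  shows "(g a, g b) \<in> dir_image r g \<longleftrightarrow> (a,b) \<in> r"
proof
  assume "(g a, g b) \<in> dir_image r g"
  then obtain a' b' where ab: "(a',b') \<in> r" "g a = g a'" "g b = g b'" unfolding dir_image_def by blast
  have "a' \<in> Field r" "b' \<in> Field r" using ab(1) by (auto intro: FieldI1 FieldI2)
  hence "a' = a" "b' = b" using inj a b ab unfolding inj_on_def by metis+
  thus "(a,b) \<in> r" using ab by simp
next
  assume "(a,b) \<in> r" thus "(g a, g b) \<in> dir_image r g" unfolding dir_image_def by blast
qed

lemma nat_word_iso:
  fixes x :: "('i,'a) wrd"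
  assumes wx: "wo x" and cx: "countable (Field (fst x))"
  obtains y :: "(nat,'a) wrd" where "word y" "word_iso x y"
proof -
  let ?F = "Field (fst x)"
  let ?g = "to_nat_on ?F"
  have inj: "inj_on ?g ?F" using cx by (rule inj_on_to_nat_on)
  let ?y = "(dir_image (fst x) ?g, \<lambda>n. snd x (inv_into ?F ?g n))"
  have wy: "wo ?y" using Well_order_dir_image[OF wx inj] by simp
  have Fy: "Field (fst ?y) = ?g ` ?F" using dir_image_Field by simp
  have "word ?y" unfolding word_def using wy by simp
  moreover have "word_iso x ?y"
  proof (rule word_iso_injI[OF inj Fy[symmetric]])
    show "\<And>p q. p \<in> ?F \<Longrightarrow> q \<in> ?F \<Longrightarrow> ((p, q) \<in> fst x) = ((?g p, ?g q) \<in> fst ?y)"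
      using dir_image_mem[OF inj] by simp
    show "\<And>p. p \<in> ?F \<Longrightarrow> snd ?y (?g p) = snd x p" using inj by (simp add: inv_into_f_f)
  qed
  ultimately show ?thesis using that by blast
qed

lemma nat_rel_iso:
  fixes b :: "'o rel"
  assumes wb: "Well_order b" and cb: "countable (Field b)"
  obtains b' :: "nat rel" and g where "Well_order b'" "rel_iso b b' g"
proof -
  let ?g = "to_nat_on (Field b)"
  have inj: "inj_on ?g (Field b)" using cb by (rule inj_on_to_nat_on)
  have "Well_order (dir_image b ?g)" using Well_order_dir_image[OF wb inj] .
  moreover have "rel_iso b (dir_image b ?g) ?g"
    unfolding rel_iso_def bij_betw_def dir_image_Field using inj dir_image_mem[OF inj] by blast
  ultimately show ?thesis using that by blast
qed

lemma primitive_wpow_iso: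
  fixes x :: "('i,'a) wrd" and y :: "('k,'a) wrd" and b :: "'o rel"
  assumes px: "primitive x" and wy: "wo y" and cy: "countable (Field (fst y))"
    and wb: "Well_order b" and cb: "countable (Field b)" and i: "word_iso x (wpow y b)"
  shows "(\<exists>o1. Field b = {o1}) \<and> word_iso y x"
proof -
  obtain y' :: "(nat,'a) wrd" where y': "word y'" "word_iso y y'" using nat_word_iso[OF wy cy] by blast
  obtain b' :: "nat rel" and g where b': "Well_order b'" "rel_iso b b' g" using nat_rel_iso[OF wb cb] by blast
  have wy': "wo y'" using y'(1) unfolding word_def by blast
  have "word_iso (wpow y b) (wpow y' b')" by (rule word_iso_wpow_cong[OF wy wy' y'(2) b'(2)])
  hence "word_iso x (wpow y' b')" using i word_iso_trans by blast
  hence r: "(\<exists>o1. Field b' = {o1}) \<and> word_iso y' x" using px y'(1) b'(1) unfolding primitive_def by blast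
  have bij: "bij_betw g (Field b) (Field b')" using b'(2) unfolding rel_iso_def by blast
  then obtain o1 where "Field b' = {o1}" using r by blast
  hence "card (Field b) = 1" using bij_betw_same_card[OF bij] by simp
  hence "\<exists>o2. Field b = {o2}" by (meson card_1_singletonE)
  moreover have "word_iso y x" using word_iso_trans[OF y'(2)] r by blast
  ultimately show ?thesis by blast
qed

lemma underS_set: "{q. (q, p) \<in> r \<and> q \<noteq> p} = underS r p"
  unfolding underS_def by blast

lemma is_prefix_iff_wprefix:
  assumes wx: "wo x" and wy: "wo y"
  shows "is_prefix x y \<longleftrightarrow> wprefix x y"
proof
  assume "is_prefix x y"
  then consider "word_iso x y" | p where "p \<in> Field (fst y)" "word_iso x (wrestr y (underS (fst y) p))"
    unfolding is_prefix_def underS_set by blast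
  thus "wprefix x y"
  proof cases
    case 1 thus ?thesis by (rule word_iso_wprefix)
  next
    case 2
    have S: "underS (fst y) p \<subseteq> Field (fst y)" unfolding underS_def Field_def by blast
    have "wprefix (wrestr y (underS (fst y) p)) y"
      by (rule wprefix_wrestr_down[OF wy S]) (unfold underS_def, use wo_trans[OF wy] wo_antisym[OF wy] in blast)
    thus ?thesis using wprefix_trans[OF word_iso_wprefix[OF 2(2)]] by blast
  qed
next
  assume "wprefix x y"
  then obtain f where f: "seg_emb (fst x) (fst y) (Field (fst x)) f" "\<forall>a\<in>Field (fst x). snd y (f a) = snd x a"
    unfolding wprefix_def by blast
  have i: "word_iso (wrestr x (Field (fst x))) (wrestr y (f ` Field (fst x)))"
    by (rule wrestr_seg_emb_iso[OF wx wy f(1)]) (use f(2) in auto)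
  show "is_prefix x y"
  proof (cases "f ` Field (fst x) = Field (fst y)")
    case True
    thus ?thesis using i unfolding wrestr_Field True is_prefix_def by simp
  next
    case False
    then obtain c where c: "c \<in> Field (fst y)" "c \<notin> f ` Field (fst x)" "f ` Field (fst x) = underS (fst y) c"
      by (rule seg_emb_not_onto[OF wy f(1)])
    hence "word_iso x (wrestr y (underS (fst y) c))" using i unfolding wrestr_Field by simp
    thus ?thesis unfolding is_prefix_def underS_set using c(1) by blast
  qed
qed

lemma wletter_simps[simp]:
  "fst (wletter a) = {((),())}" "snd (wletter a) p = a" "Field (fst (wletter a)) = {()}"
  unfolding wletter_def Field_def by auto

lemma wo_wletter: "wo (wletter a)"
proof (rule Well_orderI)
  show "\<And>S. S \<subseteq> Field (fst (wletter a)) \<Longrightarrow> S \<noteq> {} \<Longrightarrow> \<exists>m\<in>S. \<forall>s\<in>S. (m, s) \<in> fst (wletter a)" by auto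
qed auto

lemma word_iso_wletter_split:
  assumes wx: "wo x" and p: "p \<in> Field (fst x)"
  shows "word_iso x (wconc (wconc (wrestr x (underS (fst x) p)) (wletter (snd x p))) (wrestr x (aboveS (fst x) p)))"
proof -
  let ?A = "wrestr x (underS (fst x) p)" and ?B = "wrestr x {p}" and ?C = "wrestr x (aboveS (fst x) p)"
  have wA: "wo ?A" and wB: "wo ?B" and wC: "wo ?C" using wo_wrestr[OF wx] by blast+
  have i1: "word_iso x (wconc ?A (wsuffix x p))" using word_iso_sym[OF wconc_underS_suffix_iso[OF wx p]] .
  have "word_iso (wconc ?B ?C) (wrestr x ({p} \<union> aboveS (fst x) p))"
  proof (rule wconc_wrestr_iso[OF wx])
    show "{p} \<inter> aboveS (fst x) p = {}" unfolding aboveS_def by blast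
    show "\<And>s t. s \<in> {p} \<Longrightarrow> t \<in> aboveS (fst x) p \<Longrightarrow> s \<in> Field (fst x) \<Longrightarrow> t \<in> Field (fst x) \<Longrightarrow> (s, t) \<in> fst x"
      unfolding aboveS_def by blast
  qed
  moreover have "{p} \<union> aboveS (fst x) p = above (fst x) p"
    unfolding above_def aboveS_def using wo_refl[OF wx p] by blast
  ultimately have i2: "word_iso (wsuffix x p) (wconc ?B ?C)" using word_iso_sym by metis
  have i3: "word_iso ?B (wletter (snd x p))"
  proof (rule word_iso_injI[of "\<lambda>_. ()"])
    have FB: "Field (fst ?B) = {p}" using Field_wrestr[OF wx] p by blast
    show "inj_on (\<lambda>_. ()) (Field (fst ?B))" unfolding FB by simp
    show "(\<lambda>_. ()) ` Field (fst ?B) = Field (fst (wletter (snd x p)))" unfolding FB by simp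
    show "\<And>pa q. pa \<in> Field (fst ?B) \<Longrightarrow> q \<in> Field (fst ?B) \<Longrightarrow> ((pa, q) \<in> fst ?B) = (((), ()) \<in> fst (wletter (snd x p)))"
      unfolding FB using wo_refl[OF wx p] by simp
    show "\<And>pa. pa \<in> Field (fst ?B) \<Longrightarrow> snd (wletter (snd x p)) () = snd ?B pa" unfolding FB by simp
  qed
  have i4: "word_iso (wconc ?B ?C) (wconc (wletter (snd x p)) ?C)"
    by (rule word_iso_wconc_cong[OF wB wC wo_wletter wC i3 word_iso_refl])
  have i5: "word_iso (wconc ?A (wsuffix x p)) (wconc ?A (wconc (wletter (snd x p)) ?C))"
    by (rule word_iso_wconc_cong[OF wA wo_wrestr[OF wx] wA wo_wconc[OF wo_wletter wC] word_iso_refl word_iso_trans[OF i2 i4]])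
  have i6: "word_iso (wconc ?A (wconc (wletter (snd x p)) ?C)) (wconc (wconc ?A (wletter (snd x p))) ?C)"
    using word_iso_sym[OF wconc_assoc_iso[OF wA wo_wletter wC]] .
  show ?thesis using word_iso_trans[OF i1 word_iso_trans[OF i5 i6]] .
qed

lemma wstr_less_wletter_first:
  assumes ab: "a < b"
  shows "wstr_less (wconc (wletter a) z) (wconc (wletter b) z')"
proof (rule wstr_lessI[where p="Inl ()" and f="\<lambda>_. Inl ()"])
  show "Inl () \<in> Field (fst (wconc (wletter a) z))" by simp
  have U: "under (fst (wconc (wletter a) z)) (Inl ()) = {Inl ()}"
  proof
    show "under (fst (wconc (wletter a) z)) (Inl ()) \<subseteq> {Inl ()}"
    proof
      fix c assume "c \<in> under (fst (wconc (wletter a) z)) (Inl ())"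
      thus "c \<in> {Inl ()}" unfolding under_def by (cases c) auto
    qed
    show "{Inl ()} \<subseteq> under (fst (wconc (wletter a) z)) (Inl ())" unfolding under_def by simp
  qed
  show "seg_emb (fst (wconc (wletter a) z)) (fst (wconc (wletter b) z')) (under (fst (wconc (wletter a) z)) (Inl ())) (\<lambda>_. Inl ())"
    unfolding U seg_emb_def
  proof (intro conjI ballI allI impI)
    fix x c assume "x \<in> {Inl ()}" "(c, Inl ()) \<in> fst (wconc (wletter b) z')"
    thus "c \<in> (\<lambda>_. Inl ()) ` {Inl ()}" by (cases c) auto
  next
    fix x c assume "x \<in> {Inl ()}" "(c, x) \<in> fst (wconc (wletter a) z)"
    thus "c \<in> {Inl ()}" by (cases c) auto
  qed auto
  show "\<And>q. q \<in> underS (fst (wconc (wletter a) z)) (Inl ()) \<Longrightarrow> snd (wconc (wletter b) z') (Inl ()) = snd (wconc (wletter a) z) q"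
  proof -
    fix q assume "q \<in> underS (fst (wconc (wletter a) z)) (Inl ())"
    hence "q \<noteq> Inl ()" "(q, Inl ()) \<in> fst (wconc (wletter a) z)" unfolding underS_def by auto
    hence False by (cases q) auto
    thus "snd (wconc (wletter b) z') (Inl ()) = snd (wconc (wletter a) z) q" by blast
  qed
  show "snd (wconc (wletter a) z) (Inl ()) < snd (wconc (wletter b) z') (Inl ())" using ab by simp
qed

lemma wstr_less_wletter:
  assumes wy: "wo y" and wz: "wo z" and wz': "wo z'" and ab: "a < b"
  shows "wstr_less (wconc (wconc y (wletter a)) z) (wconc (wconc y (wletter b)) z')"
proof -
  have s: "wstr_less (wconc y (wconc (wletter a) z)) (wconc y (wconc (wletter b) z'))"
    by (rule wstr_less_prepend[OF wy wstr_less_wletter_first[OF ab]])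
  have w1: "wo (wconc (wconc y (wletter a)) z)" using wo_wconc[OF wo_wconc[OF wy wo_wletter] wz] .
  have w2: "wo (wconc y (wconc (wletter a) z))" using wo_wconc[OF wy wo_wconc[OF wo_wletter wz]] .
  have s2: "wstr_less (wconc (wconc y (wletter a)) z) (wconc y (wconc (wletter b) z'))"
    by (rule wstr_less_iso_left[OF w2 w1 wconc_assoc_iso[OF wy wo_wletter wz] s])
  show ?thesis
    by (rule wstr_less_iso_right[OF w1 s2 word_iso_sym[OF wconc_assoc_iso[OF wy wo_wletter wz']]])
qed

lemma str_less_imp_wstr_less:
  fixes x :: "('i,'a::linorder) wrd" and x' :: "('j,'a) wrd"
  assumes wx: "wo x" and wx': "wo x'" and s: "str_less x x'"
  shows "wstr_less x x'"
proof -
  obtain y z z' :: "(nat,'a) wrd" and a b where h: "word y" "word z" "word z'" "a < b"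
    "word_iso x (wconc (wconc y (wletter a)) z)" "word_iso x' (wconc (wconc y (wletter b)) z')"
    using s unfolding str_less_def by blast
  have wy: "wo y" "wo z" "wo z'" using h unfolding word_def by blast+
  have w1: "wo (wconc (wconc y (wletter a)) z)" using wo_wconc[OF wo_wconc[OF wy(1) wo_wletter] wy(2)] .
  have "wstr_less (wconc (wconc y (wletter a)) z) (wconc (wconc y (wletter b)) z')"
    by (rule wstr_less_wletter[OF wy h(4)])
  hence "wstr_less x (wconc (wconc y (wletter b)) z')" by (rule wstr_less_iso_left[OF w1 wx h(5)])
  thus ?thesis by (rule wstr_less_iso_right[OF wx _ word_iso_sym[OF h(6)]])
qed

lemma nat_word_wletter_split:
  fixes y :: "(nat,'a) wrd"
  assumes wx: "wo x" and cx: "countable (Field (fst x))" and p: "p \<in> Field (fst x)"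
    and wy: "wo y" and y: "word_iso (wrestr x (underS (fst x) p)) y"
  obtains z :: "(nat,'a) wrd" where "word z" "word_iso x (wconc (wconc y (wletter (snd x p))) z)"
proof -
  let ?A = "wrestr x (underS (fst x) p)" and ?C = "wrestr x (aboveS (fst x) p)"
  have wA: "wo ?A" and wC: "wo ?C" using wo_wrestr[OF wx] by blast+
  obtain z :: "(nat,'a) wrd" where z: "word z" "word_iso ?C z"
    using nat_word_iso[OF wC countable_wrestr[OF wx cx]] by blast
  have wz: "wo z" using z(1) unfolding word_def by blast
  have "word_iso (wconc (wconc ?A (wletter (snd x p))) ?C) (wconc (wconc y (wletter (snd x p))) z)"
    by (rule word_iso_wconc_cong[OF wo_wconc[OF wA wo_wletter] wC wo_wconc[OF wy wo_wletter] wz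
          word_iso_wconc_cong[OF wA wo_wletter wy wo_wletter y word_iso_refl] z(2)])
  thus ?thesis using that z(1) word_iso_trans[OF word_iso_wletter_split[OF wx p]] by blast
qed

lemma wstr_less_imp_str_less:
  fixes x :: "('i,'a::linorder) wrd" and x' :: "('j,'a) wrd"
  assumes wx: "wo x" and wx': "wo x'" and cx: "countable (Field (fst x))" and cx': "countable (Field (fst x'))"
    and s: "wstr_less x x'"
  shows "str_less x x'"
proof -
  obtain p f where pf: "p \<in> Field (fst x)" "seg_emb (fst x) (fst x') (under (fst x) p) f"
    "\<And>q. q \<in> underS (fst x) p \<Longrightarrow> snd x' (f q) = snd x q" "snd x p < snd x' (f p)"
    using wstr_lessE[OF s] by blast
  have pu: "p \<in> under (fst x) p" using under_self[OF wx pf(1)] .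
  have fp: "f p \<in> Field (fst x')" using seg_embD(3)[OF pf(2) pu] .
  obtain y :: "(nat,'a) wrd" where y: "word y" "word_iso (wrestr x (underS (fst x) p)) y"
    using nat_word_iso[OF wo_wrestr[OF wx] countable_wrestr[OF wx cx]] by blast
  have wy: "wo y" using y(1) unfolding word_def by blast
  have Ucl: "\<And>a b. a \<in> underS (fst x) p \<Longrightarrow> (b,a) \<in> fst x \<Longrightarrow> b \<in> underS (fst x) p"
    unfolding underS_def using wo_trans[OF wx] wo_antisym[OF wx] by blast
  have fU: "seg_emb (fst x) (fst x') (underS (fst x) p) f"
    by (rule seg_emb_restr[OF pf(2) underS_subset_under Ucl])
  have "word_iso (wrestr x (underS (fst x) p)) (wrestr x' (f ` underS (fst x) p))"
    by (rule wrestr_seg_emb_iso[OF wx wx' fU pf(3) subset_refl])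
  hence y': "word_iso (wrestr x' (underS (fst x') (f p))) y"
    unfolding seg_emb_underS_image[OF wx pf(2) pu] using word_iso_trans[OF word_iso_sym] y(2) by blast
  obtain z :: "(nat,'a) wrd" where z: "word z" "word_iso x (wconc (wconc y (wletter (snd x p))) z)"
    by (rule nat_word_wletter_split[OF wx cx pf(1) wy y(2)])
  obtain z' :: "(nat,'a) wrd" where z': "word z'" "word_iso x' (wconc (wconc y (wletter (snd x' (f p)))) z')"
    by (rule nat_word_wletter_split[OF wx' cx' fp wy y'])
  show ?thesis unfolding str_less_def using y(1) z z' pf(4) by blast
qed

lemma str_less_iff_wstr_less:
  fixes x :: "('i,'a::linorder) wrd" and x' :: "('j,'a) wrd"
  assumes wx: "wo x" and wx': "wo x'" and cx: "countable (Field (fst x))" and cx': "countable (Field (fst x'))"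
  shows "str_less x x' \<longleftrightarrow> wstr_less x x'"
  using str_less_imp_wstr_less[OF wx wx'] wstr_less_imp_str_less[OF assms] by blast
lemma lex_le_iff_wlex_le:
  fixes x :: "('i,'a::linorder) wrd" and x' :: "('j,'a) wrd"
  assumes wx: "wo x" and wx': "wo x'" and cx: "countable (Field (fst x))" and cx': "countable (Field (fst x'))"
  shows "lex_le x x' \<longleftrightarrow> wlex_le x x'"
  unfolding lex_le_def wlex_le_def is_prefix_iff_wprefix[OF wx wx'] str_less_iff_wstr_less[OF wx wx' cx cx'] ..

lemma prime_word_iff:
  assumes "word x"
  shows "prime_word x \<longleftrightarrow> primitive x \<and> lex_le_suffixes x"
proof -
  have wx: "wo x" and cx: "countable (Field (fst x))" using assms unfolding word_def by blast+
  have "lex_le x (wsuffix x p) \<longleftrightarrow> wlex_le x (wsuffix x p)" for p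
    using lex_le_iff_wlex_le[OF wx wo_wrestr[OF wx] cx countable_wrestr[OF wx cx]] .
  thus ?thesis unfolding prime_word_def lex_le_suffixes_def above_def by simp
qed

lemma primitive_nonempty:
  assumes p: "primitive x"
  shows "Field (fst x) \<noteq> {}"
proof
  assume e: "Field (fst x) = {}"
  let ?y = "({}, \<lambda>_. undefined) :: (nat, 'b) wrd"
  have wy: "word ?y" unfolding word_def by (simp add: well_order_on_empty)
  have wb: "Well_order ({} :: nat rel)" by (simp add: well_order_on_empty)
  have F: "Field (fst (wpow ?y ({} :: nat rel))) = {}" unfolding wpow_def Field_def by simp
  have "word_iso x (wpow ?y ({} :: nat rel))" unfolding word_iso_def e F by (simp add: bij_betw_def)
  hence "\<exists>o1. Field ({} :: nat rel) = {o1}" using p wy wb unfolding primitive_def by blast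
  thus False by simp
qed

lemma prime_word_least_position:
  assumes "word x" and "prime_word x"
  obtains m where "m \<in> Field (fst x)" "\<And>c. c \<in> Field (fst x) \<Longrightarrow> (m,c) \<in> fst x"
  using wo_min[of "fst x" "Field (fst x)"] primitive_nonempty[of x] assms
  unfolding word_def prime_word_def by blast

section \<open>Suffixes and powers\<close>

lemma wprefix_suffix_iso:
  assumes wu: "wo u" and q: "q \<in> Field (fst u)" and p: "wprefix u (wsuffix u q)"
  shows "word_iso u (wsuffix u q)"
proof (rule ccontr)
  let ?t = "wsuffix u q"
  obtain f where f: "seg_emb (fst u) (fst ?t) (Field (fst u)) f" "\<forall>a\<in>Field (fst u). snd ?t (f a) = snd u a"
    using p unfolding wprefix_def by blast
  have tu: "Field (fst ?t) \<subseteq> Field (fst u)" using Field_suffix[OF wu] above_Field[of "fst u" q] by blast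
  assume "\<not> ?thesis"
  hence "f ` Field (fst u) \<noteq> Field (fst ?t)" using seg_emb_onto_word_iso[OF wu f(1) _ f(2)] by blast
  then obtain c where c: "c \<in> Field (fst ?t)" "c \<notin> f ` Field (fst u)" "f ` Field (fst u) = underS (fst ?t) c"
    by (rule seg_emb_not_onto[OF wo_wrestr[OF wu] f(1)])
  have cF: "c \<in> Field (fst u)" using c(1) tu by blast
  \<comment> \<open>an order embedding of u into itself never moves a position down\<close>
  have "(c, f c) \<in> fst u"
  proof (rule wo_strict_mono_ge[OF wu _ _ cF])
    show "\<And>a. a \<in> Field (fst u) \<Longrightarrow> f a \<in> Field (fst u)" using seg_embD(3)[OF f(1)] tu by blast
    fix a b assume ab: "(a,b) \<in> fst u" "a \<noteq> b"
    have aF: "a \<in> Field (fst u)" and bF: "b \<in> Field (fst u)" using ab(1) by (auto intro: FieldI1 FieldI2)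
    have "(f a, f b) \<in> fst ?t" using seg_embD(4)[OF f(1) aF bF] ab(1) by simp
    moreover have "f a \<noteq> f b" using seg_emb_inj[OF wu f(1) aF bF] ab(2) by blast
    ultimately show "(f a, f b) \<in> fst u \<and> f a \<noteq> f b" by simp
  qed
  moreover have "f c \<in> f ` Field (fst u)" using cF by (rule imageI)
  hence "f c \<in> underS (fst ?t) c" unfolding c(3) .
  hence "(f c, c) \<in> fst u" "f c \<noteq> c" unfolding underS_def by simp_all
  ultimately show False using wo_antisym[OF wu] by blast
qed
lemma lex_le_suffixes_iso:
  assumes wx: "wo x" and wx': "wo x'" and i: "word_iso x x'" and pl: "lex_le_suffixes x"
  shows "lex_le_suffixes x'"
  unfolding lex_le_suffixes_def
proof (intro ballI impI)
  fix p' assume p': "p' \<in> Field (fst x')" and nm: "\<exists>q. (q,p') \<in> fst x' \<and> q \<noteq> p'"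
  obtain p where p: "p \<in> Field (fst x)" "word_iso (wsuffix x' p') (wsuffix x p)"
    "(\<exists>q. (q,p') \<in> fst x' \<and> q \<noteq> p') \<longleftrightarrow> (\<exists>q. (q,p) \<in> fst x \<and> q \<noteq> p)"
    using word_iso_suffix[OF wx' wx word_iso_sym[OF i] p'] by blast
  have "wlex_le x (wsuffix x p)" using pl p(1) p(3) nm unfolding lex_le_suffixes_def by blast
  hence "wlex_le x (wsuffix x' p')" using wlex_le_iso_right[OF wx _ word_iso_sym[OF p(2)]] by blast
  thus "wlex_le x' (wsuffix x' p')" using wlex_le_iso_left[OF wx wx' word_iso_sym[OF i]] by blast
qed

lemma suffix_suffix:
  assumes wx: "wo x" and p12: "(p1,p2) \<in> fst x"
  shows "wsuffix (wsuffix x p1) p2 = wsuffix x p2"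
proof -
  have "above (fst x) p1 \<inter> above (fst (wsuffix x p1)) p2 = above (fst x) p2"
    unfolding above_def using p12 wo_trans[OF wx] by auto
  thus ?thesis unfolding wrestr_wrestr by simp
qed

lemma above_wpow_min:
  assumes wy: "wo y" and wb: "Well_order b" and o: "ob \<in> Field b" and m: "m \<in> Field (fst y)"
    and mmin: "\<And>c. c \<in> Field (fst y) \<Longrightarrow> (m,c) \<in> fst y"
  shows "above (fst (wpow y b)) (ob,m) = above b ob \<times> Field (fst y)"
proof
  show "above (fst (wpow y b)) (ob,m) \<subseteq> above b ob \<times> Field (fst y)"
  proof
    fix c assume c: "c \<in> above (fst (wpow y b)) (ob,m)"
    obtain c1 c2 where cc: "c = (c1,c2)" by (cases c)
    have "c1 \<in> Field b" "c2 \<in> Field (fst y)" "((ob,c1) \<in> b \<and> ob \<noteq> c1) \<or> ob = c1"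
      using c cc unfolding above_def by auto
    thus "c \<in> above b ob \<times> Field (fst y)" using cc wo_refl[OF wb] unfolding above_def by auto
  qed
  show "above b ob \<times> Field (fst y) \<subseteq> above (fst (wpow y b)) (ob,m)"
  proof
    fix c assume c: "c \<in> above b ob \<times> Field (fst y)"
    obtain c1 c2 where cc: "c = (c1,c2)" by (cases c)
    have "c1 \<in> Field b" using c cc unfolding above_def by (auto intro: FieldI2)
    thus "c \<in> above (fst (wpow y b)) (ob,m)" using c cc o m mmin unfolding above_def by auto
  qed
qed

lemma wpow_singleton_iso:
  assumes wy: "wo y" and wb: "Well_order b" and F: "Field b = {ob}"
  shows "word_iso y (wpow y b)"
proof (rule word_iso_injI[of "Pair ob"])
  show "inj_on (Pair ob) (Field (fst y))" by (auto simp: inj_on_def)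
  show "Pair ob ` Field (fst y) = Field (fst (wpow y b))" unfolding Field_wpow[OF wy] F by auto
  show "\<And>p q. p \<in> Field (fst y) \<Longrightarrow> q \<in> Field (fst y) \<Longrightarrow> ((p, q) \<in> fst y) = (((ob, p), ob, q) \<in> fst (wpow y b))"
    using F by simp
qed simp

lemma proper_seg_emb_not_wprefix:
  assumes wx: "wo x" and wy: "wo y" and f: "seg_emb (fst x) (fst y) (Field (fst x)) f"
    and ns: "f ` Field (fst x) \<noteq> Field (fst y)" and p: "wprefix y x"
  shows False
proof -
  obtain g where g: "seg_emb (fst y) (fst x) (Field (fst y)) g" using p unfolding wprefix_def by blast
  have sf: "f ` Field (fst x) \<subseteq> Field (fst y)"
  proof
    fix c assume "c \<in> f ` Field (fst x)"
    then obtain a where "a \<in> Field (fst x)" "c = f a" by blast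
    thus "c \<in> Field (fst y)" using seg_embD(3)[OF f] by simp
  qed
  have sg: "g ` Field (fst y) \<subseteq> Field (fst x)"
  proof
    fix c assume "c \<in> g ` Field (fst y)"
    then obtain a where "a \<in> Field (fst y)" "c = g a" by blast
    thus "c \<in> Field (fst x)" using seg_embD(3)[OF g] by simp
  qed
  have gf: "seg_emb (fst x) (fst x) (Field (fst x)) (g \<circ> f)" by (rule seg_emb_comp[OF f g sf])
  have idx: "seg_emb (fst x) (fst x) (Field (fst x)) id" by (rule seg_emb_id) (auto dest: Field_closed)
  have gfid: "\<And>a. a \<in> Field (fst x) \<Longrightarrow> g (f a) = a" using seg_emb_unique[OF wx wx gf idx] by simp
  obtain c where c: "c \<in> Field (fst y)" "c \<notin> f ` Field (fst x)" using ns sf by blast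
  have gc: "g c \<in> Field (fst x)" using sg c(1) by blast
  have fgc: "f (g c) \<in> Field (fst y)" using sf gc by blast
  have "g (f (g c)) = g c" using gfid[OF gc] .
  hence "f (g c) = c" using seg_emb_inj[OF wy g fgc c(1)] by blast
  thus False using c gc by (metis imageI)
qed

lemma wpow_suffix_iso_of_le:
  assumes wy: "wo y" and wb: "Well_order b" and my: "my \<in> Field (fst y)"
    and mymin: "\<And>c. c \<in> Field (fst y) \<Longrightarrow> (my,c) \<in> fst y"
    and p: "(ob,q) \<in> Field (fst (wpow y b))" and o': "o' \<in> Field b" "(ob,o') \<in> b" "o' \<noteq> ob"
    and plV: "lex_le_suffixes (wsuffix (wpow y b) (ob,q))"
    and YV: "wlex_le (wpow y b) (wsuffix (wpow y b) (ob,q))"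
  shows "word_iso (wsuffix (wpow y b) (ob,q)) (wpow y b)"
proof -
  let ?Y = "wpow y b" and ?V = "wsuffix (wpow y b) (ob,q)" and ?pos = "(o', my)"
  let ?Z = "wpow y (Restr b (above b o'))"
  have wY: "wo ?Y" using wo_wpow[OF wy wb] .
  have wV: "wo ?V" using wo_wrestr[OF wY] .
  have wZ: "wo ?Z" using wo_wpow[OF wy Well_order_Restr[OF wb]] .
  have q: "q \<in> Field (fst y)" using p wy by simp
  have ob: "ob \<in> Field b" using o'(2) by (rule FieldI1)
  have ppos: "((ob,q), ?pos) \<in> fst ?Y" using o' ob q my by auto
  have "((ob,q), ?pos) \<in> fst ?V" "(ob,q) \<noteq> ?pos"
    using ppos wo_refl[OF wY p] o'(3) unfolding above_def by auto
  moreover have "?pos \<in> Field (fst ?V)" using Field_suffix[OF wY] ppos unfolding above_def by blast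
  ultimately have "wlex_le ?V (wsuffix ?V ?pos)" using plV unfolding lex_le_suffixes_def by blast
  moreover have "above (fst ?Y) ?pos = above b o' \<times> Field (fst y)"
    by (rule above_wpow_min[OF wy wb o'(1) my mymin])
  hence "wsuffix ?V ?pos = ?Z"
    unfolding suffix_suffix[OF wY ppos] using wrestr_wpow[OF wy wb above_Field] by simp
  moreover have "wlex_le ?Z ?Y" by (rule wprefix_wlex_le[OF wprefix_wpow_Restr[OF wy wb above_Field]])
  ultimately have "wlex_le ?V ?Y" using wlex_le_trans[OF wV wZ wY] by simp
  thus ?thesis using wlex_le_antisym[OF wV wY _ YV] by blast
qed

lemma lex_le_suffixes_wpow_no_last_block:
  assumes wy: "wo y" and wb: "Well_order b" and my: "my \<in> Field (fst y)"
    and mymin: "\<And>c. c \<in> Field (fst y) \<Longrightarrow> (my,c) \<in> fst y"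
    and pl: "lex_le_suffixes (wpow y b)" and ob: "ob \<in> Field b" and two: "Field b \<noteq> {ob}"
  shows "\<exists>o'\<in>Field b. (ob,o') \<in> b \<and> o' \<noteq> ob"
proof (rule ccontr)
  assume "\<not> ?thesis"
  hence obmax: "\<And>o'. o' \<in> Field b \<Longrightarrow> (ob,o') \<in> b \<Longrightarrow> o' = ob" by blast
  let ?Y = "wpow y b" and ?pos = "(ob, my)"
  have wY: "wo ?Y" using wo_wpow[OF wy wb] .
  obtain b0 where b0: "b0 \<in> Field b" "\<forall>s\<in>Field b. (b0,s) \<in> b"
    using wo_min[OF wb subset_refl] ob by blast
  have b0ob: "b0 \<noteq> ob" using two b0 obmax ob by blast
  have posY: "?pos \<in> Field (fst ?Y)" using ob my wy by simp
  have "((b0,my), ?pos) \<in> fst ?Y" "(b0,my) \<noteq> ?pos" using b0 ob my b0ob by auto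
  hence "wlex_le ?Y (wsuffix ?Y ?pos)" using pl posY unfolding lex_le_suffixes_def by blast
  moreover have "above b ob = {ob}"
    using obmax wo_refl[OF wb ob] unfolding above_def by (blast intro: FieldI2)
  hence "wsuffix ?Y ?pos = wpow y (Restr b {ob})"
    using above_wpow_min[OF wy wb ob my mymin] wrestr_wpow[OF wy wb, of "{ob}"] ob by simp
  moreover have "word_iso y (wpow y (Restr b {ob}))"
    using wpow_singleton_iso[OF wy Well_order_Restr[OF wb]] Field_Restr_of_subset[OF wb] ob by blast
  ultimately have Yy: "wlex_le ?Y y" using wlex_le_iso_right[OF wY] word_iso_sym by metis
  have fo: "seg_emb (fst y) (fst ?Y) (Field (fst y)) (Pair b0)"
    by (rule seg_emb_first_block[OF wy wb b0(1)]) (use b0(2) in blast)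
  hence "wprefix y ?Y" unfolding wprefix_def by auto
  hence "wprefix ?Y y" using wlex_le_antisym[OF wY wy Yy] wprefix_wlex_le word_iso_wprefix by blast
  moreover have "Pair b0 ` Field (fst y) \<noteq> Field (fst ?Y)" using posY b0ob by auto
  ultimately show False using proper_seg_emb_not_wprefix[OF wy wY fo] by blast
qed

section \<open>Powers of u followed by v\<close>

locale power_concat =
  fixes u :: "('i,'a::linorder) wrd" and v :: "('j,'a) wrd" and al :: "'o rel" and m :: 'i
  assumes word_u: "word u" and word_v: "word v" and prime_u: "prime_word u" and prime_v: "prime_word v"
    and u_less_v: "lex_less u v" and wa: "Well_order al"
    and m: "m \<in> Field (fst u)" and mmin: "\<And>c. c \<in> Field (fst u) \<Longrightarrow> (m,c) \<in> fst u"
begin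

lemma wu: "wo u" and cu: "countable (Field (fst u))" using word_u unfolding word_def by blast+
lemma wv: "wo v" and cv: "countable (Field (fst v))" using word_v unfolding word_def by blast+
lemma plu: "lex_le_suffixes u" using prime_u prime_word_iff[OF word_u] by blast
lemma plv: "lex_le_suffixes v" and pv: "primitive v" using prime_v prime_word_iff[OF word_v] by blast+
lemma vne: "Field (fst v) \<noteq> {}" using primitive_nonempty[OF pv] .

lemma luv: "wlex_le u v" and niso: "\<not> word_iso u v"
  using u_less_v lex_le_iff_wlex_le[OF wu wv cu cv] unfolding lex_less_def by blast+

lemma notpow:
  assumes "Well_order b" and "Field b \<subseteq> Field (fst v)" and "word_iso v (wpow u b)"
  shows False
  using primitive_wpow_iso[OF pv wu cu assms(1) countable_subset[OF assms(2) cv] assms(3)] niso by blast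

abbreviation "P \<equiv> wpow u al"
abbreviation "W \<equiv> wconc (wpow u al) v"

lemma wP: "wo P" using wo_wpow[OF wu wa] .
lemma wW: "wo W" using wo_wconc[OF wP wv] .
lemma une: "Field (fst u) \<noteq> {}" using m by blast
lemma FP: "Field (fst P) = Field al \<times> Field (fst u)" using Field_wpow[OF wu] .

lemma wpow_wconc_v_le_v:
  fixes r :: "'o rel"
  assumes "Well_order r" "Field r \<noteq> {}"
  shows "wlex_le (wconc (wpow u r) v) v"
  by (rule wpow_wconc_wlex_le[OF wu wv une luv niso plv _ assms], rule notpow, assumption+)

lemma W_le_v: "wlex_le W v"
proof (cases "Field al = {}")
  case False thus ?thesis using wpow_wconc_v_le_v[OF wa] by blast
next
  case True
  have "word_iso v W"
  proof (rule word_iso_injI[of Inr])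
    show "inj_on Inr (Field (fst v))" by simp
    show "Inr ` Field (fst v) = Field (fst W)" unfolding Field_wconc FP True by simp
  qed auto
  thus ?thesis using word_iso_wlex_le word_iso_sym by blast
qed

lemma above_W_Inr:
  assumes r: "r \<in> Field (fst v)"
  shows "above (fst W) (Inr r) = Inr ` above (fst v) r"
proof
  show "above (fst W) (Inr r) \<subseteq> Inr ` above (fst v) r"
  proof
    fix c assume "c \<in> above (fst W) (Inr r)"
    thus "c \<in> Inr ` above (fst v) r" unfolding above_def by (cases c) auto
  qed
  show "Inr ` above (fst v) r \<subseteq> above (fst W) (Inr r)" unfolding above_def by auto
qed

lemma W_le_suffix_Inr:
  assumes r: "r \<in> Field (fst v)"
  shows "wlex_le W (wsuffix W (Inr r))"
proof -
  have i1: "word_iso (wsuffix v r) (wsuffix W (Inr r))"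
    using wrestr_Inr_iso[OF wP wv] unfolding above_W_Inr[OF r] .
  have ws: "wo (wsuffix v r)" using wo_wrestr[OF wv] .
  have "wlex_le W (wsuffix v r)"
  proof (cases "\<exists>q. (q,r) \<in> fst v \<and> q \<noteq> r")
    case True
    hence "wlex_le v (wsuffix v r)" using plv r unfolding lex_le_suffixes_def by blast
    thus ?thesis using wlex_le_trans[OF wW wv ws W_le_v] by blast
  next
    case False
    hence "wsuffix v r = v" using suffix_min[OF wv r] by blast
    thus ?thesis using W_le_v by simp
  qed
  thus ?thesis using wlex_le_iso_right[OF wW _ i1] by blast
qed

lemma above_W_Inl:
  assumes ob: "ob \<in> Field al" and q: "q \<in> Field (fst u)"
  shows "above (fst W) (Inl (ob,q)) = Inl ` ({ob} \<times> above (fst u) q) \<union> (Inl ` (aboveS al ob \<times> Field (fst u)) \<union> Inr ` Field (fst v))"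
proof
  show "above (fst W) (Inl (ob,q)) \<subseteq> Inl ` ({ob} \<times> above (fst u) q) \<union> (Inl ` (aboveS al ob \<times> Field (fst u)) \<union> Inr ` Field (fst v))"
  proof
    fix c assume c: "c \<in> above (fst W) (Inl (ob,q))"
    show "c \<in> Inl ` ({ob} \<times> above (fst u) q) \<union> (Inl ` (aboveS al ob \<times> Field (fst u)) \<union> Inr ` Field (fst v))"
    proof (cases c)
      case (Inl a)
      obtain a1 a2 where a: "a = (a1,a2)" by (cases a)
      have "a1 \<in> Field al" "a2 \<in> Field (fst u)" "((ob,a1) \<in> al \<and> ob \<noteq> a1) \<or> (ob = a1 \<and> (q,a2) \<in> fst u)"
        using c Inl a unfolding above_def by auto
      thus ?thesis using Inl a unfolding above_def aboveS_def by auto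
    next
      case (Inr b)
      thus ?thesis using c unfolding above_def by auto
    qed
  qed
  show "Inl ` ({ob} \<times> above (fst u) q) \<union> (Inl ` (aboveS al ob \<times> Field (fst u)) \<union> Inr ` Field (fst v)) \<subseteq> above (fst W) (Inl (ob,q))"
  proof
    fix c assume c: "c \<in> Inl ` ({ob} \<times> above (fst u) q) \<union> (Inl ` (aboveS al ob \<times> Field (fst u)) \<union> Inr ` Field (fst v))"
    show "c \<in> above (fst W) (Inl (ob,q))"
    proof (cases c)
      case (Inl a)
      obtain a1 a2 where a: "a = (a1,a2)" by (cases a)
      consider "a1 = ob" "(q,a2) \<in> fst u" | "(ob,a1) \<in> al" "ob \<noteq> a1" "a2 \<in> Field (fst u)"
        using c Inl a unfolding above_def aboveS_def by auto
      thus ?thesis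
      proof cases
        case 1
        have "a2 \<in> Field (fst u)" using 1(2) by (rule FieldI2)
        thus ?thesis using 1 Inl a ob q unfolding above_def by auto
      next
        case 2
        have "a1 \<in> Field al" using 2(1) by (rule FieldI2)
        thus ?thesis using 2 Inl a ob q unfolding above_def by auto
      qed
    next
      case (Inr b)
      thus ?thesis using c ob q wu unfolding above_def by auto
    qed
  qed
qed

lemma above_W_Inl_m:
  assumes ob: "ob \<in> Field al"
  shows "above (fst W) (Inl (ob,m)) = Inl ` (above al ob \<times> Field (fst u)) \<union> Inr ` Field (fst v)"
proof -
  have "above (fst u) m = Field (fst u)" using mmin m unfolding above_def by (auto intro: FieldI2)
  moreover have "above al ob = {ob} \<union> aboveS al ob"
    using wo_refl[OF wa ob] unfolding above_def aboveS_def by blast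
  ultimately show ?thesis unfolding above_W_Inl[OF ob m] by blast
qed
lemma W_le_suffix_block_start:
  assumes ob: "ob \<in> Field al"
  shows "wlex_le W (wsuffix W (Inl (ob,m)))"
proof -
  let ?D = "above al ob"
  let ?S = "Inl ` (?D \<times> Field (fst u)) :: ('o \<times> 'i + 'j) set" and ?T = "Inr ` Field (fst v) :: ('o \<times> 'i + 'j) set"
  have D: "?D \<subseteq> Field al" by (rule above_Field)
  have j1: "word_iso (wconc (wrestr W ?S) (wrestr W ?T)) (wrestr W (?S \<union> ?T))"
  proof (rule wconc_wrestr_iso[OF wW])
    show "?S \<inter> ?T = {}" by blast
    fix s t assume s: "s \<in> ?S" and t: "t \<in> ?T" and sF: "s \<in> Field (fst W)" and tF: "t \<in> Field (fst W)"
    obtain s1 where s1: "s = Inl s1" using s by blast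
    obtain t1 where t1: "t = Inr t1" using t by blast
    show "(s,t) \<in> fst W" using sF tF s1 t1 by simp
  qed
  have e1: "wrestr P (?D \<times> Field (fst u)) = wpow u (Restr al ?D)" by (rule wrestr_wpow[OF wu wa D])
  have j2: "word_iso (wpow u (Restr al ?D)) (wrestr W ?S)"
    using wrestr_Inl_iso[OF wP wv, of "?D \<times> Field (fst u)"] unfolding e1 .
  have j3: "word_iso v (wrestr W ?T)"
    using wrestr_Inr_iso[OF wP wv, of "Field (fst v)"] unfolding wrestr_Field .
  have wD: "Well_order (Restr al ?D)" using Well_order_Restr[OF wa] .
  have j4: "word_iso (wconc (wpow u (Restr al ?D)) v) (wconc (wrestr W ?S) (wrestr W ?T))"
    by (rule word_iso_wconc_cong[OF wo_wpow[OF wu wD] wv wo_wrestr[OF wW] wo_wrestr[OF wW] j2 j3])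
  have j: "word_iso (wconc (wpow u (Restr al ?D)) v) (wsuffix W (Inl (ob,m)))"
    using word_iso_trans[OF j4 j1] unfolding above_W_Inl_m[OF ob] .
  have M: "wlex_le W (wconc (wpow u (Restr al ?D)) v)"
    by (rule wlex_le_pow_tail[OF wu wv wa D wpow_wconc_v_le_v])
  show ?thesis using wlex_le_iso_right[OF wW M j] .
qed

lemma wprefix_block_suffix:
  assumes ob: "ob \<in> Field al" and q: "q \<in> Field (fst u)"
  shows "wprefix (wsuffix u q) (wsuffix W (Inl (ob,q)))"
proof -
  let ?t = "wsuffix u q" and ?T = "wsuffix W (Inl (ob,q))"
  let ?h = "\<lambda>c. Inl (ob,c) :: 'o \<times> 'i + 'j"
  have Ft: "Field (fst ?t) = above (fst u) q" using Field_suffix[OF wu] .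
  have FT: "Field (fst ?T) = above (fst W) (Inl (ob,q))" using Field_suffix[OF wW] .
  have inA: "\<And>c. c \<in> above (fst u) q \<Longrightarrow> ?h c \<in> above (fst W) (Inl (ob,q)) \<and> c \<in> Field (fst u)"
  proof -
    fix c assume c: "c \<in> above (fst u) q"
    hence qc: "(q,c) \<in> fst u" unfolding above_def by blast
    hence cF: "c \<in> Field (fst u)" by (rule FieldI2)
    thus "?h c \<in> above (fst W) (Inl (ob,q)) \<and> c \<in> Field (fst u)" using qc ob q unfolding above_def by simp
  qed
  show ?thesis
    unfolding wprefix_def
  proof (intro exI conjI)
    show "seg_emb (fst ?t) (fst ?T) (Field (fst ?t)) ?h"
    proof (rule seg_embI)
      show "\<And>a. a \<in> Field (fst ?t) \<Longrightarrow> ?h a \<in> Field (fst ?T)" using inA Ft FT by blast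
    next
      fix a b assume a: "a \<in> Field (fst ?t)" and b: "b \<in> Field (fst ?t)"
      have a': "?h a \<in> above (fst W) (Inl (ob,q))" "a \<in> Field (fst u)" using inA a Ft by auto
      have b': "?h b \<in> above (fst W) (Inl (ob,q))" "b \<in> Field (fst u)" using inA b Ft by auto
      show "(a,b) \<in> fst ?t \<longleftrightarrow> (?h a, ?h b) \<in> fst ?T" using a b Ft a' b' ob by auto
    next
      fix a c assume a: "a \<in> Field (fst ?t)" and c: "(c, ?h a) \<in> fst ?T"
      have cA: "c \<in> above (fst W) (Inl (ob,q))" and cW: "(c, ?h a) \<in> fst W" using c by auto
      show "c \<in> ?h ` Field (fst ?t)"
      proof (cases c)
        case (Inl c2)
        have h1: "((ob,q), c2) \<in> fst P" using cA Inl unfolding above_def by simp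
        have h2: "(c2, (ob,a)) \<in> fst P" using cW Inl by simp
        have sb: "fst c2 = ob \<and> (q, snd c2) \<in> fst u \<and> (snd c2, a) \<in> fst u" by (rule wpow_between_same_block[OF wa h1 h2])
        hence "snd c2 \<in> Field (fst ?t)" using Ft unfolding above_def by blast
        moreover have "c = ?h (snd c2)" using Inl sb by (metis prod.collapse)
        ultimately show ?thesis by blast
      next
        case (Inr c2) thus ?thesis using cW by simp
      qed
    qed
    show "\<forall>a\<in>Field (fst ?t). snd ?T (?h a) = snd ?t a" by simp
  qed
qed

lemma suffix_Inl_iso:
  assumes ob: "ob \<in> Field al" and q: "q \<in> Field (fst u)"
  shows "word_iso (wsuffix W (Inl (ob,q)))
           (wconc (wsuffix u q) (wrestr W (Inl ` (aboveS al ob \<times> Field (fst u)) \<union> Inr ` Field (fst v))))"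
proof -
  let ?S = "Inl ` ({ob} \<times> above (fst u) q) :: ('o \<times> 'i + 'j) set"
  let ?R = "Inl ` (aboveS al ob \<times> Field (fst u)) \<union> Inr ` Field (fst v) :: ('o \<times> 'i + 'j) set"
  have j1: "word_iso (wconc (wrestr W ?S) (wrestr W ?R)) (wrestr W (?S \<union> ?R))"
  proof (rule wconc_wrestr_iso[OF wW])
    show "?S \<inter> ?R = {}" unfolding aboveS_def by blast
    fix s t assume s: "s \<in> ?S" and t: "t \<in> ?R" and sF: "s \<in> Field (fst W)" and tF: "t \<in> Field (fst W)"
    obtain s2 where s2: "s = Inl (ob,s2)" "s2 \<in> above (fst u) q" using s by blast
    have s2F: "s2 \<in> Field (fst u)" using s2(2) above_Field[of "fst u" q] by blast
    show "(s,t) \<in> fst W"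
    proof (cases t)
      case (Inl t1)
      obtain t11 t12 where tt: "t1 = (t11,t12)" by (cases t1)
      have "(ob,t11) \<in> al" "ob \<noteq> t11" "t12 \<in> Field (fst u)" using t Inl tt unfolding aboveS_def by auto
      moreover have "t11 \<in> Field al" using \<open>(ob,t11) \<in> al\<close> by (rule FieldI2)
      ultimately show ?thesis using s2 Inl tt ob s2F by auto
    next
      case (Inr t1)
      thus ?thesis using sF tF s2 by simp
    qed
  qed
  have j2: "word_iso (wsuffix u q) (wrestr P ({ob} \<times> above (fst u) q))"
    by (rule wrestr_block_iso[OF wu wa ob])
  have j3: "word_iso (wrestr P ({ob} \<times> above (fst u) q)) (wrestr W ?S)"
    by (rule wrestr_Inl_iso[OF wP wv])
  have j4: "word_iso (wconc (wrestr W ?S) (wrestr W ?R)) (wconc (wsuffix u q) (wrestr W ?R))"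
    by (rule word_iso_wconc_cong[OF wo_wrestr[OF wW] wo_wrestr[OF wW] wo_wrestr[OF wu] wo_wrestr[OF wW]
          word_iso_sym[OF word_iso_trans[OF j2 j3]] word_iso_refl])
  show ?thesis using word_iso_trans[OF word_iso_sym[OF j1[unfolded above_W_Inl[OF ob q, symmetric]]] j4] .
qed

lemma W_le_suffix_Inl:
  assumes ob: "ob \<in> Field al" and q: "q \<in> Field (fst u)" and nm: "\<exists>q'. (q',q) \<in> fst u \<and> q' \<noteq> q"
  shows "wlex_le W (wsuffix W (Inl (ob,q)))"
proof -
  let ?t = "wsuffix u q" and ?T = "wsuffix W (Inl (ob,q))"
  have wt: "wo ?t" using wo_wrestr[OF wu] .
  have wT: "wo ?T" using wo_wrestr[OF wW] .
  have l: "wlex_le u ?t" using plu q nm unfolding lex_le_suffixes_def by blast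
  have ane: "Field al \<noteq> {}" using ob by blast
  obtain m0 where m0: "m0 \<in> Field al" "\<forall>s\<in>Field al. (m0,s) \<in> al" using wo_min[OF wa subset_refl ane] by blast
  have puW: "wprefix u W" using wprefix_trans[OF wprefix_first_block[OF wu wa m0(1)] wprefix_wconc[OF wP wv]] m0(2) by blast
  show ?thesis using l unfolding wlex_le_def
  proof
    assume s: "wstr_less u ?t"
    have "wstr_less W ?t" by (rule wprefix_wstr_less_left[OF wu wW puW s])
    hence "wstr_less W ?T" using wstr_less_wprefix_right[OF wW _ wprefix_block_suffix[OF ob q]] by blast
    thus "wprefix W ?T \<or> wstr_less W ?T" by blast
  next
    assume p: "wprefix u ?t"
    have iu: "word_iso u ?t" by (rule wprefix_suffix_iso[OF wu q p])
    let ?R = "wrestr W (Inl ` (aboveS al ob \<times> Field (fst u)) \<union> Inr ` Field (fst v))"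
    have wR: "wo ?R" using wo_wrestr[OF wW] .
    have k1: "word_iso ?T (wconc ?t ?R)" by (rule suffix_Inl_iso[OF ob q])
    have "wsuffix u m = u" by (rule suffix_least[OF wu m mmin])
    hence k2: "word_iso (wsuffix W (Inl (ob,m))) (wconc u ?R)"
      using suffix_Inl_iso[OF ob m] by simp
    have k3: "word_iso (wconc ?t ?R) (wconc u ?R)"
      by (rule word_iso_wconc_cong[OF wt wR wu wR word_iso_sym[OF iu] word_iso_refl])
    have k: "word_iso (wsuffix W (Inl (ob,m))) ?T"
      using word_iso_trans[OF k2 word_iso_sym[OF word_iso_trans[OF k1 k3]]] .
    have "wlex_le W ?T" using wlex_le_iso_right[OF wW W_le_suffix_block_start[OF ob] k] .
    thus "wprefix W ?T \<or> wstr_less W ?T" unfolding wlex_le_def .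
  qed
qed

theorem lex_le_suffixes_W: "lex_le_suffixes W"
  unfolding lex_le_suffixes_def
proof (intro ballI impI)
  fix p assume p: "p \<in> Field (fst W)" and nm: "\<exists>q. (q,p) \<in> fst W \<and> q \<noteq> p"
  show "wlex_le W (wsuffix W p)"
  proof (cases p)
    case (Inl a)
    obtain ob q where a: "a = (ob,q)" by (cases a)
    have ob: "ob \<in> Field al" and q: "q \<in> Field (fst u)" using p Inl a FP by auto
    show ?thesis
    proof (cases "\<exists>q'. (q',q) \<in> fst u \<and> q' \<noteq> q")
      case True thus ?thesis using W_le_suffix_Inl[OF ob q] Inl a by simp
    next
      case False
      hence "q = m" using mmin[OF q] by blast
      thus ?thesis using W_le_suffix_block_start[OF ob] Inl a by simp
    qed
  next
    case (Inr r)
    have "r \<in> Field (fst v)" using p Inr by simp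
    thus ?thesis using W_le_suffix_Inr Inr by simp
  qed
qed

lemma v_iso_suffix_W:
  assumes r: "r \<in> Field (fst v)" and rmin: "\<forall>s\<in>Field (fst v). (r,s) \<in> fst v"
  shows "word_iso v (wsuffix W (Inr r))"
proof -
  have "wsuffix v r = v" using suffix_least[OF wv r] rmin by blast
  thus ?thesis using wrestr_Inr_iso[OF wP wv, of "above (fst v) r"] unfolding above_W_Inr[OF r] by simp
qed

theorem primitive_W: "primitive W"
  unfolding primitive_def
proof (intro allI impI)
  fix y :: "(nat,'a) wrd" and b :: "nat rel"
  assume h: "word y \<and> Well_order b \<and> word_iso W (wpow y b)"
  have wy: "wo y" using h unfolding word_def by blast
  have wb: "Well_order b" and iWY: "word_iso W (wpow y b)" using h by blast+
  let ?Y = "wpow y b"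
  have wY: "wo ?Y" using wo_wpow[OF wy wb] .
  obtain r where r: "r \<in> Field (fst v)" "\<forall>s\<in>Field (fst v). (r,s) \<in> fst v"
    using wo_min[OF wv subset_refl vne] by blast
  have rW: "Inr r \<in> Field (fst W)" using r(1) by simp
  obtain p where p: "p \<in> Field (fst ?Y)" "word_iso (wsuffix W (Inr r)) (wsuffix ?Y p)"
    using word_iso_suffix[OF wW wY iWY rW] by blast
  obtain ob q where obq: "p = (ob,q)" by (cases p)
  have ob: "ob \<in> Field b" and q: "q \<in> Field (fst y)" using p(1) obq wy by auto
  obtain my where my: "my \<in> Field (fst y)" "\<forall>s\<in>Field (fst y). (my,s) \<in> fst y"
    using wo_min[OF wy subset_refl] q by blast
  have vV: "word_iso v (wsuffix ?Y p)" using word_iso_trans[OF v_iso_suffix_W[OF r] p(2)] .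
  show "(\<exists>o1. Field b = {o1}) \<and> word_iso y W"
  proof (cases "Field b = {ob}")
    case True
    thus ?thesis using word_iso_trans[OF wpow_singleton_iso[OF wy wb True] word_iso_sym[OF iWY]] by blast
  next
    case False
    have "lex_le_suffixes ?Y" using lex_le_suffixes_iso[OF wW wY iWY lex_le_suffixes_W] .
    then obtain o' where o': "o' \<in> Field b" "(ob,o') \<in> b" "o' \<noteq> ob"
      using lex_le_suffixes_wpow_no_last_block[OF wy wb my(1) _ _ ob False] my(2) by blast
    have plV: "lex_le_suffixes (wsuffix ?Y p)" using lex_le_suffixes_iso[OF wv wo_wrestr[OF wY] vV plv] .
    have "wlex_le W (wsuffix ?Y p)" using wlex_le_iso_right[OF wW W_le_v vV] .
    hence YV: "wlex_le ?Y (wsuffix ?Y p)" using wlex_le_iso_left[OF wW wY word_iso_sym[OF iWY]] by blast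
    have "word_iso (wsuffix ?Y p) ?Y"
      using wpow_suffix_iso_of_le[OF wy wb my(1) _ _ o'] p(1) plV YV my(2) unfolding obq by blast
    then obtain o1 where "Field b = {o1}" using word_iso_trans[OF vV] pv h unfolding primitive_def by blast
    thus ?thesis using False ob by auto
  qed
qed

lemma word_W:
  assumes "countable (Field al)"
  shows "word W"
  unfolding word_def using wW countable_wconc[OF countable_wpow[OF wu assms cu] cv] by blast

theorem prime_word_W:
  assumes "countable (Field al)"
  shows "prime_word W"
  using primitive_W lex_le_suffixes_W prime_word_iff[OF word_W[OF assms]] by blast

end

theorem mainTheorem4:
  fixes u :: "('i, 'a::{linorder, finite}) wrd" and v :: "('j, 'a) wrd" and \<alpha> :: "'o rel"
  assumes "word u" and "word v"
    and "prime_word u" and "prime_word v"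
    and "lex_less u v"
    and "Well_order \<alpha>" and "countable (Field \<alpha>)"
  shows "word (wconc (wpow u \<alpha>) v) \<and> prime_word (wconc (wpow u \<alpha>) v)"
proof -
  obtain m where "m \<in> Field (fst u)" "\<And>c. c \<in> Field (fst u) \<Longrightarrow> (m,c) \<in> fst u"
    using prime_word_least_position[OF assms(1,3)] by blast
  then interpret power_concat u v \<alpha> m using assms by unfold_locales
  show ?thesis using word_W[OF assms(7)] prime_word_W[OF assms(7)] by blast
qed

end
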